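(* In the process algebra $\mathcal{G}$ described in the context, if the instance INST has a solution then $X\simeq Y$.
   Context: Process algebras: a triple $(\mathcal{C},\mathcal{A},\Delta)$ of finitely many constants, actions (including silent $\tau$) and rules $X\stackrel{\ell}{\longrightarrow}P$. Processes: $P::=\epsilon\mid X\mid PP'\mid P\|P'$, sequential composition associative, parallel composition associative and commutative, $\epsilon$ a unit for both. Semantics: rules of $\Delta$; if $P\stackrel{\ell}{\longrightarrow}P'$ then $PQ\stackrel{\ell}{\longrightarrow}P'Q$, $P\|Q\stackrel{\ell}{\longrightarrow}P'\|Q$, $Q\|P\stackrel{\ell}{\longrightarrow}Q\|P'$. $\Longrightarrow$ is the reflexive transitive closure of $\stackrel{\tau}{\longrightarrow}$. Branching bisimilarity $\simeq$ is the largest relation $\mathcal{B}$ such that whenever $P\mathcal{B}Q$ and $P\stackrel{\ell}{\longrightarrow}P'$, either $Q\Longrightarrow Q''\stackrel{\ell}{\longrightarrow}Q'$ with $P\mathcal{B}Q''$ and $P'\mathcal{B}Q'$, or $\ell=\tau$ and $P'\mathcal{B}Q$; and symmetrically. The algebra $\mathcal{G}$: fix a finite alphabet $\Sigma$ with $|\Sigma|\ge2$ and a Post Correspondence instance $\mathrm{INST}=\{(u_1,v_1),\dots,(u_n,v_n)\}$ with $u_k,v_k\in\Sigma^{+}$; INST has a solution if there exist $m\ge1$ and $i_1,\dots,i_m\in\{1,\dots,n\}$ with $u_{i_1}\cdots u_{i_m}=v_{i_1}\cdots v_{i_m}$. Let $\mathcal{N}=\{1,\dots,n\}$. Actions: $\{\lambda_U,\lambda_V,\lambda_D,\lambda_I,\lambda_S,\lambda_Z\}\cup\mathcal{N}\cup\Sigma\cup\{\tau\}$.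 Constants: $X,Y,Z,I,S,C,C',D,G,G',G_u,G_v,G_v'$, $U_k,V_k$ ($k\in\mathcal{N}$), and $W(\omega,k),W(\omega,0)$ for $k\in\mathcal{N}$ and $\omega$ a (possibly empty) suffix of $u_k$ or of $v_k$; $\mathcal{W}$ is the set of these $W$-constants. Rules (with $k$ ranging over $\mathcal{N}$, $a$ over $\Sigma$, $W$ over $\mathcal{W}$): $X\stackrel{\lambda_U}{\longrightarrow}D\|G_v$, $X\stackrel{\tau}{\longrightarrow}D$, $Y\stackrel{\tau}{\longrightarrow}D$, $D\stackrel{\tau}{\longrightarrow}D\|G_u$, $D\stackrel{\lambda_D}{\longrightarrow}C$; $G_u\stackrel{\tau}{\longrightarrow}G_uU_k$, $G_u\stackrel{\lambda_U}{\longrightarrow}G_vU_k$, $G_u\stackrel{\tau}{\longrightarrow}G_v'$, $G_v'\stackrel{\tau}{\longrightarrow}G_v'V_k$, $G_v'\stackrel{\tau}{\longrightarrow}Z$; $G_v\stackrel{\tau}{\longrightarrow}G_vV_k$, $G_v\stackrel{\tau}{\longrightarrow}\epsilon$, $G_v\stackrel{\lambda_V}{\longrightarrow}Z$, $Z\stackrel{\tau}{\longrightarrow}\epsilon$, $Z\stackrel{\lambda_Z}{\longrightarrow}\epsilon$; $C\stackrel{\lambda_I}{\longrightarrow}I$, $C\stackrel{\lambda_S}{\longrightarrow}S$, $C\stackrel{\tau}{\longrightarrow}C\|G$, $C\stackrel{\tau}{\longrightarrow}C\|G_v$; $G\stackrel{\tau}{\longrightarrow}GU_k$, $G\stackrel{\tau}{\longrightarrow}GV_k$,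 $G\stackrel{\tau}{\longrightarrow}\epsilon$; $I\stackrel{\lambda_I}{\longrightarrow}C'$, $I\stackrel{k}{\longrightarrow}I$, $S\stackrel{\lambda_S}{\longrightarrow}C'$, $S\stackrel{a}{\longrightarrow}S$, $C'\stackrel{\tau}{\longrightarrow}C'\|G'$, $C'\stackrel{\tau}{\longrightarrow}\epsilon$; $G'\stackrel{\tau}{\longrightarrow}G'U_k$, $G'\stackrel{\tau}{\longrightarrow}G'V_k$, $G'\stackrel{\tau}{\longrightarrow}G'W$, $G'\stackrel{\tau}{\longrightarrow}G_v$, $G'\stackrel{\tau}{\longrightarrow}Z$; $U_k\stackrel{\tau}{\longrightarrow}W(u_k,k)$, $V_k\stackrel{\tau}{\longrightarrow}W(v_k,k)$; $W(a\omega,k)\stackrel{a}{\longrightarrow}W(\omega,k)$, $W(a\omega,0)\stackrel{a}{\longrightarrow}W(\omega,0)$, $W(\omega,k)\stackrel{k}{\longrightarrow}W(\omega,0)$, $W(a\omega,k)\stackrel{\tau}{\longrightarrow}W(\omega,k)$, $W(a\omega,0)\stackrel{\tau}{\longrightarrow}W(\omega,0)$, $W(\omega,k)\stackrel{\tau}{\longrightarrow}W(\omega,0)$, $W(\epsilon,0)\stackrel{\tau}{\longrightarrow}\epsilon$. *)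

theory Defs
  imports Main "HOL-Library.Sublist"
begin

datatype 'c proc = Eps | Cst 'c | Seq "'c proc" "'c proc" | Par "'c proc" "'c proc"

inductive scong :: "'c proc \<Rightarrow> 'c proc \<Rightarrow> bool" where
  refl: "scong P P"
| sym: "scong P Q \<Longrightarrow> scong Q P"
| trans: "scong P Q \<Longrightarrow> scong Q R \<Longrightarrow> scong P R"
| seq_ctx: "scong P P' \<Longrightarrow> scong Q Q' \<Longrightarrow> scong (Seq P Q) (Seq P' Q')"
| par_ctx: "scong P P' \<Longrightarrow> scong Q Q' \<Longrightarrow> scong (Par P Q) (Par P' Q')"
| seq_assoc: "scong (Seq (Seq P Q) R) (Seq P (Seq Q R))"
| par_assoc: "scong (Par (Par P Q) R) (Par P (Par Q R))"
| par_comm: "scong (Par P Q) (Par Q P)"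
| seq_unitl: "scong (Seq Eps P) P"
| seq_unitr: "scong (Seq P Eps) P"
| par_unitl: "scong (Par Eps P) P"
| par_unitr: "scong (Par P Eps) P"

inductive step :: "('c \<Rightarrow> 'a \<Rightarrow> 'c proc \<Rightarrow> bool) \<Rightarrow> 'c proc \<Rightarrow> 'a \<Rightarrow> 'c proc \<Rightarrow> bool"
  for Delta where
  rule: "Delta X l P \<Longrightarrow> step Delta (Cst X) l P"
| seq: "step Delta P l P' \<Longrightarrow> step Delta (Seq P Q) l (Seq P' Q)"
| parl: "step Delta P l P' \<Longrightarrow> step Delta (Par P Q) l (Par P' Q)"
| parr: "step Delta P l P' \<Longrightarrow> step Delta (Par Q P) l (Par Q P')"
| cong: "scong P P0 \<Longrightarrow> step Delta P0 l Q0 \<Longrightarrow> scong Q0 Q \<Longrightarrow> step Delta P l Q"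

definition weak_tau :: "('c \<Rightarrow> 'a \<Rightarrow> 'c proc \<Rightarrow> bool) \<Rightarrow> 'a \<Rightarrow> 'c proc \<Rightarrow> 'c proc \<Rightarrow> bool" where
  "weak_tau Delta tau = (\<lambda>P Q. step Delta P tau Q)\<^sup>*\<^sup>*"

definition branching_bisim_rel ::
  "('c \<Rightarrow> 'a \<Rightarrow> 'c proc \<Rightarrow> bool) \<Rightarrow> 'a \<Rightarrow> ('c proc \<Rightarrow> 'c proc \<Rightarrow> bool) \<Rightarrow> bool" where
  "branching_bisim_rel Delta tau B \<longleftrightarrow>
     (\<forall>P Q l P'. B P Q \<and> step Delta P l P' \<longrightarrow>
        (\<exists>Q'' Q'. weak_tau Delta tau Q Q'' \<and> step Delta Q'' l Q' \<and> B P Q'' \<and> B P' Q')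
        \<or> (l = tau \<and> B P' Q)) \<and>
     (\<forall>P Q l Q'. B P Q \<and> step Delta Q l Q' \<longrightarrow>
        (\<exists>P'' P'. weak_tau Delta tau P P'' \<and> step Delta P'' l P' \<and> B P'' Q \<and> B P' Q')
        \<or> (l = tau \<and> B P Q'))"

definition branching_bisimilar ::
  "('c \<Rightarrow> 'a \<Rightarrow> 'c proc \<Rightarrow> bool) \<Rightarrow> 'a \<Rightarrow> 'c proc \<Rightarrow> 'c proc \<Rightarrow> bool" where
  "branching_bisimilar Delta tau P Q \<longleftrightarrow> (\<exists>B. branching_bisim_rel Delta tau B \<and> B P Q)"

datatype 's act = Tau | LU | LV | LD | LI | LS | LZ | Idx nat | Sym 's

datatype 's const = X | Y | Z | I | S | C | C' | D | G | G' | Gu | Gv | Gv'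
  | U nat | V nat | W "'s list" nat

type_synonym 's pcp = "('s list \<times> 's list) list"

definition idx :: "'s pcp \<Rightarrow> nat set" where
  "idx inst = {1..length inst}"

definition uw :: "'s pcp \<Rightarrow> nat \<Rightarrow> 's list" where
  "uw inst k = fst (inst ! (k - 1))"

definition vw :: "'s pcp \<Rightarrow> nat \<Rightarrow> 's list" where
  "vw inst k = snd (inst ! (k - 1))"

definition Wset :: "'s pcp \<Rightarrow> 's const set" where
  "Wset inst = {W w j | w j k. k \<in> idx inst \<and> (j = k \<or> j = 0) \<and>
                  (suffix w (uw inst k) \<or> suffix w (vw inst k))}"

definition pcp_solvable :: "'s pcp \<Rightarrow> bool" where
  "pcp_solvable inst \<longleftrightarrow> (\<exists>is. is \<noteq> [] \<and> set is \<subseteq> idx inst \<and>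
      concat (map (uw inst) is) = concat (map (vw inst) is))"

inductive rulesG :: "'s set \<Rightarrow> 's pcp \<Rightarrow> 's const \<Rightarrow> 's act \<Rightarrow> 's const proc \<Rightarrow> bool"
  for Sig inst where
  "rulesG Sig inst X LU (Par (Cst D) (Cst Gv))"
| "rulesG Sig inst X Tau (Cst D)"
| "rulesG Sig inst Y Tau (Cst D)"
| "rulesG Sig inst D Tau (Par (Cst D) (Cst Gu))"
| "rulesG Sig inst D LD (Cst C)"
| "k \<in> idx inst \<Longrightarrow> rulesG Sig inst Gu Tau (Seq (Cst Gu) (Cst (U k)))"
| "k \<in> idx inst \<Longrightarrow> rulesG Sig inst Gu LU (Seq (Cst Gv) (Cst (U k)))"
| "rulesG Sig inst Gu Tau (Cst Gv')"
| "k \<in> idx inst \<Longrightarrow> rulesG Sig inst Gv' Tau (Seq (Cst Gv') (Cst (V k)))"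
| "rulesG Sig inst Gv' Tau (Cst Z)"
| "k \<in> idx inst \<Longrightarrow> rulesG Sig inst Gv Tau (Seq (Cst Gv) (Cst (V k)))"
| "rulesG Sig inst Gv Tau Eps"
| "rulesG Sig inst Gv LV (Cst Z)"
| "rulesG Sig inst Z Tau Eps"
| "rulesG Sig inst Z LZ Eps"
| "rulesG Sig inst C LI (Cst I)"
| "rulesG Sig inst C LS (Cst S)"
| "rulesG Sig inst C Tau (Par (Cst C) (Cst G))"
| "rulesG Sig inst C Tau (Par (Cst C) (Cst Gv))"
| "k \<in> idx inst \<Longrightarrow> rulesG Sig inst G Tau (Seq (Cst G) (Cst (U k)))"
| "k \<in> idx inst \<Longrightarrow> rulesG Sig inst G Tau (Seq (Cst G) (Cst (V k)))"
| "rulesG Sig inst G Tau Eps"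
| "rulesG Sig inst I LI (Cst C')"
| "k \<in> idx inst \<Longrightarrow> rulesG Sig inst I (Idx k) (Cst I)"
| "rulesG Sig inst S LS (Cst C')"
| "a \<in> Sig \<Longrightarrow> rulesG Sig inst S (Sym a) (Cst S)"
| "rulesG Sig inst C' Tau (Par (Cst C') (Cst G'))"
| "rulesG Sig inst C' Tau Eps"
| "k \<in> idx inst \<Longrightarrow> rulesG Sig inst G' Tau (Seq (Cst G') (Cst (U k)))"
| "k \<in> idx inst \<Longrightarrow> rulesG Sig inst G' Tau (Seq (Cst G') (Cst (V k)))"
| "w \<in> Wset inst \<Longrightarrow> rulesG Sig inst G' Tau (Seq (Cst G') (Cst w))"
| "rulesG Sig inst G' Tau (Cst Gv)"
| "rulesG Sig inst G' Tau (Cst Z)"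
| "k \<in> idx inst \<Longrightarrow> rulesG Sig inst (U k) Tau (Cst (W (uw inst k) k))"
| "k \<in> idx inst \<Longrightarrow> rulesG Sig inst (V k) Tau (Cst (W (vw inst k) k))"
| "k \<in> idx inst \<Longrightarrow> a \<in> Sig \<Longrightarrow> W (a # w) k \<in> Wset inst \<Longrightarrow>
     rulesG Sig inst (W (a # w) k) (Sym a) (Cst (W w k))"
| "a \<in> Sig \<Longrightarrow> W (a # w) 0 \<in> Wset inst \<Longrightarrow>
     rulesG Sig inst (W (a # w) 0) (Sym a) (Cst (W w 0))"
| "k \<in> idx inst \<Longrightarrow> W w k \<in> Wset inst \<Longrightarrow>
     rulesG Sig inst (W w k) (Idx k) (Cst (W w 0))"
| "k \<in> idx inst \<Longrightarrow> a \<in> Sig \<Longrightarrow> W (a # w) k \<in> Wset inst \<Longrightarrow>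
     rulesG Sig inst (W (a # w) k) Tau (Cst (W w k))"
| "a \<in> Sig \<Longrightarrow> W (a # w) 0 \<in> Wset inst \<Longrightarrow>
     rulesG Sig inst (W (a # w) 0) Tau (Cst (W w 0))"
| "k \<in> idx inst \<Longrightarrow> W w k \<in> Wset inst \<Longrightarrow>
     rulesG Sig inst (W w k) Tau (Cst (W w 0))"
| "W [] 0 \<in> Wset inst \<Longrightarrow> rulesG Sig inst (W [] 0) Tau Eps"

end

theory Submission
  imports Defs "HOL-Library.Multiset"
begin

text \<open>
  Up to structural congruence, every process reachable from \<open>X\<close> or \<open>Y\<close> is a parallel
  composition of threads: single control constants (\<open>X, Y, D, C, I, S, C'\<close>) and sequential words
  over the remaining constants. Processes are therefore represented by multisets of words, and a
  branching bisimulation on these configurations lifts to processes.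

  The relation is organised by phases, one for each of the control constants \<open>D, C, I, S, C'\<close>.
  Two configurations with the same control constant are related when their threads have shapes
  admissible in that phase and the multisets of their views coincide, where the view of a thread
  keeps only what the phase can still observe. A step of an invisible thread is answered by a
  thread forked afresh from a generator; a step of a visible thread by a partner with the same
  view, possibly after silent unfolding. Before the control constant switches phase, the other
  configuration dissolves its invisible threads and regenerates those of the first one.

  \<open>X\<close> and \<open>Y\<close> are related through phase \<open>D\<close>. Their only difference is the step
  \<open>X \<rightarrow> D \<parallel> Gv\<close>; \<open>Y\<close> answers it by letting a generator build the \<open>U\<close>-constants of a PCP
  solution and then firing \<open>LU\<close>, which yields a \<open>Gv\<close>-thread whose \<open>u\<close>-string equals the
  \<open>v\<close>-string of its indices. Phase \<open>D\<close> cannot tell such a thread from the bare \<open>Gv\<close>.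
\<close>

section \<open>Flat semantics of processes\<close>

text \<open>\<open>flat P\<close> reads \<open>P\<close> as a multiset of threads, i.e. of nonempty sequential words.\<close>

definition seq_mset :: "'c list multiset \<Rightarrow> 'c list multiset \<Rightarrow> 'c list multiset option" where
  "seq_mset x y = (if x = {#} then Some y else if y = {#} then Some x else
     if (\<exists>w w'. x = {#w#} \<and> y = {#w'#}) then Some {#(THE w. x = {#w#}) @ (THE w. y = {#w#})#} else None)"

fun seq_flat :: "'c list multiset option \<Rightarrow> 'c list multiset option \<Rightarrow> 'c list multiset option" where
  "seq_flat (Some x) (Some y) = seq_mset x y"
| "seq_flat _ _ = None"

fun par_flat :: "'c list multiset option \<Rightarrow> 'c list multiset option \<Rightarrow> 'c list multiset option" where
  "par_flat (Some x) (Some y) = Some (x + y)"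
| "par_flat _ _ = None"

fun flat :: "'c proc \<Rightarrow> 'c list multiset option" where
  "flat Eps = Some {#}"
| "flat (Cst c) = Some {#[c]#}"
| "flat (Par P Q) = par_flat (flat P) (flat Q)"
| "flat (Seq P Q) = seq_flat (flat P) (flat Q)"

lemma seq_mset_single[simp]: "seq_mset {#w#} {#w'#} = Some {#w @ w'#}"
  by (simp add: seq_mset_def)

lemma seq_mset_empty1[simp]: "seq_mset {#} y = Some y" by (simp add: seq_mset_def)
lemma seq_mset_empty2[simp]: "seq_mset x {#} = Some x" by (simp add: seq_mset_def)

lemma seq_mset_cases:
  assumes "seq_mset x y = Some z"
  shows "(x = {#} \<and> z = y) \<or> (y = {#} \<and> z = x) \<or> (\<exists>w w'. x = {#w#} \<and> y = {#w'#} \<and> z = {#w@w'#})"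
  using assms by (auto simp: seq_mset_def split: if_splits)

lemma seq_mset_none:
  assumes "x \<noteq> {#}" "y \<noteq> {#}" "\<not>(\<exists>w w'. x = {#w#} \<and> y = {#w'#})"
  shows "seq_mset x y = None"
  using assms by (auto simp: seq_mset_def)

lemma seq_flat_None2[simp]: "seq_flat x None = None"
  by (cases x) auto

lemma par_flat_None2[simp]: "par_flat x None = None"
  by (cases x) auto

lemma seq_flat_unitl[simp]: "seq_flat (Some {#}) y = y"
  by (cases y) auto
lemma seq_flat_unitr[simp]: "seq_flat x (Some {#}) = x"
  by (cases x) auto
lemma par_flat_unitl[simp]: "par_flat (Some {#}) y = y"
  by (cases y) auto
lemma par_flat_unitr[simp]: "par_flat x (Some {#}) = x"
  by (cases x) auto

lemma par_flat_comm: "par_flat x y = par_flat y x"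
  by (cases x; cases y) (auto simp: add.commute)

lemma par_flat_assoc: "par_flat (par_flat x y) z = par_flat x (par_flat y z)"
  by (cases x; cases y; cases z) (auto simp: add.assoc)

lemma seq_mset_assoc:
  "seq_flat (seq_mset x y) (Some z) = seq_flat (Some x) (seq_mset y z)"
proof (cases "x = {#}")
  case True then show ?thesis by simp
next
  case x: False
  show ?thesis
  proof (cases "y = {#}")
    case True then show ?thesis by simp
  next
    case y: False
    show ?thesis
    proof (cases "z = {#}")
      case True then show ?thesis by simp
    next
      case z: False
      show ?thesis
      proof (cases "(\<exists>w. x = {#w#}) \<and> (\<exists>w. y = {#w#}) \<and> (\<exists>w. z = {#w#})")
        case True then show ?thesis by auto
      next
        case False
        have "seq_flat (seq_mset x y) (Some z) = None"
        proof (cases "seq_mset x y")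
          case (Some a)
          then have "(\<exists>w w'. x = {#w#} \<and> y = {#w'#} \<and> a = {#w@w'#})"
            using seq_mset_cases[OF Some] x y by auto
          then obtain w w' where "a = {#w@w'#}" "x = {#w#}" "y = {#w'#}" by blast
          then show ?thesis using Some False z by (auto intro!: seq_mset_none)
        qed simp
        moreover have "seq_flat (Some x) (seq_mset y z) = None"
        proof (cases "seq_mset y z")
          case (Some a)
          then have "(\<exists>w w'. y = {#w#} \<and> z = {#w'#} \<and> a = {#w@w'#})"
            using seq_mset_cases[OF Some] y z by auto
          then obtain w w' where "a = {#w@w'#}" "y = {#w#}" "z = {#w'#}" by blast
          then show ?thesis using Some False x by (auto intro!: seq_mset_none)
        qed simp
        ultimately show ?thesis by simp
      qed
    qed
  qed
qed

lemma seq_flat_assoc: "seq_flat (seq_flat x y) z = seq_flat x (seq_flat y z)"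
  by (cases x; cases y; cases z) (auto simp: seq_mset_assoc)

lemma par_flat_lcomm: "par_flat x (par_flat y z) = par_flat y (par_flat x z)"
  by (cases x; cases y; cases z) (auto simp: add_ac)

lemma scong_flat: "scong P Q \<Longrightarrow> flat P = flat Q"
  by (induction rule: scong.induct) (auto simp: seq_flat_assoc par_flat_assoc par_flat_comm par_flat_lcomm)

fun thread_mset :: "'c list \<Rightarrow> 'c list multiset" where
  "thread_mset [] = {#}"
| "thread_mset w = {#w#}"

lemma flat_nonempty: "flat P = Some m \<Longrightarrow> [] \<notin># m"
proof (induction P arbitrary: m)
  case (Seq P Q)
  then show ?case
    by (cases "flat P"; cases "flat Q") (auto dest!: seq_mset_cases)
next
  case (Par P Q)
  then show ?case by (cases "flat P"; cases "flat Q") auto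
qed auto

lemma seq_flat_thread_mset: "seq_flat (Some (thread_mset a)) (Some (thread_mset b)) = Some (thread_mset (a @ b))"
  by (cases a; cases b) auto

lemma step_flat:
  assumes "step Delta P l P'" "flat P = Some m"
  shows "\<exists>t m0 R. m = add_mset t m0 \<and> t \<noteq> [] \<and> Delta (hd t) l R \<and>
           flat P' = par_flat (Some m0) (seq_flat (flat R) (Some (thread_mset (tl t))))"
  using assms
proof (induction arbitrary: m rule: step.induct)
  case (rule X l P)
  then show ?case by (intro exI[of _ "[X]"] exI[of _ "{#}"] exI[of _ P]) auto
next
  case (seq P l P' Q)
  from seq.prems obtain x y where x: "flat P = Some x" and y: "flat Q = Some y" and xy: "seq_mset x y = Some m"
    by (cases "flat P"; cases "flat Q") auto
  from seq.IH[OF x] obtain t m0 R where t: "x = add_mset t m0" "t \<noteq> []" "Delta (hd t) l R"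
     "flat P' = par_flat (Some m0) (seq_flat (flat R) (Some (thread_mset (tl t))))" by blast
  from seq_mset_cases[OF xy] t(1) consider "y = {#}" "m = x" | w w' where "x = {#w#}" "y = {#w'#}" "m = {#w@w'#}"
    by auto
  then show ?case
  proof cases
    case 1
    then show ?thesis using t y by (intro exI[of _ t] exI[of _ m0] exI[of _ R]) auto
  next
    case 2
    then have "t = w" "m0 = {#}" using t(1) by auto
    have "flat (Seq P' Q) = seq_flat (seq_flat (flat R) (Some (thread_mset (tl w)))) (Some {#w'#})"
      using t(4) y \<open>m0 = {#}\<close> 2 \<open>t = w\<close> by simp
    also have "\<dots> = seq_flat (flat R) (Some (thread_mset (tl w @ w')))"
      using seq_flat_thread_mset[of "tl w" w'] seq_flat_assoc[of "flat R" "Some (thread_mset (tl w))" "Some {#w'#}"]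
        flat_nonempty[OF y] 2
      by (cases w') auto
    finally show ?thesis using 2 t \<open>t = w\<close>
      by (intro exI[of _ "w @ w'"] exI[of _ "{#}"] exI[of _ R]) auto
  qed
next
  case (parl P l P' Q)
  from parl.prems obtain x y where x: "flat P = Some x" and y: "flat Q = Some y" and xy: "m = x + y"
    by (cases "flat P"; cases "flat Q") auto
  from parl.IH[OF x] obtain t m0 R where t: "x = add_mset t m0" "t \<noteq> []" "Delta (hd t) l R"
     "flat P' = par_flat (Some m0) (seq_flat (flat R) (Some (thread_mset (tl t))))" by blast
  show ?case using t xy y
    by (intro exI[of _ t] exI[of _ "m0 + y"] exI[of _ R])
       (cases "seq_flat (flat R) (Some (thread_mset (tl t)))"; auto simp: add_ac)
next
  case (parr P l P' Q)
  from parr.prems obtain x y where x: "flat P = Some x" and y: "flat Q = Some y" and xy: "m = y + x"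
    by (cases "flat P"; cases "flat Q") auto
  from parr.IH[OF x] obtain t m0 R where t: "x = add_mset t m0" "t \<noteq> []" "Delta (hd t) l R"
     "flat P' = par_flat (Some m0) (seq_flat (flat R) (Some (thread_mset (tl t))))" by blast
  show ?case using t xy y
    by (intro exI[of _ t] exI[of _ "m0 + y"] exI[of _ R])
       (cases "seq_flat (flat R) (Some (thread_mset (tl t)))"; auto simp: add_ac)
next
  case (cong P P0 l Q0 Q)
  then show ?case using scong_flat by metis
qed

lemma scong_trans_calc[trans]: "scong P Q \<Longrightarrow> scong Q R \<Longrightarrow> scong P R"
  by (rule scong.trans)

fun word_proc :: "'c list \<Rightarrow> 'c proc" where
  "word_proc [] = Eps"
| "word_proc (c # w) = Seq (Cst c) (word_proc w)"

lemma flat_wterm: "flat (word_proc w) = Some (thread_mset w)"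
proof (induction w)
  case (Cons c w) then show ?case by (cases w) auto
qed auto

lemma word_proc_app: "scong (Seq (word_proc a) (word_proc b)) (word_proc (a @ b))"
proof (induction a)
  case Nil then show ?case by (simp add: scong.seq_unitl)
next
  case (Cons c a)
  have "scong (Seq (Seq (Cst c) (word_proc a)) (word_proc b)) (Seq (Cst c) (Seq (word_proc a) (word_proc b)))"
    by (rule scong.seq_assoc)
  also have "scong \<dots> (Seq (Cst c) (word_proc (a @ b)))"
    using Cons by (intro scong.seq_ctx scong.refl)
  finally show ?case by simp
qed
  

lemma flat_empty_scong: "flat A = Some {#} \<Longrightarrow> scong A Eps"
proof (induction A)
  case Eps show ?case by (rule scong.refl)
next
  case (Cst x) then show ?case by simp
next
  case (Seq P Q)
  then obtain x y where "flat P = Some x" "flat Q = Some y" "seq_mset x y = Some {#}"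
    by (cases "flat P"; cases "flat Q") auto
  then have "x = {#}" "y = {#}" by (auto dest!: seq_mset_cases)
  then have "scong (Seq P Q) (Seq Eps Eps)" using Seq \<open>flat P = _\<close> \<open>flat Q = _\<close>
    by (auto intro: scong.seq_ctx)
  also have "scong (Seq Eps Eps) Eps" by (rule scong.seq_unitl)
  finally show ?case .
next
  case (Par P Q)
  then obtain x y where "flat P = Some x" "flat Q = Some y" "x + y = {#}"
    by (cases "flat P"; cases "flat Q") auto
  then have "x = {#}" "y = {#}" by auto
  then have "scong (Par P Q) (Par Eps Eps)" using Par \<open>flat P = _\<close> \<open>flat Q = _\<close>
    by (auto intro: scong.par_ctx)
  also have "scong (Par Eps Eps) Eps" by (rule scong.par_unitl)
  finally show ?case .
qed

lemma scong_split_thread: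
  "flat Q = Some (add_mset t m0) \<Longrightarrow> \<exists>P0. flat P0 = Some m0 \<and> scong Q (Par (word_proc t) P0)"
proof (induction Q arbitrary: t m0)
  case Eps then show ?case by simp
next
  case (Cst c)
  then have "t = [c]" "m0 = {#}" by auto
  have "scong (Cst c) (Seq (Cst c) Eps)" by (rule scong.sym, rule scong.seq_unitr)
  also have "scong \<dots> (Par (Seq (Cst c) Eps) Eps)" by (rule scong.sym, rule scong.par_unitr)
  finally show ?case using \<open>t = _\<close> \<open>m0 = _\<close> by (intro exI[of _ Eps]) auto
next
  case (Par A B)
  then obtain x y where x: "flat A = Some x" and y: "flat B = Some y" and xy: "x + y = add_mset t m0"
    by (cases "flat A"; cases "flat B") auto
  have "t \<in># x + y" using xy by simp
  then consider "t \<in># x" | "t \<in># y" by auto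
  then show ?case
  proof cases
    case 1
    then obtain x0 where x0: "x = add_mset t x0" by (metis multi_member_split)
    from Par.IH(1)[of t x0] x x0 obtain A0 where A0: "flat A0 = Some x0" "scong A (Par (word_proc t) A0)" by auto
    have "scong (Par A B) (Par (Par (word_proc t) A0) B)" using A0 by (auto intro: scong.par_ctx scong.refl)
    also have "scong \<dots> (Par (word_proc t) (Par A0 B))" by (rule scong.par_assoc)
    finally show ?thesis using A0 y xy x0 by (intro exI[of _ "Par A0 B"]) auto
  next
    case 2
    then obtain y0 where y0: "y = add_mset t y0" by (metis multi_member_split)
    from Par.IH(2)[of t y0] y y0 obtain B0 where B0: "flat B0 = Some y0" "scong B (Par (word_proc t) B0)" by auto
    have "scong (Par A B) (Par A (Par (word_proc t) B0))" using B0 by (auto intro: scong.par_ctx scong.refl)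
    also have "scong \<dots> (Par (Par A (word_proc t)) B0)" by (rule scong.sym, rule scong.par_assoc)
    also have "scong \<dots> (Par (Par (word_proc t) A) B0)" by (intro scong.par_ctx scong.par_comm scong.refl)
    also have "scong \<dots> (Par (word_proc t) (Par A B0))" by (rule scong.par_assoc)
    finally show ?thesis using B0 x xy y0 by (intro exI[of _ "Par A B0"]) auto
  qed
next
  case (Seq A B)
  then obtain x y where x: "flat A = Some x" and y: "flat B = Some y" and xy: "seq_mset x y = Some (add_mset t m0)"
    by (cases "flat A"; cases "flat B") auto
  from seq_mset_cases[OF xy] consider "x = {#}" "y = add_mset t m0" | "y = {#}" "x = add_mset t m0"
    | w w' where "x = {#w#}" "y = {#w'#}" "add_mset t m0 = {#w@w'#}" by auto
  then show ?case
  proof cases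
    case 1
    from Seq.IH(2)[of t m0] y 1 obtain B0 where B0: "flat B0 = Some m0" "scong B (Par (word_proc t) B0)" by auto
    have "scong (Seq A B) (Seq Eps B)" using flat_empty_scong[of A] x 1 by (auto intro: scong.seq_ctx scong.refl)
    also have "scong \<dots> B" by (rule scong.seq_unitl)
    also have "scong \<dots> (Par (word_proc t) B0)" by (rule B0)
    finally show ?thesis using B0 by auto
  next
    case 2
    from Seq.IH(1)[of t m0] x 2 obtain A0 where A0: "flat A0 = Some m0" "scong A (Par (word_proc t) A0)" by auto
    have "scong (Seq A B) (Seq A Eps)" using flat_empty_scong[of B] y 2 by (auto intro: scong.seq_ctx scong.refl)
    also have "scong \<dots> A" by (rule scong.seq_unitr)
    also have "scong \<dots> (Par (word_proc t) A0)" by (rule A0)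
    finally show ?thesis using A0 by auto
  next
    case 3
    then have tstep: "t = w @ w'" "m0 = {#}" by (auto simp: add_mset_eq_single)
    from Seq.IH(1)[of w "{#}"] x 3 obtain A0 where A0: "flat A0 = Some {#}" "scong A (Par (word_proc w) A0)" by auto
    from Seq.IH(2)[of w' "{#}"] y 3 obtain B0 where B0: "flat B0 = Some {#}" "scong B (Par (word_proc w') B0)" by auto
    have "scong A (Par (word_proc w) Eps)" using A0 flat_empty_scong[OF A0(1)]
      by (meson scong.par_ctx scong.refl scong.trans)
    then have a: "scong A (word_proc w)" by (meson scong.par_unitr scong.trans)
    have "scong B (Par (word_proc w') Eps)" using B0 flat_empty_scong[OF B0(1)]
      by (meson scong.par_ctx scong.refl scong.trans)
    then have b: "scong B (word_proc w')" by (meson scong.par_unitr scong.trans)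
    have "scong (Seq A B) (Seq (word_proc w) (word_proc w'))" using a b by (rule scong.seq_ctx)
    also have "scong \<dots> (word_proc (w @ w'))" by (rule word_proc_app)
    also have "scong \<dots> (Par (word_proc (w@w')) Eps)" by (rule scong.sym, rule scong.par_unitr)
    finally show ?thesis using tstep by (intro exI[of _ Eps]) auto
  qed
qed

lemma step_fire_thread:
  assumes "flat Q = Some (add_mset (c # rest) m0)" "Delta c l R"
  shows "\<exists>Q'. step Delta Q l Q' \<and> flat Q' = par_flat (seq_flat (flat R) (Some (thread_mset rest))) (Some m0)"
proof -
  from scong_split_thread[OF assms(1)] obtain P0 where P0: "flat P0 = Some m0" "scong Q (Par (word_proc (c#rest)) P0)" by blast
  have "step Delta (Cst c) l R" using assms(2) by (rule step.rule)
  then have "step Delta (Seq (Cst c) (word_proc rest)) l (Seq R (word_proc rest))" by (rule step.seq)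
  then have "step Delta (Par (Seq (Cst c) (word_proc rest)) P0) l (Par (Seq R (word_proc rest)) P0)" by (rule step.parl)
  then have "step Delta Q l (Par (Seq R (word_proc rest)) P0)"
    using P0 by (auto intro: step.cong scong.refl)
  then show ?thesis using P0 by (auto simp: flat_wterm)
qed

fun rhs_word :: "'c proc \<Rightarrow> 'c list" where
  "rhs_word Eps = []"
| "rhs_word (Cst c) = [c]"
| "rhs_word (Seq P Q) = rhs_word P @ rhs_word Q"
| "rhs_word (Par P Q) = []"

section \<open>Algebras whose reachable processes stay flat\<close>

locale flat_algebra =
  fixes Delta :: "'c \<Rightarrow> 'a \<Rightarrow> 'c proc \<Rightarrow> bool" and is_ctrl :: "'c \<Rightarrow> bool" and tau :: 'a
  assumes nonctrl_rule_flat: "Delta c l R \<Longrightarrow> \<not> is_ctrl c \<Longrightarrow> flat R = Some (thread_mset (rhs_word R))"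
    and nonctrl_rule_rhs: "Delta c l R \<Longrightarrow> \<not> is_ctrl c \<Longrightarrow> d \<in> set (rhs_word R) \<Longrightarrow> \<not> is_ctrl d"
    and ctrl_rule_flat: "Delta c l R \<Longrightarrow> is_ctrl c \<Longrightarrow>
      \<exists>r. flat R = Some r \<and> (\<forall>t\<in>#r. t \<noteq> [] \<and> (\<forall>d\<in>set t. is_ctrl d \<longrightarrow> t = [d]))"
begin

definition wf_conf :: "'c list multiset \<Rightarrow> bool" where
  "wf_conf m \<longleftrightarrow> (\<forall>t\<in>#m. t \<noteq> [] \<and> (\<forall>c\<in>set t. is_ctrl c \<longrightarrow> t = [c]))"

definition tstep :: "'c list \<Rightarrow> 'a \<Rightarrow> 'c list \<Rightarrow> bool" where
  "tstep t l t' \<longleftrightarrow> (\<exists>c rest R. t = c # rest \<and> \<not> is_ctrl c \<and> Delta c l R \<and> t' = rhs_word R @ rest)"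

definition cstep :: "'c \<Rightarrow> 'a \<Rightarrow> 'c list multiset \<Rightarrow> bool" where
  "cstep c l r \<longleftrightarrow> is_ctrl c \<and> (\<exists>R. Delta c l R \<and> flat R = Some r)"

definition mstep :: "'c list multiset \<Rightarrow> 'a \<Rightarrow> 'c list multiset \<Rightarrow> bool" where
  "mstep m l m' \<longleftrightarrow> (\<exists>t t' m0. m = add_mset t m0 \<and> tstep t l t' \<and> m' = m0 + thread_mset t') \<or>
                    (\<exists>c r m0. m = add_mset [c] m0 \<and> cstep c l r \<and> m' = m0 + r)"

abbreviation mtaus :: "'c list multiset \<Rightarrow> 'c list multiset \<Rightarrow> bool" where
  "mtaus \<equiv> (\<lambda>a b. mstep a tau b)\<^sup>*\<^sup>*"

definition matched ::
  "('c list multiset \<Rightarrow> 'c list multiset \<Rightarrow> bool) \<Rightarrow> 'c list multiset \<Rightarrow> 'c list multiset \<Rightarrow> 'a \<Rightarrow> 'c list multiset \<Rightarrow> bool"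
  where "matched R m n l m' \<longleftrightarrow>
    (\<exists>n'' n'. mtaus n n'' \<and> mstep n'' l n' \<and> R m n'' \<and> R m' n') \<or> (l = tau \<and> R m' n)"

definition mbisim :: "('c list multiset \<Rightarrow> 'c list multiset \<Rightarrow> bool) \<Rightarrow> bool" where
  "mbisim R \<longleftrightarrow> (\<forall>m n. R m n \<longrightarrow> wf_conf m \<and> wf_conf n \<and> R n m) \<and>
     (\<forall>m n l m'. R m n \<and> mstep m l m' \<longrightarrow> matched R m n l m')"

lemma matched_mono: "matched R m n l m' \<Longrightarrow> (\<And>a b. R a b \<Longrightarrow> R' a b) \<Longrightarrow> matched R' m n l m'"
  unfolding matched_def by blast

lemma step_mstep:
  assumes "step Delta P l P'" "flat P = Some m" "wf_conf m"
  shows "\<exists>m'. flat P' = Some m' \<and> mstep m l m'"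
proof -
  from step_flat[OF assms(1,2)] obtain t m0 R where t: "m = add_mset t m0" "t \<noteq> []" "Delta (hd t) l R"
    "flat P' = par_flat (Some m0) (seq_flat (flat R) (Some (thread_mset (tl t))))" by blast
  obtain c rest where tc: "t = c # rest" using t(2) by (cases t) auto
  show ?thesis
  proof (cases "is_ctrl c")
    case True
    then have "rest = []" using assms(3) t(1) tc unfolding wf_conf_def by auto
    from ctrl_rule_flat[of c l R] True t(3) tc obtain r where "flat R = Some r" by auto
    then show ?thesis using t tc \<open>rest = []\<close> True
      by (auto simp: mstep_def cstep_def intro!: exI[of _ "m0 + r"]) (metis add.commute)
  next
    case False
    have "flat P' = Some (m0 + thread_mset (rhs_word R @ rest))"
      using t(3,4) tc False nonctrl_rule_flat[of c l R] seq_flat_thread_mset[of "rhs_word R" rest]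
      by (simp add: add.commute)
    moreover have "tstep t l (rhs_word R @ rest)" using t tc False unfolding tstep_def by auto
    ultimately show ?thesis using t(1) unfolding mstep_def by blast
  qed
qed

lemma mstep_step:
  assumes "flat Q = Some n" "mstep n l n'"
  shows "\<exists>Q'. step Delta Q l Q' \<and> flat Q' = Some n'"
  using assms(2) unfolding mstep_def
proof (elim disjE exE conjE)
  fix t t' m0
  assume a: "n = add_mset t m0" "tstep t l t'" "n' = m0 + thread_mset t'"
  then obtain c rest R where c: "t = c # rest" "\<not> is_ctrl c" "Delta c l R" "t' = rhs_word R @ rest"
    unfolding tstep_def by blast
  from step_fire_thread[of Q c rest m0 Delta l R] assms(1) a c obtain Q' where
    "step Delta Q l Q'" "flat Q' = par_flat (seq_flat (flat R) (Some (thread_mset rest))) (Some m0)" by auto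
  then show ?thesis using nonctrl_rule_flat[OF c(3,2)] seq_flat_thread_mset[of "rhs_word R" rest] a c
    by (auto simp: add.commute)
next
  fix c r m0
  assume a: "n = add_mset [c] m0" "cstep c l r" "n' = m0 + r"
  then obtain R where "Delta c l R" "flat R = Some r" unfolding cstep_def by blast
  from step_fire_thread[of Q c "[]" m0 Delta l R] assms(1) a this obtain Q' where
    "step Delta Q l Q'" "flat Q' = par_flat (seq_flat (flat R) (Some (thread_mset []))) (Some m0)" by auto
  then show ?thesis using a \<open>flat R = _\<close> by (auto simp: add.commute)
qed

lemma mtaus_weak_tau:
  assumes "mtaus n n''" "flat Q = Some n"
  shows "\<exists>Q''. weak_tau Delta tau Q Q'' \<and> flat Q'' = Some n''"
  using assms
proof (induction arbitrary: Q rule: converse_rtranclp_induct)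
  case base then show ?case by (auto simp: weak_tau_def)
next
  case (step a b)
  from mstep_step[OF step.prems step.hyps(1)] obtain Q1 where "step Delta Q tau Q1" "flat Q1 = Some b" by blast
  from step.IH[OF this(2)] obtain Q'' where "weak_tau Delta tau Q1 Q''" "flat Q'' = Some n''" by blast
  then show ?case using \<open>step Delta Q tau Q1\<close> unfolding weak_tau_def
    by (meson converse_rtranclp_into_rtranclp)
qed

lemma wf_conf_mstep: "wf_conf m \<Longrightarrow> mstep m l m' \<Longrightarrow> wf_conf m'"
  unfolding mstep_def
proof (elim disjE exE conjE)
  fix t t' m0 assume a: "wf_conf m" "m = add_mset t m0" "tstep t l t'" "m' = m0 + thread_mset t'"
  then obtain c rest R where c: "t = c # rest" "\<not> is_ctrl c" "Delta c l R" "t' = rhs_word R @ rest"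
    unfolding tstep_def by blast
  have "\<not> is_ctrl d" if "d \<in> set rest" for d
    using a(1,2) c(1,2) that unfolding wf_conf_def by fastforce
  then have "\<not> is_ctrl d" if "d \<in> set t'" for d using nonctrl_rule_rhs[OF c(3,2)] c(4) that by auto
  then show "wf_conf m'" using a unfolding wf_conf_def by (cases t') auto
next
  fix c r m0 assume a: "wf_conf m" "m = add_mset [c] m0" "cstep c l r" "m' = m0 + r"
  then show "wf_conf m'" using ctrl_rule_flat[of c l] unfolding cstep_def wf_conf_def by fastforce
qed

lemma mbisim_bisim:
  assumes "mbisim R" "R m n" "flat P = Some m" "flat Q = Some n"
  shows "branching_bisimilar Delta tau P Q"
proof -
  define B where "B = (\<lambda>P Q. \<exists>m n. flat P = Some m \<and> flat Q = Some n \<and> R m n)"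
  have sym: "B Q P" if "B P Q" for P Q using that assms(1) unfolding B_def mbisim_def by blast
  have transfer: "(\<exists>Q'' Q'. weak_tau Delta tau Q Q'' \<and> step Delta Q'' l Q' \<and> B P Q'' \<and> B P' Q')
        \<or> (l = tau \<and> B P' Q)" if "B P Q" "step Delta P l P'" for P Q l P'
  proof -
    from that(1) obtain a b where ab: "flat P = Some a" "flat Q = Some b" "R a b" unfolding B_def by blast
    with assms(1) have "wf_conf a" unfolding mbisim_def by blast
    with step_mstep[OF that(2) ab(1)] obtain a' where a': "flat P' = Some a'" "mstep a l a'" by blast
    with assms(1) ab(3) have "matched R a b l a'" unfolding mbisim_def by blast
    then show ?thesis unfolding matched_def
    proof
      assume "\<exists>n'' n'. mtaus b n'' \<and> mstep n'' l n' \<and> R a n'' \<and> R a' n'"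
      then obtain n'' n' where n: "mtaus b n''" "mstep n'' l n'" "R a n''" "R a' n'" by blast
      from mtaus_weak_tau[OF n(1) ab(2)] obtain Q'' where Q'': "weak_tau Delta tau Q Q''" "flat Q'' = Some n''"
        by blast
      from mstep_step[OF Q''(2) n(2)] obtain Q' where "step Delta Q'' l Q'" "flat Q' = Some n'" by blast
      then show ?thesis using Q'' n ab a' unfolding B_def by blast
    next
      assume "l = tau \<and> R a' b"
      then show ?thesis using ab a' unfolding B_def by blast
    qed
  qed
  have "branching_bisim_rel Delta tau B"
    unfolding branching_bisim_rel_def
  proof (intro conjI allI impI)
    fix P Q l P' assume "B P Q \<and> step Delta P l P'"
    then show "(\<exists>Q'' Q'. weak_tau Delta tau Q Q'' \<and> step Delta Q'' l Q' \<and> B P Q'' \<and> B P' Q') \<or> l = tau \<and> B P' Q"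
      using transfer by blast
  next
    fix P Q l Q' assume "B P Q \<and> step Delta Q l Q'"
    then show "(\<exists>P'' P'. weak_tau Delta tau P P'' \<and> step Delta P'' l P' \<and> B P'' Q \<and> B P' Q') \<or> l = tau \<and> B P Q'"
      using transfer[of Q P l Q'] sym by blast
  qed
  then show ?thesis using assms unfolding branching_bisimilar_def B_def by blast
qed

end

section \<open>The algebra built from a PCP instance\<close>

text \<open>\<open>Rigid t\<close>: the thread \<open>t\<close> itself. \<open>GvOpen s i\<close> and \<open>ZOpen s i\<close>: a thread
  headed by \<open>Gv\<close> or \<open>Z\<close> whose tail spells \<open>s\<close> and carries the indices \<open>i\<close>, a component the
  phase cannot observe being left empty. \<open>GvRealized\<close>: a \<open>Gv\<close>-thread whose tail is realized, i.e.
  spells the \<open>v\<close>-string of its indices. \<open>Pure s i\<close>: a thread of \<open>U\<close>-, \<open>V\<close>- and \<open>W\<close>-constants.\<close>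

datatype 's tview = Rigid "'s const list" | GvRealized | GvOpen "'s list" "nat list" | ZOpen "'s list" "nat list"
  | Pure "'s list" "nat list"

locale pcp_algebra =
  fixes Sig :: "'s set" and inst :: "'s pcp"
  assumes words: "\<forall>(u, v) \<in> set inst. u \<noteq> [] \<and> v \<noteq> [] \<and> set u \<subseteq> Sig \<and> set v \<subseteq> Sig"
begin

abbreviation "Delta \<equiv> rulesG Sig inst"

definition is_ctrl :: "'s const \<Rightarrow> bool" where
  "is_ctrl c \<longleftrightarrow> c \<in> {X, Y, D, C, I, S, C'}"

sublocale flat_algebra Delta is_ctrl Tau
proof
  show "flat R = Some (thread_mset (rhs_word R))" if "Delta c l R" "\<not> is_ctrl c" for c l R
    using that by (induction rule: rulesG.induct) (auto simp: is_ctrl_def Wset_def)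
  show "\<not> is_ctrl d" if "Delta c l R" "\<not> is_ctrl c" "d \<in> set (rhs_word R)" for c l R d
    using that by (induction rule: rulesG.induct) (auto simp: is_ctrl_def Wset_def)
  show "\<exists>r. flat R = Some r \<and> (\<forall>t\<in>#r. t \<noteq> [] \<and> (\<forall>d\<in>set t. is_ctrl d \<longrightarrow> t = [d]))"
    if "Delta c l R" "is_ctrl c" for c l R
    using that by (induction rule: rulesG.induct) (auto simp: is_ctrl_def)
qed

abbreviation "Ix \<equiv> idx inst"
abbreviation "Ws \<equiv> Wset inst"
abbreviation "uu \<equiv> uw inst"
abbreviation "vv \<equiv> vw inst"

lemma tstep_Cons: "tstep (c # rest) l t' \<longleftrightarrow> \<not> is_ctrl c \<and> (\<exists>R. Delta c l R \<and> t' = rhs_word R @ rest)"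
  unfolding tstep_def by auto

lemma tstep_Nil[simp]: "\<not> tstep [] l t'"
  unfolding tstep_def by auto

inductive_cases GuE: "rulesG Sig inst Gu l R"
inductive_cases GvE: "rulesG Sig inst Gv l R"
inductive_cases Gv'E: "rulesG Sig inst Gv' l R"
inductive_cases ZE: "rulesG Sig inst Z l R"
inductive_cases GE: "rulesG Sig inst G l R"
inductive_cases G'E: "rulesG Sig inst G' l R"
inductive_cases UE: "rulesG Sig inst (U k) l R"
inductive_cases VE: "rulesG Sig inst (V k) l R"
inductive_cases WE: "rulesG Sig inst (W w j) l R"
inductive_cases XE: "rulesG Sig inst X l R"
inductive_cases YE: "rulesG Sig inst Y l R"
inductive_cases DE: "rulesG Sig inst D l R"
inductive_cases CE: "rulesG Sig inst C l R"
inductive_cases IE: "rulesG Sig inst I l R"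
inductive_cases SE: "rulesG Sig inst S l R"
inductive_cases C'E: "rulesG Sig inst C' l R"

lemma tstep_Gu: "tstep (Gu # r) l t' \<longleftrightarrow> (\<exists>k\<in>Ix. l = Tau \<and> t' = Gu # U k # r) \<or>
    (\<exists>k\<in>Ix. l = LU \<and> t' = Gv # U k # r) \<or> (l = Tau \<and> t' = Gv' # r)"
  unfolding tstep_Cons by (auto simp: is_ctrl_def elim!: GuE intro: rulesG.intros)

lemma tstep_Gv: "tstep (Gv # r) l t' \<longleftrightarrow> (\<exists>k\<in>Ix. l = Tau \<and> t' = Gv # V k # r) \<or>
    (l = Tau \<and> t' = r) \<or> (l = LV \<and> t' = Z # r)"
  unfolding tstep_Cons by (auto simp: is_ctrl_def elim!: GvE intro: rulesG.intros)

lemma tstep_Gv': "tstep (Gv' # r) l t' \<longleftrightarrow> (\<exists>k\<in>Ix. l = Tau \<and> t' = Gv' # V k # r) \<or>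
    (l = Tau \<and> t' = Z # r)"
  unfolding tstep_Cons by (auto simp: is_ctrl_def elim!: Gv'E intro: rulesG.intros)

lemma tstep_Z: "tstep (Z # r) l t' \<longleftrightarrow> (l = Tau \<or> l = LZ) \<and> t' = r"
  unfolding tstep_Cons by (auto simp: is_ctrl_def elim!: ZE intro: rulesG.intros)

lemma tstep_G: "tstep (G # r) l t' \<longleftrightarrow> l = Tau \<and> ((\<exists>k\<in>Ix. t' = G # U k # r) \<or> (\<exists>k\<in>Ix. t' = G # V k # r) \<or> t' = r)"
  unfolding tstep_Cons by (auto simp: is_ctrl_def elim!: GE intro: rulesG.intros)

lemma tstep_G': "tstep (G' # r) l t' \<longleftrightarrow> l = Tau \<and> ((\<exists>k\<in>Ix. t' = G' # U k # r) \<or> (\<exists>k\<in>Ix. t' = G' # V k # r)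
   \<or> (\<exists>w\<in>Ws. t' = G' # w # r) \<or> t' = Gv # r \<or> t' = Z # r)"
  unfolding tstep_Cons by (auto simp: is_ctrl_def elim!: G'E intro: rulesG.intros)

lemma tstep_U: "tstep (U k # r) l t' \<longleftrightarrow> k \<in> Ix \<and> l = Tau \<and> t' = W (uu k) k # r"
  unfolding tstep_Cons by (auto simp: is_ctrl_def elim!: UE intro: rulesG.intros)

lemma tstep_V: "tstep (V k # r) l t' \<longleftrightarrow> k \<in> Ix \<and> l = Tau \<and> t' = W (vv k) k # r"
  unfolding tstep_Cons by (auto simp: is_ctrl_def elim!: VE intro: rulesG.intros)

lemma zero_notin_idx[simp]: "0 \<notin> Ix" by (simp add: idx_def)

lemma tstep_W: "tstep (W w j # r) l t' \<longleftrightarrow>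
   (\<exists>a w'. w = a # w' \<and> a \<in> Sig \<and> W w j \<in> Ws \<and> (j = 0 \<or> j \<in> Ix) \<and> (l = Sym a \<or> l = Tau) \<and> t' = W w' j # r) \<or>
   (j \<in> Ix \<and> W w j \<in> Ws \<and> (l = Idx j \<or> l = Tau) \<and> t' = W w 0 # r) \<or>
   (w = [] \<and> j = 0 \<and> W [] 0 \<in> Ws \<and> l = Tau \<and> t' = r)"
  unfolding tstep_Cons by (auto simp: is_ctrl_def elim!: WE intro: rulesG.intros)

lemma tstep_ctrl: "is_ctrl c \<Longrightarrow> \<not> tstep (c # r) l t'"
  unfolding tstep_Cons by auto

lemma cstep_D: "cstep D l r \<longleftrightarrow> (l = Tau \<and> r = {#[D],[Gu]#}) \<or> (l = LD \<and> r = {#[C]#})"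
  unfolding cstep_def by (auto simp: is_ctrl_def elim!: DE intro: rulesG.intros)

lemma cstep_X: "cstep X l r \<longleftrightarrow> (l = LU \<and> r = {#[D],[Gv]#}) \<or> (l = Tau \<and> r = {#[D]#})"
  unfolding cstep_def by (auto simp: is_ctrl_def elim!: XE intro: rulesG.intros)

lemma cstep_Y: "cstep Y l r \<longleftrightarrow> (l = Tau \<and> r = {#[D]#})"
  unfolding cstep_def by (auto simp: is_ctrl_def elim!: YE intro: rulesG.intros)

lemma cstep_C: "cstep C l r \<longleftrightarrow> (l = LI \<and> r = {#[I]#}) \<or> (l = LS \<and> r = {#[S]#}) \<or>
     (l = Tau \<and> r = {#[C],[G]#}) \<or> (l = Tau \<and> r = {#[C],[Gv]#})"
  unfolding cstep_def by (auto simp: is_ctrl_def elim!: CE intro: rulesG.intros)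

lemma cstep_I: "cstep I l r \<longleftrightarrow> (l = LI \<and> r = {#[C']#}) \<or> (\<exists>k\<in>Ix. l = Idx k \<and> r = {#[I]#})"
  unfolding cstep_def by (auto simp: is_ctrl_def elim!: IE intro: rulesG.intros)

lemma cstep_S: "cstep S l r \<longleftrightarrow> (l = LS \<and> r = {#[C']#}) \<or> (\<exists>a\<in>Sig. l = Sym a \<and> r = {#[S]#})"
  unfolding cstep_def by (auto simp: is_ctrl_def elim!: SE intro: rulesG.intros)

lemma cstep_C': "cstep C' l r \<longleftrightarrow> (l = Tau \<and> r = {#[C'],[G']#}) \<or> (l = Tau \<and> r = {#})"
  unfolding cstep_def by (auto simp: is_ctrl_def elim!: C'E intro: rulesG.intros)

definition u_suffix :: "'s list \<Rightarrow> nat \<Rightarrow> bool" where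
  "u_suffix w j \<longleftrightarrow> (\<exists>k\<in>Ix. (j = k \<or> j = 0) \<and> suffix w (uu k))"
definition v_suffix :: "'s list \<Rightarrow> nat \<Rightarrow> bool" where
  "v_suffix w j \<longleftrightarrow> (\<exists>k\<in>Ix. (j = k \<or> j = 0) \<and> suffix w (vv k))"

lemma Ws_iff: "W w j \<in> Ws \<longleftrightarrow> u_suffix w j \<or> v_suffix w j"
  unfolding Wset_def u_suffix_def v_suffix_def by blast

lemma Ws_W: "c \<in> Ws \<Longrightarrow> \<exists>w j. c = W w j"
  unfolding Wset_def by blast

lemma uv_props: "k \<in> Ix \<Longrightarrow> uu k \<noteq> [] \<and> vv k \<noteq> [] \<and> set (uu k) \<subseteq> Sig \<and> set (vv k) \<subseteq> Sig"
proof -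
  assume "k \<in> Ix"
  then have "k - 1 < length inst" "k \<ge> 1" by (auto simp: idx_def)
  then have "inst ! (k - 1) \<in> set inst" by simp
  moreover obtain u v where uv: "inst ! (k - 1) = (u, v)" by fastforce
  ultimately have "(u, v) \<in> set inst" by simp
  then have "u \<noteq> [] \<and> v \<noteq> [] \<and> set u \<subseteq> Sig \<and> set v \<subseteq> Sig" using words by blast
  then show ?thesis unfolding uw_def vw_def uv by simp
qed

lemma W_sig: "W (a # w) j \<in> Ws \<Longrightarrow> a \<in> Sig"
  unfolding Ws_iff u_suffix_def v_suffix_def using uv_props
  by (auto dest!: set_mono_suffix) blast+

lemma W_suf: "W (a # w) j \<in> Ws \<Longrightarrow> W w j \<in> Ws"
  unfolding Ws_iff u_suffix_def v_suffix_def by (auto dest: suffix_ConsD)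

lemma W_sufl: "W w0 j \<in> Ws \<Longrightarrow> suffix w w0 \<Longrightarrow> W w j \<in> Ws"
  unfolding Ws_iff u_suffix_def v_suffix_def by (meson suffix_order.trans)

lemma W_zero: "W w j \<in> Ws \<Longrightarrow> W w 0 \<in> Ws"
  unfolding Ws_iff u_suffix_def v_suffix_def by auto

lemma W_idx: "W w j \<in> Ws \<Longrightarrow> j \<noteq> 0 \<Longrightarrow> j \<in> Ix"
  unfolding Ws_iff u_suffix_def v_suffix_def by auto

lemma W_nil: "W w j \<in> Ws \<Longrightarrow> W [] 0 \<in> Ws"
  unfolding Ws_iff u_suffix_def v_suffix_def by auto

lemma W_U: "k \<in> Ix \<Longrightarrow> W (uu k) k \<in> Ws"
  unfolding Ws_iff u_suffix_def by auto
lemma W_V: "k \<in> Ix \<Longrightarrow> W (vv k) k \<in> Ws"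
  unfolding Ws_iff v_suffix_def by auto

abbreviation ttau :: "'s const list \<Rightarrow> 's const list \<Rightarrow> bool" where
  "ttau t t' \<equiv> tstep t Tau t'"
abbreviation ttaus :: "'s const list \<Rightarrow> 's const list \<Rightarrow> bool" where
  "ttaus \<equiv> ttau\<^sup>*\<^sup>*"

lemma ttaus_step: "ttau t t' \<Longrightarrow> ttaus t t'" by auto

lemma W_skip: "W w0 j \<in> Ws \<Longrightarrow> suffix w w0 \<Longrightarrow> ttaus (W w0 j # r) (W w j # r)"
proof (induction w0 arbitrary: w)
  case Nil then show ?case by simp
next
  case (Cons a w0)
  show ?case
  proof (cases "w = a # w0")
    case True then show ?thesis by simp
  next
    case False
    then have "suffix w w0" using Cons.prems(2) by (auto simp: suffix_def Cons_eq_append_conv)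
    have "ttau (W (a # w0) j # r) (W w0 j # r)"
      using Cons.prems(1) W_sig[OF Cons.prems(1)] W_idx[OF Cons.prems(1)] by (auto simp: tstep_W)
    then show ?thesis using Cons.IH[OF W_suf[OF Cons.prems(1)] \<open>suffix w w0\<close>]
      by (meson converse_rtranclp_into_rtranclp)
  qed
qed

lemma W_vanish: "W w j \<in> Ws \<Longrightarrow> ttaus (W w j # r) r"
proof -
  assume a: "W w j \<in> Ws"
  have 1: "ttaus (W w j # r) (W [] j # r)" using W_skip[OF a] by simp
  have "ttaus (W [] j # r) (W [] 0 # r)"
  proof (cases "j = 0")
    case False
    then show ?thesis using W_sufl[OF a, of "[]"] W_idx[OF a] by (auto simp: tstep_W intro!: ttaus_step)
  qed simp
  moreover have "ttau (W [] 0 # r) r" using W_nil[OF a] by (simp add: tstep_W)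
  ultimately show ?thesis using 1 by (meson rtranclp.rtrancl_into_rtrancl rtranclp_trans)
qed

definition uv_const :: "'s const \<Rightarrow> bool" where
  "uv_const c \<longleftrightarrow> (\<exists>k\<in>Ix. c = U k \<or> c = V k)"

definition basic :: "'s const \<Rightarrow> bool" where
  "basic c \<longleftrightarrow> uv_const c \<or> c \<in> Ws"

lemma basic_vanish: "basic c \<Longrightarrow> ttaus (c # r) r"
proof -
  assume "basic c"
  then consider k where "k \<in> Ix" "c = U k" | k where "k \<in> Ix" "c = V k" | "c \<in> Ws"
    unfolding basic_def uv_const_def by blast
  then show ?thesis
  proof cases
    case 1
    then have "ttau (c # r) (W (uu k) k # r)" by (simp add: tstep_U)
    then show ?thesis using W_vanish[OF W_U[OF 1(1)]] by (meson converse_rtranclp_into_rtranclp)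
  next
    case 2
    then have "ttau (c # r) (W (vv k) k # r)" by (simp add: tstep_V)
    then show ?thesis using W_vanish[OF W_V[OF 2(1)]] by (meson converse_rtranclp_into_rtranclp)
  next
    case 3 then show ?thesis using W_vanish Ws_W by blast
  qed
qed

lemma basics_vanish: "\<forall>c\<in>set t. basic c \<Longrightarrow> ttaus t []"
proof (induction t)
  case (Cons c t)
  then show ?case using basic_vanish[of c t] by (meson list.set_intros rtranclp_trans)
qed simp

definition vs_us :: "nat list \<Rightarrow> nat list \<Rightarrow> 's const list" where
  "vs_us \<beta> \<alpha> = map V \<beta> @ map U \<alpha>"

lemma vs_us_simps[simp]: "vs_us (k # \<beta>) \<alpha> = V k # vs_us \<beta> \<alpha>" "vs_us [] \<alpha> = map U \<alpha>"
  by (auto simp: vs_us_def)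

lemma vs_us_nil_iff[simp]: "vs_us \<beta> \<alpha> = [] \<longleftrightarrow> \<beta> = [] \<and> \<alpha> = []"
  by (auto simp: vs_us_def)

abbreviation uv_list :: "'s const list \<Rightarrow> bool" where "uv_list g \<equiv> \<forall>c\<in>set g. uv_const c"
abbreviation basic_list :: "'s const list \<Rightarrow> bool" where "basic_list g \<equiv> \<forall>c\<in>set g. basic c"

lemma uv_const_simps[simp]: "uv_const (U k) \<longleftrightarrow> k \<in> Ix" "uv_const (V k) \<longleftrightarrow> k \<in> Ix" "\<not> uv_const (W w j)"
  "\<not> uv_const Gu" "\<not> uv_const Gv" "\<not> uv_const Gv'" "\<not> uv_const G" "\<not> uv_const G'" "\<not> uv_const Z"
  by (auto simp: uv_const_def)

lemma basic_simps[simp]: "basic (U k) \<longleftrightarrow> k \<in> Ix" "basic (V k) \<longleftrightarrow> k \<in> Ix" "basic (W w j) \<longleftrightarrow> W w j \<in> Ws"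
  "\<not> basic Gu" "\<not> basic Gv" "\<not> basic Gv'" "\<not> basic G" "\<not> basic G'" "\<not> basic Z"
  by (auto simp: basic_def uv_const_def Wset_def)

lemma uv_list_vs_us: "set \<beta> \<subseteq> Ix \<Longrightarrow> set \<alpha> \<subseteq> Ix \<Longrightarrow> uv_list (vs_us \<beta> \<alpha>)"
  by (auto simp: vs_us_def)

lemma uv_list_basic_list: "uv_list g \<Longrightarrow> basic_list g"
  by (auto simp: basic_def)

lemma v_suffix_suf: "v_suffix (a # w) j \<Longrightarrow> v_suffix w j" unfolding v_suffix_def by (auto dest: suffix_ConsD)
lemma u_suffix_suf: "u_suffix (a # w) j \<Longrightarrow> u_suffix w j" unfolding u_suffix_def by (auto dest: suffix_ConsD)
lemma v_suffix_zero: "v_suffix w j \<Longrightarrow> v_suffix w 0" unfolding v_suffix_def by auto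
lemma u_suffix_zero: "u_suffix w j \<Longrightarrow> u_suffix w 0" unfolding u_suffix_def by auto

text \<open>The shape of a thread in a phase over-approximates the threads that occur there. In phase
  \<open>D\<close> all \<open>V\<close>-constants precede all \<open>U\<close>-constants, as they are grown by \<open>Gv'\<close> or \<open>Gv\<close> in
  front of the \<open>U\<close>-constants grown by \<open>Gu\<close>; this is what lets an invisible thread of phase
  \<open>D\<close> be regenerated from \<open>Gu\<close>.\<close>

definition pure_D :: "'s const list \<Rightarrow> bool" where
  "pure_D t \<longleftrightarrow> t \<noteq> [] \<and> ((\<exists>\<beta> \<alpha>. set \<beta> \<subseteq> Ix \<and> set \<alpha> \<subseteq> Ix \<and> t = vs_us \<beta> \<alpha>) \<or>
     (\<exists>w j \<beta> \<alpha>. set \<beta> \<subseteq> Ix \<and> set \<alpha> \<subseteq> Ix \<and> v_suffix w j \<and> t = W w j # vs_us \<beta> \<alpha>) \<or>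
     (\<exists>w j \<alpha>. set \<alpha> \<subseteq> Ix \<and> u_suffix w j \<and> t = W w j # map U \<alpha>))"

definition pure_C :: "'s const list \<Rightarrow> bool" where
  "pure_C t \<longleftrightarrow> t \<noteq> [] \<and> (uv_list t \<or> (\<exists>w j g. W w j \<in> Ws \<and> uv_list g \<and> t = W w j # g))"

definition pure_C' :: "'s const list \<Rightarrow> bool" where
  "pure_C' t \<longleftrightarrow> t \<noteq> [] \<and> basic_list t"

definition shape_D :: "'s const list \<Rightarrow> bool" where
  "shape_D t \<longleftrightarrow> (\<exists>\<alpha>. set \<alpha> \<subseteq> Ix \<and> t = Gu # map U \<alpha>) \<or>
     (\<exists>\<beta> \<alpha>. set \<beta> \<subseteq> Ix \<and> set \<alpha> \<subseteq> Ix \<and> (t = Gv' # vs_us \<beta> \<alpha> \<or> t = Z # vs_us \<beta> \<alpha> \<or> t = Gv # vs_us \<beta> \<alpha>)) \<or>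
     pure_D t"

definition shape_C :: "'s const list \<Rightarrow> bool" where
  "shape_C t \<longleftrightarrow> (\<exists>\<alpha>. set \<alpha> \<subseteq> Ix \<and> t = Gu # map U \<alpha>) \<or>
     (\<exists>\<beta> \<alpha>. set \<beta> \<subseteq> Ix \<and> set \<alpha> \<subseteq> Ix \<and> t = Gv' # vs_us \<beta> \<alpha>) \<or>
     (\<exists>g. uv_list g \<and> (t = G # g \<or> t = Gv # g \<or> t = Z # g)) \<or> pure_C t"

definition shape_C' :: "'s const list \<Rightarrow> bool" where
  "shape_C' t \<longleftrightarrow> (\<exists>\<alpha>. set \<alpha> \<subseteq> Ix \<and> t = Gu # map U \<alpha>) \<or>
     (\<exists>\<beta> \<alpha>. set \<beta> \<subseteq> Ix \<and> set \<alpha> \<subseteq> Ix \<and> t = Gv' # vs_us \<beta> \<alpha>) \<or>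
     (\<exists>g. uv_list g \<and> t = G # g) \<or>
     (\<exists>g. basic_list g \<and> (t = G' # g \<or> t = Gv # g \<or> t = Z # g)) \<or> pure_C' t"

lemma pure_D_VI: "set \<beta> \<subseteq> Ix \<Longrightarrow> set \<alpha> \<subseteq> Ix \<Longrightarrow> v_suffix w j \<Longrightarrow> t = W w j # vs_us \<beta> \<alpha> \<Longrightarrow> pure_D t"
  unfolding pure_D_def by blast
lemma pure_D_UI: "set \<alpha> \<subseteq> Ix \<Longrightarrow> u_suffix w j \<Longrightarrow> t = W w j # map U \<alpha> \<Longrightarrow> pure_D t"
  unfolding pure_D_def by blast
lemma pure_D_vs_usI: "set \<beta> \<subseteq> Ix \<Longrightarrow> set \<alpha> \<subseteq> Ix \<Longrightarrow> t = vs_us \<beta> \<alpha> \<Longrightarrow> t \<noteq> [] \<Longrightarrow> pure_D t"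
  unfolding pure_D_def by blast
lemma pure_C_uv_listI: "uv_list t \<Longrightarrow> t \<noteq> [] \<Longrightarrow> pure_C t" unfolding pure_C_def by blast
lemma pure_C_WI: "W w j \<in> Ws \<Longrightarrow> uv_list g \<Longrightarrow> t = W w j # g \<Longrightarrow> pure_C t" unfolding pure_C_def by blast

lemma pure_D_pure_C: "pure_D t \<Longrightarrow> pure_C t"
proof -
  assume "pure_D t"
  then consider (a) \<beta> \<alpha> where "set \<beta> \<subseteq> Ix" "set \<alpha> \<subseteq> Ix" "t = vs_us \<beta> \<alpha>" "t \<noteq> []"
    | (b) w j \<beta> \<alpha> where "set \<beta> \<subseteq> Ix" "set \<alpha> \<subseteq> Ix" "v_suffix w j" "t = W w j # vs_us \<beta> \<alpha>"
    | (c) w j \<alpha> where "set \<alpha> \<subseteq> Ix" "u_suffix w j" "t = W w j # map U \<alpha>"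
    unfolding pure_D_def by blast
  then show ?thesis
  proof cases
    case a then show ?thesis using uv_list_vs_us[OF a(1,2)] by (intro pure_C_uv_listI) auto
  next
    case b then show ?thesis using uv_list_vs_us[OF b(1,2)] by (intro pure_C_WI[of w j "vs_us \<beta> \<alpha>"]) (auto simp: Ws_iff)
  next
    case c then show ?thesis using uv_list_vs_us[OF _ c(1), of "[]"] by (intro pure_C_WI[of w j "map U \<alpha>"]) (auto simp: Ws_iff)
  qed
qed

lemma pure_C_basic_list: "pure_C t \<Longrightarrow> basic_list t"
  unfolding pure_C_def by (auto simp: basic_def)

lemma shape_C_shape_C': "shape_C t \<Longrightarrow> shape_C' t"
proof -
  assume "shape_C t"
  then consider "(\<exists>\<alpha>. set \<alpha> \<subseteq> Ix \<and> t = Gu # map U \<alpha>)" |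
     "(\<exists>\<beta> \<alpha>. set \<beta> \<subseteq> Ix \<and> set \<alpha> \<subseteq> Ix \<and> t = Gv' # vs_us \<beta> \<alpha>)" |
     "(\<exists>g. uv_list g \<and> t = G # g)" | "(\<exists>g. uv_list g \<and> (t = Gv # g \<or> t = Z # g))" | "pure_C t"
    unfolding shape_C_def by blast
  then show ?thesis
  proof cases
    case 4 then show ?thesis unfolding shape_C'_def using uv_list_basic_list by blast
  next
    case 5 then show ?thesis unfolding shape_C'_def pure_C'_def using pure_C_basic_list pure_C_def by blast
  qed (auto simp: shape_C'_def)
qed

lemma shape_D_GuI: "set \<alpha> \<subseteq> Ix \<Longrightarrow> t = Gu # map U \<alpha> \<Longrightarrow> shape_D t" unfolding shape_D_def by blast
lemma shape_D_Gv'I: "set \<beta> \<subseteq> Ix \<Longrightarrow> set \<alpha> \<subseteq> Ix \<Longrightarrow> t = Gv' # vs_us \<beta> \<alpha> \<Longrightarrow> shape_D t" unfolding shape_D_def by blast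
lemma shape_D_ZI: "set \<beta> \<subseteq> Ix \<Longrightarrow> set \<alpha> \<subseteq> Ix \<Longrightarrow> t = Z # vs_us \<beta> \<alpha> \<Longrightarrow> shape_D t" unfolding shape_D_def by blast
lemma shape_D_GvI: "set \<beta> \<subseteq> Ix \<Longrightarrow> set \<alpha> \<subseteq> Ix \<Longrightarrow> t = Gv # vs_us \<beta> \<alpha> \<Longrightarrow> shape_D t" unfolding shape_D_def by blast
lemma shape_D_pureI: "pure_D t \<Longrightarrow> shape_D t" unfolding shape_D_def by blast
lemma shape_C_GuI: "set \<alpha> \<subseteq> Ix \<Longrightarrow> t = Gu # map U \<alpha> \<Longrightarrow> shape_C t" unfolding shape_C_def by blast
lemma shape_C_Gv'I: "set \<beta> \<subseteq> Ix \<Longrightarrow> set \<alpha> \<subseteq> Ix \<Longrightarrow> t = Gv' # vs_us \<beta> \<alpha> \<Longrightarrow> shape_C t" unfolding shape_C_def by blast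
lemma shape_C_GI: "uv_list g \<Longrightarrow> t = G # g \<Longrightarrow> shape_C t" unfolding shape_C_def by blast
lemma shape_C_GvI: "uv_list g \<Longrightarrow> t = Gv # g \<Longrightarrow> shape_C t" unfolding shape_C_def by blast
lemma shape_C_ZI: "uv_list g \<Longrightarrow> t = Z # g \<Longrightarrow> shape_C t" unfolding shape_C_def by blast
lemma shape_C_pureI: "pure_C t \<Longrightarrow> shape_C t" unfolding shape_C_def by blast

lemma shape_D_shape_C: "shape_D t \<Longrightarrow> shape_C t"
proof -
  assume "shape_D t"
  then consider (gu) \<alpha> where "set \<alpha> \<subseteq> Ix" "t = Gu # map U \<alpha>"
    | (gv') \<beta> \<alpha> where "set \<beta> \<subseteq> Ix" "set \<alpha> \<subseteq> Ix" "t = Gv' # vs_us \<beta> \<alpha>"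
    | (z) \<beta> \<alpha> where "set \<beta> \<subseteq> Ix" "set \<alpha> \<subseteq> Ix" "t = Z # vs_us \<beta> \<alpha>"
    | (gv) \<beta> \<alpha> where "set \<beta> \<subseteq> Ix" "set \<alpha> \<subseteq> Ix" "t = Gv # vs_us \<beta> \<alpha>"
    | (p) "pure_D t"
    unfolding shape_D_def by blast
  then show ?thesis
  proof cases
    case gu then show ?thesis by (rule shape_C_GuI)
  next
    case gv' then show ?thesis by (rule shape_C_Gv'I)
  next
    case z then show ?thesis using uv_list_vs_us by (intro shape_C_ZI) auto
  next
    case gv then show ?thesis using uv_list_vs_us by (intro shape_C_GvI) auto
  next
    case p then show ?thesis using pure_D_pure_C shape_C_pureI by blast
  qed
qed

lemma shape_C'_GuI: "set \<alpha> \<subseteq> Ix \<Longrightarrow> t = Gu # map U \<alpha> \<Longrightarrow> shape_C' t" unfolding shape_C'_def by blast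
lemma shape_C'_Gv'I: "set \<beta> \<subseteq> Ix \<Longrightarrow> set \<alpha> \<subseteq> Ix \<Longrightarrow> t = Gv' # vs_us \<beta> \<alpha> \<Longrightarrow> shape_C' t" unfolding shape_C'_def by blast
lemma shape_C'_GI: "uv_list g \<Longrightarrow> t = G # g \<Longrightarrow> shape_C' t" unfolding shape_C'_def by blast
lemma shape_C'_G'I: "basic_list g \<Longrightarrow> t = G' # g \<Longrightarrow> shape_C' t" unfolding shape_C'_def by blast
lemma shape_C'_GvI: "basic_list g \<Longrightarrow> t = Gv # g \<Longrightarrow> shape_C' t" unfolding shape_C'_def by blast
lemma shape_C'_ZI: "basic_list g \<Longrightarrow> t = Z # g \<Longrightarrow> shape_C' t" unfolding shape_C'_def by blast
lemma shape_C'_pureI: "pure_C' t \<Longrightarrow> shape_C' t" unfolding shape_C'_def by blast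

lemma pure_D_close: "pure_D t \<Longrightarrow> tstep t l t' \<Longrightarrow> t' = [] \<or> pure_D t'"
proof -
  assume p: "pure_D t" and m: "tstep t l t'"
  from p consider (a) \<beta> \<alpha> where "set \<beta> \<subseteq> Ix" "set \<alpha> \<subseteq> Ix" "t = vs_us \<beta> \<alpha>" "t \<noteq> []"
    | (b) w j \<beta> \<alpha> where "set \<beta> \<subseteq> Ix" "set \<alpha> \<subseteq> Ix" "v_suffix w j" "t = W w j # vs_us \<beta> \<alpha>"
    | (c) w j \<alpha> where "set \<alpha> \<subseteq> Ix" "u_suffix w j" "t = W w j # map U \<alpha>"
    unfolding pure_D_def by blast
  then show ?thesis
  proof cases
    case a
    show ?thesis
    proof (cases \<beta>)
      case (Cons k \<beta>')
      then have "t' = W (vv k) k # vs_us \<beta>' \<alpha>" "k \<in> Ix" using m a by (auto simp: tstep_V)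
      moreover have "v_suffix (vv k) k" using \<open>k \<in> Ix\<close> unfolding v_suffix_def by auto
      ultimately show ?thesis using a Cons by (intro disjI2 pure_D_VI[of \<beta>' \<alpha> "vv k" k]) auto
    next
      case Nil
      then obtain k \<alpha>' where "\<alpha> = k # \<alpha>'" using a by (cases \<alpha>) auto
      then have "t' = W (uu k) k # map U \<alpha>'" "k \<in> Ix" using m a Nil by (auto simp: tstep_U)
      moreover have "u_suffix (uu k) k" using \<open>k \<in> Ix\<close> unfolding u_suffix_def by auto
      ultimately show ?thesis using a \<open>\<alpha> = _\<close> by (intro disjI2 pure_D_UI[of \<alpha>' "uu k" k]) auto
    qed
  next
    case b
    from m b consider (1) a w' where "w = a # w'" "t' = W w' j # vs_us \<beta> \<alpha>" | (2) "t' = W w 0 # vs_us \<beta> \<alpha>"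
      | (3) "t' = vs_us \<beta> \<alpha>" by (auto simp: tstep_W)
    then show ?thesis
    proof cases
      case 1 then show ?thesis using b v_suffix_suf[of a w' j] by (intro disjI2 pure_D_VI[of \<beta> \<alpha> w' j]) auto
    next
      case 2 then show ?thesis using b v_suffix_zero[of w j] by (intro disjI2 pure_D_VI[of \<beta> \<alpha> w 0]) auto
    next
      case 3 then show ?thesis using b pure_D_vs_usI[of \<beta> \<alpha> t'] by auto
    qed
  next
    case c
    from m c consider (1) a w' where "w = a # w'" "t' = W w' j # map U \<alpha>" | (2) "t' = W w 0 # map U \<alpha>"
      | (3) "t' = map U \<alpha>" by (auto simp: tstep_W)
    then show ?thesis
    proof cases
      case 1 then show ?thesis using c u_suffix_suf[of a w' j] by (intro disjI2 pure_D_UI[of \<alpha> w' j]) auto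
    next
      case 2 then show ?thesis using c u_suffix_zero[of w j] by (intro disjI2 pure_D_UI[of \<alpha> w 0]) auto
    next
      case 3 then show ?thesis using c pure_D_vs_usI[of "[]" \<alpha> t'] by auto
    qed
  qed
qed

lemma shape_D_close: "shape_D t \<Longrightarrow> tstep t l t' \<Longrightarrow> t' = [] \<or> shape_D t'"
proof -
  assume o: "shape_D t" and m: "tstep t l t'"
  from o consider (gu) \<alpha> where "set \<alpha> \<subseteq> Ix" "t = Gu # map U \<alpha>"
    | (gv') \<beta> \<alpha> where "set \<beta> \<subseteq> Ix" "set \<alpha> \<subseteq> Ix" "t = Gv' # vs_us \<beta> \<alpha>"
    | (z) \<beta> \<alpha> where "set \<beta> \<subseteq> Ix" "set \<alpha> \<subseteq> Ix" "t = Z # vs_us \<beta> \<alpha>"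
    | (gv) \<beta> \<alpha> where "set \<beta> \<subseteq> Ix" "set \<alpha> \<subseteq> Ix" "t = Gv # vs_us \<beta> \<alpha>"
    | (p) "pure_D t"
    unfolding shape_D_def by blast
  then show ?thesis
  proof cases
    case gu
    from m gu consider (1) k where "k \<in> Ix" "t' = Gu # U k # map U \<alpha>" | (2) k where "k \<in> Ix" "t' = Gv # U k # map U \<alpha>"
      | (3) "t' = Gv' # map U \<alpha>" by (auto simp: tstep_Gu)
    then show ?thesis
    proof cases
      case 1 then show ?thesis using gu by (intro disjI2 shape_D_GuI[of "k # \<alpha>"]) auto
    next
      case 2 then show ?thesis using gu by (intro disjI2 shape_D_GvI[of "[]" "k # \<alpha>"]) auto
    next
      case 3 then show ?thesis using gu by (intro disjI2 shape_D_Gv'I[of "[]" "\<alpha>"]) auto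
    qed
  next
    case gv'
    from m gv' consider (1) k where "k \<in> Ix" "t' = Gv' # V k # vs_us \<beta> \<alpha>" | (2) "t' = Z # vs_us \<beta> \<alpha>"
      by (auto simp: tstep_Gv')
    then show ?thesis
    proof cases
      case 1 then show ?thesis using gv' by (intro disjI2 shape_D_Gv'I[of "k # \<beta>" \<alpha>]) auto
    next
      case 2 then show ?thesis using gv' by (intro disjI2 shape_D_ZI[of \<beta> \<alpha>]) auto
    qed
  next
    case z
    then have "t' = vs_us \<beta> \<alpha>" using m by (auto simp: tstep_Z)
    then show ?thesis using z pure_D_vs_usI[of \<beta> \<alpha> t'] shape_D_pureI by blast
  next
    case gv
    from m gv consider (1) k where "k \<in> Ix" "t' = Gv # V k # vs_us \<beta> \<alpha>" | (2) "t' = Z # vs_us \<beta> \<alpha>"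
      | (3) "t' = vs_us \<beta> \<alpha>"
      by (auto simp: tstep_Gv)
    then show ?thesis
    proof cases
      case 1 then show ?thesis using gv by (intro disjI2 shape_D_GvI[of "k # \<beta>" \<alpha>]) auto
    next
      case 2 then show ?thesis using gv by (intro disjI2 shape_D_ZI[of \<beta> \<alpha>]) auto
    next
      case 3 then show ?thesis using gv pure_D_vs_usI[of \<beta> \<alpha> t'] shape_D_pureI by blast
    qed
  next
    case p
    then show ?thesis using pure_D_close[OF p m] shape_D_pureI by blast
  qed
qed

lemma pure_C_close: "pure_C t \<Longrightarrow> tstep t l t' \<Longrightarrow> t' = [] \<or> pure_C t'"
proof -
  assume p: "pure_C t" and m: "tstep t l t'"
  from p consider (a) c g where "uv_const c" "uv_list g" "t = c # g"
    | (b) w j g where "W w j \<in> Ws" "uv_list g" "t = W w j # g"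
    unfolding pure_C_def by (cases t) auto
  then show ?thesis
  proof cases
    case a
    then obtain k where k: "k \<in> Ix" "c = U k \<or> c = V k" unfolding uv_const_def by blast
    then have "t' = W (uu k) k # g \<or> t' = W (vv k) k # g" using m a by (auto simp: tstep_U tstep_V)
    then show ?thesis using a k W_U W_V pure_C_WI by blast
  next
    case b
    from m b consider (1) a w' where "w = a # w'" "t' = W w' j # g" | (2) "t' = W w 0 # g"
      | (3) "t' = g" by (auto simp: tstep_W)
    then show ?thesis
    proof cases
      case 1 then show ?thesis using b W_suf pure_C_WI by blast
    next
      case 2 then show ?thesis using b W_zero pure_C_WI by blast
    next
      case 3 then show ?thesis using b pure_C_uv_listI by blast
    qed
  qed
qed

lemma shape_C_close: "shape_C t \<Longrightarrow> tstep t l t' \<Longrightarrow> t' = [] \<or> shape_C t'"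
proof -
  assume o: "shape_C t" and m: "tstep t l t'"
  from o consider (gu) \<alpha> where "set \<alpha> \<subseteq> Ix" "t = Gu # map U \<alpha>"
    | (gv') \<beta> \<alpha> where "set \<beta> \<subseteq> Ix" "set \<alpha> \<subseteq> Ix" "t = Gv' # vs_us \<beta> \<alpha>"
    | (g) g where "uv_list g" "t = G # g" | (gv) g where "uv_list g" "t = Gv # g" | (z) g where "uv_list g" "t = Z # g"
    | (p) "pure_C t"
    unfolding shape_C_def by blast
  then show ?thesis
  proof cases
    case gu
    from m gu consider (1) k where "k \<in> Ix" "t' = Gu # U k # map U \<alpha>" | (2) k where "k \<in> Ix" "t' = Gv # U k # map U \<alpha>"
      | (3) "t' = Gv' # map U \<alpha>" by (auto simp: tstep_Gu)
    then show ?thesis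
    proof cases
      case 1 then show ?thesis using gu by (intro disjI2 shape_C_GuI[of "k # \<alpha>"]) auto
    next
      case 2 then show ?thesis using gu by (intro disjI2 shape_C_GvI[of "U k # map U \<alpha>"]) auto
    next
      case 3 then show ?thesis using gu by (intro disjI2 shape_C_Gv'I[of "[]" "\<alpha>"]) auto
    qed
  next
    case gv'
    from m gv' consider (1) k where "k \<in> Ix" "t' = Gv' # V k # vs_us \<beta> \<alpha>" | (2) "t' = Z # vs_us \<beta> \<alpha>"
      by (auto simp: tstep_Gv')
    then show ?thesis
    proof cases
      case 1 then show ?thesis using gv' by (intro disjI2 shape_C_Gv'I[of "k # \<beta>" \<alpha>]) auto
    next
      case 2 then show ?thesis using gv' uv_list_vs_us[of \<beta> \<alpha>] by (intro disjI2 shape_C_ZI[of "vs_us \<beta> \<alpha>"]) auto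
    qed
  next
    case g
    from m g consider (1) k where "k \<in> Ix" "t' = G # U k # g" | (2) k where "k \<in> Ix" "t' = G # V k # g"
      | (3) "t' = g" by (auto simp: tstep_G)
    then show ?thesis
    proof cases
      case 1 then show ?thesis using g by (intro disjI2 shape_C_GI[of "U k # g"]) auto
    next
      case 2 then show ?thesis using g by (intro disjI2 shape_C_GI[of "V k # g"]) auto
    next
      case 3 then show ?thesis using g pure_C_uv_listI shape_C_pureI by blast
    qed
  next
    case gv
    from m gv consider (1) k where "k \<in> Ix" "t' = Gv # V k # g" | (2) "t' = Z # g"
      | (3) "t' = g" by (auto simp: tstep_Gv)
    then show ?thesis
    proof cases
      case 1 then show ?thesis using gv by (intro disjI2 shape_C_GvI[of "V k # g"]) auto
    next
      case 2 then show ?thesis using gv by (intro disjI2 shape_C_ZI[of g]) auto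
    next
      case 3 then show ?thesis using gv pure_C_uv_listI shape_C_pureI by blast
    qed
  next
    case z
    then have "t' = g" using m by (auto simp: tstep_Z)
    then show ?thesis using z pure_C_uv_listI shape_C_pureI by blast
  next
    case p
    then show ?thesis using pure_C_close[OF p m] shape_C_pureI by blast
  qed
qed

lemma pure_C'_close: "pure_C' t \<Longrightarrow> tstep t l t' \<Longrightarrow> t' = [] \<or> pure_C' t'"
proof -
  assume p: "pure_C' t" and m: "tstep t l t'"
  from p obtain c g where cg: "basic c" "basic_list g" "t = c # g" unfolding pure_C'_def by (cases t) auto
  then consider (u) k where "k \<in> Ix" "c = U k \<or> c = V k" | (w) w j where "W w j \<in> Ws" "c = W w j"
    unfolding basic_def uv_const_def Wset_def by blast
  then show ?thesis
  proof cases
    case u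
    then have "t' = W (uu k) k # g \<or> t' = W (vv k) k # g" using m cg by (auto simp: tstep_U tstep_V)
    then show ?thesis using cg u W_U W_V unfolding pure_C'_def by auto
  next
    case w
    from m cg w consider (1) a w' where "w = a # w'" "t' = W w' j # g" | (2) "t' = W w 0 # g"
      | (3) "t' = g" by (auto simp: tstep_W)
    then show ?thesis
    proof cases
      case 1 then show ?thesis using cg w W_suf[of a w' j] unfolding pure_C'_def by auto
    next
      case 2 then show ?thesis using cg w W_zero[of w j] unfolding pure_C'_def by auto
    next
      case 3 then show ?thesis using cg unfolding pure_C'_def by auto
    qed
  qed
qed

lemma shape_C'_close: "shape_C' t \<Longrightarrow> tstep t l t' \<Longrightarrow> t' = [] \<or> shape_C' t'"
proof -
  assume o: "shape_C' t" and m: "tstep t l t'"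
  from o consider (gu) \<alpha> where "set \<alpha> \<subseteq> Ix" "t = Gu # map U \<alpha>"
    | (gv') \<beta> \<alpha> where "set \<beta> \<subseteq> Ix" "set \<alpha> \<subseteq> Ix" "t = Gv' # vs_us \<beta> \<alpha>"
    | (g) g where "uv_list g" "t = G # g" | (g') g where "basic_list g" "t = G' # g"
    | (gv) g where "basic_list g" "t = Gv # g" | (z) g where "basic_list g" "t = Z # g"
    | (p) "pure_C' t"
    unfolding shape_C'_def by blast
  then show ?thesis
  proof cases
    case gu
    from m gu consider (1) k where "k \<in> Ix" "t' = Gu # U k # map U \<alpha>" | (2) k where "k \<in> Ix" "t' = Gv # U k # map U \<alpha>"
      | (3) "t' = Gv' # map U \<alpha>" by (auto simp: tstep_Gu)
    then show ?thesis
    proof cases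
      case 1 then show ?thesis using gu by (intro disjI2 shape_C'_GuI[of "k # \<alpha>"]) auto
    next
      case 2 then show ?thesis using gu by (intro disjI2 shape_C'_GvI[of "U k # map U \<alpha>"]) auto
    next
      case 3 then show ?thesis using gu by (intro disjI2 shape_C'_Gv'I[of "[]" "\<alpha>"]) auto
    qed
  next
    case gv'
    from m gv' consider (1) k where "k \<in> Ix" "t' = Gv' # V k # vs_us \<beta> \<alpha>" | (2) "t' = Z # vs_us \<beta> \<alpha>"
      by (auto simp: tstep_Gv')
    then show ?thesis
    proof cases
      case 1 then show ?thesis using gv' by (intro disjI2 shape_C'_Gv'I[of "k # \<beta>" \<alpha>]) auto
    next
      case 2 then show ?thesis using gv' uv_list_basic_list[OF uv_list_vs_us[of \<beta> \<alpha>]] by (intro disjI2 shape_C'_ZI[of "vs_us \<beta> \<alpha>"]) auto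
    qed
  next
    case g
    from m g consider (1) k where "k \<in> Ix" "t' = G # U k # g" | (2) k where "k \<in> Ix" "t' = G # V k # g"
      | (3) "t' = g" by (auto simp: tstep_G)
    then show ?thesis
    proof cases
      case 1 then show ?thesis using g by (intro disjI2 shape_C'_GI[of "U k # g"]) auto
    next
      case 2 then show ?thesis using g by (intro disjI2 shape_C'_GI[of "V k # g"]) auto
    next
      case 3 then show ?thesis using g uv_list_basic_list[of g] shape_C'_pureI unfolding pure_C'_def by blast
    qed
  next
    case g'
    from m g' consider (1) c where "basic c" "t' = G' # c # g" | (2) "t' = Gv # g" | (3) "t' = Z # g"
      by (auto simp: tstep_G' basic_def uv_const_def)
    then show ?thesis
    proof cases
      case 1 then show ?thesis using g' by (intro disjI2 shape_C'_G'I[of "c # g"]) auto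
    next
      case 2 then show ?thesis using g' by (intro disjI2 shape_C'_GvI[of g]) auto
    next
      case 3 then show ?thesis using g' by (intro disjI2 shape_C'_ZI[of g]) auto
    qed
  next
    case gv
    from m gv consider (1) k where "k \<in> Ix" "t' = Gv # V k # g" | (2) "t' = Z # g"
      | (3) "t' = g" by (auto simp: tstep_Gv)
    then show ?thesis
    proof cases
      case 1 then show ?thesis using gv by (intro disjI2 shape_C'_GvI[of "V k # g"]) auto
    next
      case 2 then show ?thesis using gv by (intro disjI2 shape_C'_ZI[of g]) auto
    next
      case 3 then show ?thesis using gv shape_C'_pureI unfolding pure_C'_def by blast
    qed
  next
    case z
    then have "t' = g" using m by (auto simp: tstep_Z)
    then show ?thesis using z shape_C'_pureI unfolding pure_C'_def by blast
  next
    case p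
    then show ?thesis using pure_C'_close[OF p m] shape_C'_pureI by blast
  qed
qed

definition const_str :: "'s const \<Rightarrow> 's list" where
  "const_str c = (case c of U k \<Rightarrow> uu k | V k \<Rightarrow> vv k | W w j \<Rightarrow> w | _ \<Rightarrow> [])"
definition const_idx :: "'s const \<Rightarrow> nat list" where
  "const_idx c = (case c of U k \<Rightarrow> [k] | V k \<Rightarrow> [k] | W w j \<Rightarrow> (if j = 0 then [] else [j]) | _ \<Rightarrow> [])"

definition str :: "'s const list \<Rightarrow> 's list" where "str t = concat (map const_str t)"
definition idxs :: "'s const list \<Rightarrow> nat list" where "idxs t = concat (map const_idx t)"

lemma str_simps[simp]: "str [] = []" "str (c # t) = const_str c @ str t" "str (a @ b) = str a @ str b"
  by (auto simp: str_def)
lemma idxs_simps[simp]: "idxs [] = []" "idxs (c # t) = const_idx c @ idxs t" "idxs (a @ b) = idxs a @ idxs b"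
  by (auto simp: idxs_def)
lemma const_str_simps[simp]: "const_str (U k) = uu k" "const_str (V k) = vv k" "const_str (W w j) = w"
  by (auto simp: const_str_def)
lemma const_idx_simps[simp]: "const_idx (U k) = [k]" "const_idx (V k) = [k]" "const_idx (W w j) = (if j = 0 then [] else [j])"
  by (auto simp: const_idx_def)

definition v_str :: "nat list \<Rightarrow> 's list" where "v_str is = concat (map vv is)"
definition realized :: "'s const list \<Rightarrow> bool" where "realized g \<longleftrightarrow> str g = v_str (idxs g)"

lemma str_mapV[simp]: "str (map V is) = v_str is" by (induction "is") (auto simp: v_str_def)
lemma idxs_mapV[simp]: "idxs (map V is) = is" by (induction "is") auto
lemma str_mapU[simp]: "str (map U is) = concat (map uu is)" by (induction "is") auto
lemma idxs_mapU[simp]: "idxs (map U is) = is" by (induction "is") auto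
lemma v_str_simps[simp]: "v_str [] = []" "v_str (k # is) = vv k @ v_str is" "v_str (a @ b) = v_str a @ v_str b"
  by (auto simp: v_str_def)

lemma realized_V: "realized (V k # g) \<longleftrightarrow> realized g"
  by (simp add: realized_def)
lemma realized_mapV: "realized (map V is)" by (simp add: realized_def)

definition view_D :: "'s const list \<Rightarrow> 's tview option" where
  "view_D t = (case t of [] \<Rightarrow> None | c # g \<Rightarrow> (case c of Gv \<Rightarrow> Some (if realized g then GvRealized else GvOpen (str g) (idxs g)) | _ \<Rightarrow> None))"

definition view_C :: "'s const list \<Rightarrow> 's tview option" where
  "view_C t = (case t of [] \<Rightarrow> None | c # g \<Rightarrow> (case c of Gu \<Rightarrow> Some (Rigid t) | Gv' \<Rightarrow> Some (Rigid t) | G \<Rightarrow> Some (Rigid t)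
     | Gv \<Rightarrow> (if realized g then None else Some (GvOpen (str g) (idxs g))) | Z \<Rightarrow> Some (ZOpen (str g) (idxs g)) | _ \<Rightarrow> None))"

definition view_I :: "'s const list \<Rightarrow> 's tview option" where
  "view_I t = (case t of [] \<Rightarrow> None | c # g \<Rightarrow> (case c of Gu \<Rightarrow> Some (Rigid t) | Gv' \<Rightarrow> Some (Rigid t) | G \<Rightarrow> Some (Rigid t)
     | G' \<Rightarrow> Some (Rigid t) | Gv \<Rightarrow> Some (GvOpen (str g) []) | Z \<Rightarrow> Some (ZOpen (str g) [])
     | _ \<Rightarrow> (if str t = [] then None else Some (Pure (str t) []))))"

definition view_S :: "'s const list \<Rightarrow> 's tview option" where
  "view_S t = (case t of [] \<Rightarrow> None | c # g \<Rightarrow> (case c of Gu \<Rightarrow> Some (Rigid t) | Gv' \<Rightarrow> Some (Rigid t) | G \<Rightarrow> Some (Rigid t)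
     | G' \<Rightarrow> Some (Rigid t) | Gv \<Rightarrow> Some (GvOpen [] (idxs g)) | Z \<Rightarrow> Some (ZOpen [] (idxs g))
     | _ \<Rightarrow> (if idxs t = [] then None else Some (Pure [] (idxs t)))))"

definition view_C' :: "'s const list \<Rightarrow> 's tview option" where
  "view_C' t = (case t of [] \<Rightarrow> None | c # g \<Rightarrow> (case c of Gu \<Rightarrow> Some (Rigid t) | Gv' \<Rightarrow> Some (Rigid t) | G \<Rightarrow> Some (Rigid t)
     | _ \<Rightarrow> None))"

lemmas view_defs = view_D_def view_C_def view_I_def view_S_def view_C'_def

lemma view_Nil[simp]: "view_D [] = None" "view_C [] = None" "view_I [] = None" "view_S [] = None" "view_C' [] = None"
  by (auto simp: view_defs)

lemma view_I_basic: "basic c \<Longrightarrow> view_I (c # g) = (if str (c # g) = [] then None else Some (Pure (str (c # g)) []))"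
  unfolding basic_def uv_const_def Wset_def view_I_def by (auto simp del: str_simps)
lemma view_S_basic: "basic c \<Longrightarrow> view_S (c # g) = (if idxs (c # g) = [] then None else Some (Pure [] (idxs (c # g))))"
  unfolding basic_def uv_const_def Wset_def view_S_def by (auto simp del: idxs_simps)
lemma view_D_basic: "basic c \<Longrightarrow> view_D (c # g) = None"
  unfolding basic_def uv_const_def Wset_def view_D_def by auto
lemma view_C_basic: "basic c \<Longrightarrow> view_C (c # g) = None"
  unfolding basic_def uv_const_def Wset_def view_C_def by auto
lemma view_C'_basic: "basic c \<Longrightarrow> view_C' (c # g) = None"
  unfolding basic_def uv_const_def Wset_def view_C'_def by auto

definition views :: "('s const list \<Rightarrow> 's tview option) \<Rightarrow> 's const list multiset \<Rightarrow> 's tview multiset" where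
  "views f T = image_mset (\<lambda>t. the (f t)) (filter_mset (\<lambda>t. f t \<noteq> None) T)"

lemma views_empty[simp]: "views f {#} = {#}" by (simp add: views_def)
lemma views_plus[simp]: "views f (A + B) = views f A + views f B" by (simp add: views_def)
lemma views_add_none[simp]: "f t = None \<Longrightarrow> views f (add_mset t A) = views f A"
  by (auto simp: views_def)
lemma views_add_some[simp]: "f t = Some v \<Longrightarrow> views f (add_mset t A) = add_mset v (views f A)"
  by (auto simp: views_def)
lemma views_add_mset: "views f (add_mset t A) = views f A + views f {#t#}"
  by (cases "f t") (auto simp: views_def)

lemma Gu_grow: "set \<alpha> \<subseteq> Ix \<Longrightarrow> ttaus (Gu # r) (Gu # map U \<alpha> @ r)"
proof (induction \<alpha>)
  case (Cons k \<alpha>)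
  have "ttau (Gu # map U \<alpha> @ r) (Gu # U k # map U \<alpha> @ r)" using Cons.prems by (simp add: tstep_Gu)
  then show ?case using Cons by (auto intro: rtranclp.rtrancl_into_rtrancl)
qed simp

lemma Gv'_grow: "set \<beta> \<subseteq> Ix \<Longrightarrow> ttaus (Gv' # r) (Gv' # map V \<beta> @ r)"
proof (induction \<beta>)
  case (Cons k \<beta>)
  have "ttau (Gv' # map V \<beta> @ r) (Gv' # V k # map V \<beta> @ r)" using Cons.prems by (simp add: tstep_Gv')
  then show ?case using Cons by (auto intro: rtranclp.rtrancl_into_rtrancl)
qed simp

lemma Gv_grow: "set \<beta> \<subseteq> Ix \<Longrightarrow> ttaus (Gv # r) (Gv # map V \<beta> @ r)"
proof (induction \<beta>)
  case (Cons k \<beta>)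
  have "ttau (Gv # map V \<beta> @ r) (Gv # V k # map V \<beta> @ r)" using Cons.prems by (simp add: tstep_Gv)
  then show ?case using Cons by (auto intro: rtranclp.rtrancl_into_rtrancl)
qed simp

lemma G_grow: "uv_list g \<Longrightarrow> ttaus (G # r) (G # g @ r)"
proof (induction g)
  case (Cons c g)
  then obtain k where k: "k \<in> Ix" "c = U k \<or> c = V k" unfolding uv_const_def by auto
  have "ttau (G # g @ r) (G # c # g @ r)" using k by (auto simp: tstep_G)
  then show ?case using Cons by (auto intro: rtranclp.rtrancl_into_rtrancl)
qed simp

lemma G'_grow: "basic_list g \<Longrightarrow> ttaus (G' # r) (G' # g @ r)"
proof (induction g)
  case (Cons c g)
  then have "basic c" by simp
  then have "ttau (G' # g @ r) (G' # c # g @ r)" unfolding basic_def uv_const_def by (auto simp: tstep_G')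
  then show ?case using Cons by (auto intro: rtranclp.rtrancl_into_rtrancl)
qed simp

lemma W_reach: "W w0 k \<in> Ws \<Longrightarrow> k \<in> Ix \<Longrightarrow> suffix w w0 \<Longrightarrow> j = k \<or> j = 0 \<Longrightarrow> ttaus (W w0 k # r) (W w j # r)"
proof -
  assume a: "W w0 k \<in> Ws" "k \<in> Ix" "suffix w w0" "j = k \<or> j = 0"
  have 1: "ttaus (W w0 k # r) (W w k # r)" using W_skip[OF a(1,3)] .
  show ?thesis
  proof (cases "j = k")
    case False
    then have "j = 0" using a by auto
    have "ttau (W w k # r) (W w 0 # r)" using a W_sufl[OF a(1,3)] by (simp add: tstep_W)
    then show ?thesis using 1 \<open>j = 0\<close> by (auto intro: rtranclp.rtrancl_into_rtrancl)
  qed (use 1 in simp)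
qed

lemma ttaus_trans: "ttaus a b \<Longrightarrow> ttaus b c \<Longrightarrow> ttaus a c" by (rule rtranclp_trans)
lemma ttaus_stepl: "ttau a b \<Longrightarrow> ttaus b c \<Longrightarrow> ttaus a c" by (rule converse_rtranclp_into_rtranclp)
lemma ttaus_snoc: "ttaus a b \<Longrightarrow> ttau b c \<Longrightarrow> ttaus a c" by (rule rtranclp.rtrancl_into_rtrancl)

lemma spawn_vs_us: "set \<beta> \<subseteq> Ix \<Longrightarrow> set \<alpha> \<subseteq> Ix \<Longrightarrow> ttaus [Gu] (Z # vs_us \<beta> \<alpha>) \<and> ttaus [Gu] (Gv' # vs_us \<beta> \<alpha>)"
proof -
  assume a: "set \<beta> \<subseteq> Ix" "set \<alpha> \<subseteq> Ix"
  have 1: "ttaus [Gu] (Gu # map U \<alpha>)" using Gu_grow[OF a(2), of "[]"] by simp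
  have 2: "ttau (Gu # map U \<alpha>) (Gv' # map U \<alpha>)" by (simp add: tstep_Gu)
  have 3: "ttaus (Gv' # map U \<alpha>) (Gv' # vs_us \<beta> \<alpha>)" using Gv'_grow[OF a(1)] by (simp add: vs_us_def)
  have 4: "ttau (Gv' # vs_us \<beta> \<alpha>) (Z # vs_us \<beta> \<alpha>)" by (simp add: tstep_Gv')
  have "ttaus [Gu] (Gv' # vs_us \<beta> \<alpha>)" using ttaus_trans[OF ttaus_snoc[OF 1 2] 3] .
  then show ?thesis using 4 by (meson rtranclp.rtrancl_into_rtrancl)
qed

lemma spawn_D: "shape_D t \<Longrightarrow> view_D t = None \<Longrightarrow> ttaus [Gu] t"
proof -
  assume o: "shape_D t" and n: "view_D t = None"
  from o consider (gu) \<alpha> where "set \<alpha> \<subseteq> Ix" "t = Gu # map U \<alpha>"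
    | (gv') \<beta> \<alpha> where "set \<beta> \<subseteq> Ix" "set \<alpha> \<subseteq> Ix" "t = Gv' # vs_us \<beta> \<alpha>"
    | (z) \<beta> \<alpha> where "set \<beta> \<subseteq> Ix" "set \<alpha> \<subseteq> Ix" "t = Z # vs_us \<beta> \<alpha>"
    | (gv) \<beta> \<alpha> where "set \<beta> \<subseteq> Ix" "set \<alpha> \<subseteq> Ix" "t = Gv # vs_us \<beta> \<alpha>"
    | (p) "pure_D t"
    unfolding shape_D_def by blast
  then show ?thesis
  proof cases
    case gu then show ?thesis using Gu_grow[of \<alpha> "[]"] by simp
  next
    case gv' then show ?thesis using spawn_vs_us by blast
  next
    case z then show ?thesis using spawn_vs_us by blast
  next
    case gv then show ?thesis using n by (simp add: view_D_def)
  next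
    case p
    have zv: "set \<beta> \<subseteq> Ix \<Longrightarrow> set \<alpha> \<subseteq> Ix \<Longrightarrow> ttaus [Gu] (vs_us \<beta> \<alpha>)" for \<beta> \<alpha>
      using spawn_vs_us[of \<beta> \<alpha>] ttaus_snoc[of "[Gu]" "Z # vs_us \<beta> \<alpha>" "vs_us \<beta> \<alpha>"] by (simp add: tstep_Z)
    from p consider (a) \<beta> \<alpha> where "set \<beta> \<subseteq> Ix" "set \<alpha> \<subseteq> Ix" "t = vs_us \<beta> \<alpha>"
      | (b) w j \<beta> \<alpha> where "set \<beta> \<subseteq> Ix" "set \<alpha> \<subseteq> Ix" "v_suffix w j" "t = W w j # vs_us \<beta> \<alpha>"
      | (c) w j \<alpha> where "set \<alpha> \<subseteq> Ix" "u_suffix w j" "t = W w j # map U \<alpha>"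
      unfolding pure_D_def by blast
    then show ?thesis
    proof cases
      case a then show ?thesis using zv by blast
    next
      case b
      then obtain k where k: "k \<in> Ix" "j = k \<or> j = 0" "suffix w (vv k)" unfolding v_suffix_def by blast
      have 1: "ttaus [Gu] (V k # vs_us \<beta> \<alpha>)" using zv[of "k # \<beta>" \<alpha>] b k by simp
      have 2: "ttau (V k # vs_us \<beta> \<alpha>) (W (vv k) k # vs_us \<beta> \<alpha>)" using k by (simp add: tstep_V)
      have 3: "ttaus (W (vv k) k # vs_us \<beta> \<alpha>) t" using W_reach[OF W_V[OF k(1)] k(1) k(3) k(2)] b by simp
      show ?thesis using ttaus_trans[OF ttaus_snoc[OF 1 2] 3] .
    next
      case c
      then obtain k where k: "k \<in> Ix" "j = k \<or> j = 0" "suffix w (uu k)" unfolding u_suffix_def by blast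
      have 1: "ttaus [Gu] (U k # map U \<alpha>)" using zv[of "[]" "k # \<alpha>"] c k by simp
      have 2: "ttau (U k # map U \<alpha>) (W (uu k) k # map U \<alpha>)" using k by (simp add: tstep_U)
      have 3: "ttaus (W (uu k) k # map U \<alpha>) t" using W_reach[OF W_U[OF k(1)] k(1) k(3) k(2)] c by simp
      show ?thesis using ttaus_trans[OF ttaus_snoc[OF 1 2] 3] .
    qed
  qed
qed

lemma spawn_pure_C: "pure_C t \<Longrightarrow> ttaus [G] t"
proof -
  assume p: "pure_C t"
  have gg: "uv_list g \<Longrightarrow> ttaus [G] g" for g
  proof -
    assume "uv_list g"
    then have "ttaus [G] (G # g)" using G_grow[of g "[]"] by simp
    moreover have "ttau (G # g) g" by (simp add: tstep_G)
    ultimately show ?thesis by (rule ttaus_snoc)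
  qed
  from p consider (a) "uv_list t" | (b) w j g where "W w j \<in> Ws" "uv_list g" "t = W w j # g"
    unfolding pure_C_def by blast
  then show ?thesis
  proof cases
    case a then show ?thesis using gg by blast
  next
    case b
    from b(1) consider k where "k \<in> Ix" "j = k \<or> j = 0" "suffix w (uu k)" | k where "k \<in> Ix" "j = k \<or> j = 0" "suffix w (vv k)"
      unfolding Ws_iff u_suffix_def v_suffix_def by blast
    then show ?thesis
    proof cases
      case 1
      have "ttaus [G] (U k # g)" using gg[of "U k # g"] b 1 by simp
      moreover have "ttau (U k # g) (W (uu k) k # g)" using 1 by (simp add: tstep_U)
      moreover have "ttaus (W (uu k) k # g) t" using W_reach[OF W_U[OF 1(1)] 1(1) 1(3) 1(2)] b by simp
      ultimately show ?thesis using ttaus_trans ttaus_snoc by metis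
    next
      case 2
      have "ttaus [G] (V k # g)" using gg[of "V k # g"] b 2 by simp
      moreover have "ttau (V k # g) (W (vv k) k # g)" using 2 by (simp add: tstep_V)
      moreover have "ttaus (W (vv k) k # g) t" using W_reach[OF W_V[OF 2(1)] 2(1) 2(3) 2(2)] b by simp
      ultimately show ?thesis using ttaus_trans ttaus_snoc by metis
    qed
  qed
qed

lemma spawn_Gv: "set \<beta> \<subseteq> Ix \<Longrightarrow> ttaus [Gv] (Gv # map V \<beta>)"
  using Gv_grow[of \<beta> "[]"] by simp

lemma spawn_C': "shape_C' t \<Longrightarrow> view_C' t = None \<Longrightarrow> ttaus [G'] t"
proof -
  assume o: "shape_C' t" and n: "view_C' t = None"
  have g': "basic_list g \<Longrightarrow> ttaus [G'] (G' # g)" for g using G'_grow[of g "[]"] by simp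
  from o consider (gu) \<alpha> where "set \<alpha> \<subseteq> Ix" "t = Gu # map U \<alpha>"
    | (gv') \<beta> \<alpha> where "set \<beta> \<subseteq> Ix" "set \<alpha> \<subseteq> Ix" "t = Gv' # vs_us \<beta> \<alpha>"
    | (g) g where "uv_list g" "t = G # g" | (g2) g where "basic_list g" "t = G' # g"
    | (gv) g where "basic_list g" "t = Gv # g" | (z) g where "basic_list g" "t = Z # g"
    | (p) "pure_C' t"
    unfolding shape_C'_def by blast
  then show ?thesis
  proof cases
    case g2 then show ?thesis using g' by blast
  next
    case gv then show ?thesis using g'[of g] ttaus_snoc[of "[G']" "G' # g" "Gv # g"] by (simp add: tstep_G')
  next
    case z then show ?thesis using g'[of g] ttaus_snoc[of "[G']" "G' # g" "Z # g"] by (simp add: tstep_G')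
  next
    case p
    then have "ttaus [G'] (Z # t)" using g'[of t] ttaus_snoc[of "[G']" "G' # t" "Z # t"] unfolding pure_C'_def by (simp add: tstep_G')
    then show ?thesis using ttaus_snoc[of "[G']" "Z # t" t] by (simp add: tstep_Z)
  qed (use n in \<open>auto simp: view_C'_def\<close>)
qed

lemma vs_us_basic_list: "set \<beta> \<subseteq> Ix \<Longrightarrow> set \<alpha> \<subseteq> Ix \<Longrightarrow> basic_list (vs_us \<beta> \<alpha>)"
  using uv_list_basic_list uv_list_vs_us by blast

lemma vanish_Z: "basic_list g \<Longrightarrow> ttaus (Z # g) []"
  using basics_vanish[of g] ttaus_stepl[of "Z # g" g "[]"] by (simp add: tstep_Z)

lemma vanish_Gv: "basic_list g \<Longrightarrow> ttaus (Gv # g) []"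
  using basics_vanish[of g] ttaus_stepl[of "Gv # g" g "[]"] by (simp add: tstep_Gv)

lemma vanish_Gv': "set \<beta> \<subseteq> Ix \<Longrightarrow> set \<alpha> \<subseteq> Ix \<Longrightarrow> ttaus (Gv' # vs_us \<beta> \<alpha>) []"
  using vanish_Z[OF vs_us_basic_list] ttaus_stepl[of "Gv' # vs_us \<beta> \<alpha>" "Z # vs_us \<beta> \<alpha>" "[]"] by (simp add: tstep_Gv')

lemma vanish_D: "shape_D t \<Longrightarrow> ttaus t []"
proof -
  assume o: "shape_D t"
  from o consider (gu) \<alpha> where "set \<alpha> \<subseteq> Ix" "t = Gu # map U \<alpha>"
    | (gv') \<beta> \<alpha> where "set \<beta> \<subseteq> Ix" "set \<alpha> \<subseteq> Ix" "t = Gv' # vs_us \<beta> \<alpha>"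
    | (z) \<beta> \<alpha> where "set \<beta> \<subseteq> Ix" "set \<alpha> \<subseteq> Ix" "t = Z # vs_us \<beta> \<alpha>"
    | (gv) \<beta> \<alpha> where "set \<beta> \<subseteq> Ix" "set \<alpha> \<subseteq> Ix" "t = Gv # vs_us \<beta> \<alpha>"
    | (p) "pure_D t"
    unfolding shape_D_def by blast
  then show ?thesis
  proof cases
    case gu
    then show ?thesis using vanish_Gv'[of "[]" \<alpha>] ttaus_stepl[of t "Gv' # map U \<alpha>" "[]"] by (simp add: tstep_Gu)
  next
    case gv' then show ?thesis using vanish_Gv' by simp
  next
    case z then show ?thesis using vanish_Z vs_us_basic_list by simp
  next
    case gv then show ?thesis using vanish_Gv vs_us_basic_list by simp
  next
    case p then show ?thesis using basics_vanish pure_C_basic_list pure_D_pure_C by blast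
  qed
qed

lemma vanish_C: "shape_C t \<Longrightarrow> view_C t = None \<Longrightarrow> ttaus t []"
proof -
  assume o: "shape_C t" and n: "view_C t = None"
  from o consider (gu) \<alpha> where "set \<alpha> \<subseteq> Ix" "t = Gu # map U \<alpha>"
    | (gv') \<beta> \<alpha> where "set \<beta> \<subseteq> Ix" "set \<alpha> \<subseteq> Ix" "t = Gv' # vs_us \<beta> \<alpha>"
    | (g) g where "uv_list g" "t = G # g" | (gv) g where "uv_list g" "t = Gv # g" | (z) g where "uv_list g" "t = Z # g"
    | (p) "pure_C t"
    unfolding shape_C_def by blast
  then show ?thesis
  proof cases
    case gv then show ?thesis using vanish_Gv uv_list_basic_list by simp
  next
    case p then show ?thesis using basics_vanish pure_C_basic_list by blast
  qed (use n in \<open>auto simp: view_C_def\<close>)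
qed

lemma vanish_C': "shape_C' t \<Longrightarrow> view_C' t = None \<Longrightarrow> ttaus t []"
proof -
  assume o: "shape_C' t" and n: "view_C' t = None"
  from o consider (gu) \<alpha> where "set \<alpha> \<subseteq> Ix" "t = Gu # map U \<alpha>"
    | (gv') \<beta> \<alpha> where "set \<beta> \<subseteq> Ix" "set \<alpha> \<subseteq> Ix" "t = Gv' # vs_us \<beta> \<alpha>"
    | (g) g where "uv_list g" "t = G # g" | (g2) g where "basic_list g" "t = G' # g"
    | (gv) g where "basic_list g" "t = Gv # g" | (z) g where "basic_list g" "t = Z # g"
    | (p) "pure_C' t"
    unfolding shape_C'_def by blast
  then show ?thesis
  proof cases
    case g2 then show ?thesis using vanish_Z[of g] ttaus_stepl[of "G' # g" "Z # g" "[]"] by (simp add: tstep_G')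
  next
    case gv then show ?thesis using vanish_Gv by simp
  next
    case z then show ?thesis using vanish_Z by simp
  next
    case p then show ?thesis using basics_vanish unfolding pure_C'_def by blast
  qed (use n in \<open>auto simp: view_C'_def\<close>)
qed

lemma ttaus_mtaus: "ttaus t t' \<Longrightarrow> mtaus (M + thread_mset t) (M + thread_mset t')"
proof (induction rule: rtranclp_induct)
  case (step t1 t2)
  then obtain c r where "t1 = c # r" unfolding tstep_def by auto
  then have "mstep (M + thread_mset t1) Tau (M + thread_mset t2)" using step.hyps(2) unfolding mstep_def by auto
  then show ?case using rtranclp.rtrancl_into_rtrancl[OF step.IH] by blast
qed simp

lemma ttaus_mtaus_add: "ttaus t t' \<Longrightarrow> t \<noteq> [] \<Longrightarrow> mtaus (add_mset t M) (M + thread_mset t')"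
  using ttaus_mtaus[of t t' M] by (cases t) (auto simp: add.commute)

lemma cstep_mstep: "cstep c l r \<Longrightarrow> mstep (add_mset [c] M) l (M + r)"
  unfolding mstep_def by blast

lemma spawn_thread:
  assumes "cstep c Tau {#[c], [g]#}" "ttaus [g] t" "t \<noteq> []"
  shows "mtaus (add_mset [c] M) (add_mset [c] (add_mset t M))"
proof -
  have "mstep (add_mset [c] M) Tau (M + {#[c], [g]#})" by (rule cstep_mstep[OF assms(1)])
  then have "mstep (add_mset [c] M) Tau (add_mset [c] M + thread_mset [g])" by (simp add: add_mset_commute)
  then have 1: "mtaus (add_mset [c] M) (add_mset [c] M + thread_mset [g])" by (rule r_into_rtranclp)
  have "mtaus (add_mset [c] M + thread_mset [g]) (add_mset [c] M + thread_mset t)" by (rule ttaus_mtaus[OF assms(2)])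
  then show ?thesis using 1 assms(3) by (cases t) (auto simp: add_mset_commute intro: rtranclp_trans)
qed

lemma spawn_many:
  assumes "\<forall>t\<in>#A. t \<noteq> [] \<and> (\<exists>g. cstep c Tau {#[c], [g]#} \<and> ttaus [g] t)"
  shows "mtaus (add_mset [c] M) (add_mset [c] (M + A))"
  using assms
proof (induction A)
  case (add t A)
  then obtain g where "cstep c Tau {#[c], [g]#}" "ttaus [g] t" "t \<noteq> []" by auto
  from spawn_thread[OF this, of "M + A"] add show ?case by (auto intro: rtranclp_trans)
qed simp

lemma vanish_many:
  assumes "\<forall>t\<in>#A. t \<noteq> [] \<and> ttaus t []"
  shows "mtaus (M + A) M"
  using assms
proof (induction A)
  case (add t A)
  then have "mtaus (M + A + thread_mset t) (M + A + thread_mset [])" using ttaus_mtaus[of t "[]" "M + A"] by auto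
  then have "mtaus (M + add_mset t A) (M + A)" using add by (cases t) auto
  then show ?case using add by (auto intro: rtranclp_trans)
qed simp

definition mmap_partial :: "('s tview \<Rightarrow> 's tview option) \<Rightarrow> 's tview multiset \<Rightarrow> 's tview multiset" where
  "mmap_partial h Vs = image_mset (\<lambda>v. the (h v)) (filter_mset (\<lambda>v. h v \<noteq> None) Vs)"

lemma views_bind: "\<forall>t\<in>#A. f2 t = Option.bind (f1 t) h \<Longrightarrow> views f2 A = mmap_partial h (views f1 A)"
proof (induction A)
  case (add t A)
  then show ?case by (cases "f1 t"; cases "f2 t") (auto simp: mmap_partial_def views_def)
qed (simp add: mmap_partial_def)

lemma views_filter_some: "views f (filter_mset (\<lambda>t. f t \<noteq> None) A) = views f A"
  by (simp add: views_def filter_filter_mset)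
lemma views_filter_none: "views f (filter_mset (\<lambda>t. f t = None) A) = {#}"
  by (simp add: views_def)
lemma views_all_none: "\<forall>t\<in>#A. f t = None \<Longrightarrow> views f A = {#}"
  by (induction A) auto
lemma views_image_same: "\<forall>t\<in>#A. f (g t) = f t \<Longrightarrow> views f (image_mset g A) = views f A"
proof (induction A)
  case (add x A)
  then show ?case by (cases "f x") auto
qed simp

lemma views_mem: "v \<in># views f T \<Longrightarrow> \<exists>t\<in>#T. f t = Some v"
  unfolding views_def by auto

definition phases :: "'s const set" where "phases = {D, C, I, S, C'}"

definition shape_of :: "'s const \<Rightarrow> 's const list \<Rightarrow> bool" where
  "shape_of c = (if c = D then shape_D else if c = C' then shape_C' else shape_C)"

definition view_of :: "'s const \<Rightarrow> 's const list \<Rightarrow> 's tview option" where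
  "view_of c = (if c = D then view_D else if c = C then view_C else if c = I then view_I else if c = S then view_S else view_C')"

lemma shape_of_simps[simp]: "shape_of D = shape_D" "shape_of C = shape_C" "shape_of I = shape_C" "shape_of S = shape_C" "shape_of C' = shape_C'"
  by (auto simp: shape_of_def)
lemma view_of_simps[simp]: "view_of D = view_D" "view_of C = view_C" "view_of I = view_I" "view_of S = view_S" "view_of C' = view_C'"
  by (auto simp: view_of_def)

definition shapes :: "'s const \<Rightarrow> 's const list multiset \<Rightarrow> bool" where
  "shapes c T \<longleftrightarrow> (\<forall>t\<in>#T. shape_of c t)"

lemma shapes_simps[simp]: "shapes c {#} = True" "shapes c (add_mset t T) \<longleftrightarrow> shape_of c t \<and> shapes c T"
  "shapes c (A + B) \<longleftrightarrow> shapes c A \<and> shapes c B"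
  by (auto simp: shapes_def)

lemma shapes_thread_mset: "t = [] \<or> shape_of c t \<Longrightarrow> shapes c (thread_mset t)"
  by (cases t) auto

definition phase_equiv :: "'s const \<Rightarrow> 's const list multiset \<Rightarrow> 's const list multiset \<Rightarrow> bool" where
  "phase_equiv c T T' \<longleftrightarrow> shapes c T \<and> shapes c T' \<and> views (view_of c) T = views (view_of c) T'"

definition phase_rel :: "'s const list multiset \<Rightarrow> 's const list multiset \<Rightarrow> bool" where
  "phase_rel m n \<longleftrightarrow> (\<exists>c T T'. c \<in> phases \<and> m = add_mset [c] T \<and> n = add_mset [c] T' \<and> phase_equiv c T T')"

lemma phase_rel_I: "c \<in> phases \<Longrightarrow> phase_equiv c T T' \<Longrightarrow> phase_rel (add_mset [c] T) (add_mset [c] T')"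
  unfolding phase_rel_def by blast

definition mimics :: "'s const \<Rightarrow> 's const list \<Rightarrow> 's const list \<Rightarrow> 's act \<Rightarrow> 's const list \<Rightarrow> bool" where
  "mimics c t2 t l t' \<longleftrightarrow> (\<exists>t2'' t2'. ttaus t2 t2'' \<and> shape_of c t2'' \<and> view_of c t2'' = view_of c t \<and>
     tstep t2'' l t2' \<and> views (view_of c) (thread_mset t2') = views (view_of c) (thread_mset t') \<and>
     (t2' = [] \<or> shape_of c t2'))"

text \<open>The ways in which a step of a thread in phase \<open>c\<close> is answered by a related configuration:
  the step is silent and does not change the views; the thread is invisible, so the partner forks a
  thread with the same behaviour from a generator; the thread is visible, and every thread with the
  same view mimics the step; or the step is matched by a self-loop of the control constant.\<close>

definition thread_matched :: "'s const \<Rightarrow> 's const list \<Rightarrow> 's act \<Rightarrow> 's const list \<Rightarrow> bool" where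
  "thread_matched c t l t' \<longleftrightarrow>
     (l = Tau \<and> views (view_of c) (thread_mset t') = views (view_of c) {#t#}) \<or>
     (view_of c t = None \<and> (\<exists>g tg tg'. cstep c Tau {#[c], [g]#} \<and> ttaus [g] tg \<and> shape_of c tg \<and> tg \<noteq> [] \<and>
        view_of c tg = None \<and> tstep tg l tg' \<and>
        views (view_of c) (thread_mset tg') = views (view_of c) (thread_mset t') \<and> (tg' = [] \<or> shape_of c tg'))) \<or>
     (view_of c t \<noteq> None \<and> (\<forall>t2. shape_of c t2 \<and> view_of c t2 = view_of c t \<longrightarrow> mimics c t2 t l t')) \<or>
     (cstep c l {#[c]#} \<and> views (view_of c) (thread_mset t') = views (view_of c) {#t#})"

lemma shape_of_nonempty: "shape_of c t \<Longrightarrow> t \<noteq> []"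
  unfolding shape_of_def shape_D_def shape_C_def shape_C'_def pure_D_def pure_C_def pure_C'_def by (auto split: if_splits)

lemma partner_step_matched:
  assumes c: "c \<in> phases" and p: "phase_equiv c T T'" and T: "T = add_mset t T0"
    and cl: "t' = [] \<or> shape_of c t'" and v: "view_of c t = Some v"
    and mim: "\<forall>t2. shape_of c t2 \<and> view_of c t2 = view_of c t \<longrightarrow> mimics c t2 t l t'"
  shows "matched phase_rel (add_mset [c] T) (add_mset [c] T') l (add_mset [c] (T0 + thread_mset t'))"
proof -
  let ?f = "view_of c"
  have okT: "shapes c T" "shapes c T'" and amT: "views ?f T = views ?f T'" using p unfolding phase_equiv_def by auto
  have okT0: "shapes c (T0 + thread_mset t')" using okT T shapes_thread_mset[OF cl] by auto
  have "v \<in># views ?f T'" using amT T v by (metis views_add_some union_single_eq_member)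
  then obtain t2 where t2: "t2 \<in># T'" "?f t2 = Some v" using views_mem by blast
  then obtain T2 where T2: "T' = add_mset t2 T2" by (metis multi_member_split)
  have "shape_of c t2" using okT T2 by simp
  then have "mimics c t2 t l t'" using mim t2(2) v by simp
  then obtain t2'' t2' where q: "ttaus t2 t2''" "shape_of c t2''" "?f t2'' = ?f t" "tstep t2'' l t2'"
      "views ?f (thread_mset t2') = views ?f (thread_mset t')" "t2' = [] \<or> shape_of c t2'"
    unfolding mimics_def by blast
  let ?n'' = "add_mset [c] (add_mset t2'' T2)" and ?n' = "add_mset [c] (T2 + thread_mset t2')"
  have "t2 \<noteq> []" using \<open>shape_of c t2\<close> shape_of_nonempty by blast
  then have "mtaus (add_mset t2 (add_mset [c] T2)) (add_mset [c] T2 + thread_mset t2'')"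
    using ttaus_mtaus_add[OF q(1)] by blast
  then have 1: "mtaus (add_mset [c] T') ?n''" using T2 shape_of_nonempty[OF q(2)]
    by (cases t2'') (auto simp: add_mset_commute)
  have "mstep (add_mset t2'' (add_mset [c] T2)) l (add_mset [c] T2 + thread_mset t2')"
    using q(4) unfolding mstep_def by blast
  then have 2: "mstep ?n'' l ?n'" by (simp add: add_mset_commute add.commute)
  have amT2: "views ?f T0 = views ?f T2" using amT T T2 v t2(2) by simp
  have 3: "phase_rel (add_mset [c] T) ?n''"
    using okT T2 q(2,3) amT T v c t2(2) by (intro phase_rel_I) (auto simp: phase_equiv_def)
  have 4: "phase_rel (add_mset [c] (T0 + thread_mset t')) ?n'"
    using okT0 okT T2 q(5,6) amT2 c shapes_thread_mset[of t2' c] by (intro phase_rel_I) (auto simp: phase_equiv_def)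
  show ?thesis using 1 2 3 4 unfolding matched_def by blast
qed

lemma thread_step_matched:
  assumes c: "c \<in> phases" and p: "phase_equiv c T T'" and T: "T = add_mset t T0"
    and cl: "t' = [] \<or> shape_of c t'" and H: "thread_matched c t l t'"
  shows "matched phase_rel (add_mset [c] T) (add_mset [c] T') l (add_mset [c] (T0 + thread_mset t'))"
proof -
  let ?f = "view_of c"
  have okT: "shapes c T" "shapes c T'" and amT: "views ?f T = views ?f T'" using p unfolding phase_equiv_def by auto
  have okT0: "shapes c (T0 + thread_mset t')" using okT T shapes_thread_mset[OF cl] by auto
  from H[unfolded thread_matched_def] consider
      (inert) "l = Tau" "views ?f (thread_mset t') = views ?f {#t#}"
    | (gen) g tg tg' where "?f t = None" "cstep c Tau {#[c], [g]#}" "ttaus [g] tg" "shape_of c tg" "tg \<noteq> []"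
         "?f tg = None" "tstep tg l tg'" "views ?f (thread_mset tg') = views ?f (thread_mset t')" "tg' = [] \<or> shape_of c tg'"
    | (partner) "?f t \<noteq> None" "\<forall>t2. shape_of c t2 \<and> ?f t2 = ?f t \<longrightarrow> mimics c t2 t l t'"
    | (loop) "cstep c l {#[c]#}" "views ?f (thread_mset t') = views ?f {#t#}"
    by blast
  then show ?thesis
  proof cases
    case inert
    have "views ?f (T0 + thread_mset t') = views ?f T'" using inert amT T views_add_mset[of ?f t T0] by simp
    then have "phase_rel (add_mset [c] (T0 + thread_mset t')) (add_mset [c] T')"
      using okT0 okT c by (intro phase_rel_I) (auto simp: phase_equiv_def)
    then show ?thesis using inert unfolding matched_def by blast
  next
    case gen
    let ?n'' = "add_mset [c] (add_mset tg T')" and ?n' = "add_mset [c] (T' + thread_mset tg')"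
    have 1: "mtaus (add_mset [c] T') ?n''" using spawn_thread[OF gen(2,3,5)] .
    have "mstep (add_mset tg (add_mset [c] T')) l (add_mset [c] T' + thread_mset tg')"
      using gen(7) unfolding mstep_def by blast
    then have 2: "mstep ?n'' l ?n'" by (simp add: add_mset_commute add.commute)
    have 3: "phase_rel (add_mset [c] T) ?n''" using gen okT amT c by (intro phase_rel_I) (auto simp: phase_equiv_def)
    have "views ?f T0 = views ?f T" using T gen(1) by simp
    then have "views ?f (T0 + thread_mset t') = views ?f (T' + thread_mset tg')" using amT gen(8) by simp
    then have 4: "phase_rel (add_mset [c] (T0 + thread_mset t')) ?n'"
      using okT0 okT gen(9) c shapes_thread_mset[of tg' c] by (intro phase_rel_I) (auto simp: phase_equiv_def)
    show ?thesis using 1 2 3 4 unfolding matched_def by blast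
  next
    case partner
    then obtain v where "?f t = Some v" by auto
    from partner_step_matched[OF c p T cl this] show ?thesis using partner(2) by blast
  next
    case loop
    have 2: "mstep (add_mset [c] T') l (add_mset [c] T')" using cstep_mstep[OF loop(1), of T'] by simp
    have 3: "phase_rel (add_mset [c] T) (add_mset [c] T')" using phase_rel_I[OF c p] .
    have "views ?f (T0 + thread_mset t') = views ?f T'" using loop amT T views_add_mset[of ?f t T0] by simp
    then have 4: "phase_rel (add_mset [c] (T0 + thread_mset t')) (add_mset [c] T')"
      using okT0 okT c by (intro phase_rel_I) (auto simp: phase_equiv_def)
    show ?thesis using 2 3 4 unfolding matched_def by blast
  qed
qed

lemma Rigid_view: "c \<in> phases \<Longrightarrow> view_of c t = Some (Rigid x) \<Longrightarrow> x = t"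
  unfolding phases_def
  by (auto simp: view_defs split: list.splits const.splits if_splits)

lemma pure_C_head: "pure_C t \<Longrightarrow> \<exists>c g. t = c # g \<and> basic c"
  unfolding pure_C_def basic_def by (cases t) auto

definition pure_view_I :: "'s list \<Rightarrow> 's tview multiset" where
  "pure_view_I s = (if s = [] then {#} else {#Pure s []#})"
definition pure_view_S :: "nat list \<Rightarrow> 's tview multiset" where
  "pure_view_S i = (if i = [] then {#} else {#Pure [] i#})"

lemma views_I_pure: "t = [] \<or> pure_C t \<Longrightarrow> views view_I (thread_mset t) = pure_view_I (str t)"
proof -
  assume "t = [] \<or> pure_C t"
  then show ?thesis
  proof
    assume "pure_C t"
    then obtain c g where "t = c # g" "basic c" using pure_C_head by blast
    then show ?thesis using view_I_basic[of c g] by (auto simp: pure_view_I_def simp del: str_simps)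
  qed (simp add: pure_view_I_def)
qed

lemma views_S_pure: "t = [] \<or> pure_C t \<Longrightarrow> views view_S (thread_mset t) = pure_view_S (idxs t)"
proof -
  assume "t = [] \<or> pure_C t"
  then show ?thesis
  proof
    assume "pure_C t"
    then obtain c g where "t = c # g" "basic c" using pure_C_head by blast
    then show ?thesis using view_S_basic[of c g] by (auto simp: pure_view_S_def simp del: idxs_simps)
  qed (simp add: pure_view_S_def)
qed

lemma uv_list_pure: "uv_list g \<Longrightarrow> g = [] \<or> pure_C g"
  unfolding pure_C_def by auto

lemma uv_list_idxs: "uv_list g \<Longrightarrow> set (idxs g) \<subseteq> Ix"
  by (induction g) (auto simp: uv_const_def)

lemma views_C_pure: "t = [] \<or> pure_C t \<Longrightarrow> views view_C (thread_mset t) = {#}"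
  using pure_C_head view_C_basic by (cases t) fastforce+
lemma views_D_pure: "t = [] \<or> pure_C t \<Longrightarrow> views view_D (thread_mset t) = {#}"
  using pure_C_head view_D_basic by (cases t) fastforce+
lemma views_C'_pure: "t = [] \<or> pure_C' t \<Longrightarrow> views view_C' (thread_mset t) = {#}"
  unfolding pure_C'_def using view_C'_basic by (cases t) fastforce+

lemma normalize_I_uv: "uv_list t \<Longrightarrow> str t = a # s \<Longrightarrow>
   \<exists>w2 j2 r2. ttaus t (W (a # w2) j2 # r2) \<and> W (a # w2) j2 \<in> Ws \<and> uv_list r2 \<and> str (W (a # w2) j2 # r2) = a # s"
proof -
  assume u: "uv_list t" and s: "str t = a # s"
  then obtain c g where cg: "t = c # g" by (cases t) auto
  then have "uv_const c" "uv_list g" using u by auto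
  then obtain k where k: "k \<in> Ix" "c = U k \<or> c = V k" unfolding uv_const_def by auto
  from k(2) show ?thesis
  proof
    assume "c = U k"
    obtain b w' where bw: "uu k = b # w'" using uv_props[OF k(1)] by (cases "uu k") auto
    then have "b = a" using s cg \<open>c = U k\<close> by simp
    have "ttau t (W (uu k) k # g)" using cg \<open>c = U k\<close> k by (simp add: tstep_U)
    then show ?thesis using bw \<open>b = a\<close> W_U[OF k(1)] \<open>uv_list g\<close> s cg \<open>c = U k\<close>
      by (intro exI[of _ w'] exI[of _ k] exI[of _ g]) auto
  next
    assume "c = V k"
    obtain b w' where bw: "vv k = b # w'" using uv_props[OF k(1)] by (cases "vv k") auto
    then have "b = a" using s cg \<open>c = V k\<close> by simp
    have "ttau t (W (vv k) k # g)" using cg \<open>c = V k\<close> k by (simp add: tstep_V)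
    then show ?thesis using bw \<open>b = a\<close> W_V[OF k(1)] \<open>uv_list g\<close> s cg \<open>c = V k\<close>
      by (intro exI[of _ w'] exI[of _ k] exI[of _ g]) auto
  qed
qed

lemma normalize_I: "pure_C t \<Longrightarrow> str t = a # s \<Longrightarrow>
   \<exists>w2 j2 r2. ttaus t (W (a # w2) j2 # r2) \<and> W (a # w2) j2 \<in> Ws \<and> uv_list r2 \<and> str (W (a # w2) j2 # r2) = a # s"
proof -
  assume p: "pure_C t" and s: "str t = a # s"
  from p consider "uv_list t" | w j g where "W w j \<in> Ws" "uv_list g" "t = W w j # g" unfolding pure_C_def by blast
  then show ?thesis
  proof cases
    case 1 then show ?thesis using normalize_I_uv s by blast
  next
    case 2
    show ?thesis
    proof (cases w)
      case (Cons b w')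
      then show ?thesis using 2 s by (intro exI[of _ w'] exI[of _ j] exI[of _ g]) auto
    next
      case Nil
      then have "str g = a # s" using 2 s by simp
      from normalize_I_uv[OF 2(2) this] obtain w2 j2 r2 where
        "ttaus g (W (a # w2) j2 # r2)" "W (a # w2) j2 \<in> Ws" "uv_list r2" "str (W (a # w2) j2 # r2) = a # s" by blast
      moreover have "ttaus t g" using W_vanish[OF 2(1)] 2(3) by simp
      ultimately show ?thesis by (meson rtranclp_trans)
    qed
  qed
qed

lemma normalize_S_uv: "uv_list t \<Longrightarrow> idxs t = j # i \<Longrightarrow>
   \<exists>w2 r2. ttaus t (W w2 j # r2) \<and> W w2 j \<in> Ws \<and> j \<in> Ix \<and> uv_list r2 \<and> idxs r2 = i"
proof -
  assume u: "uv_list t" and s: "idxs t = j # i"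
  then obtain c g where cg: "t = c # g" by (cases t) auto
  then have "uv_const c" "uv_list g" using u by auto
  then obtain k where k: "k \<in> Ix" "c = U k \<or> c = V k" unfolding uv_const_def by auto
  then have "k = j" "idxs g = i" using s cg by auto
  from k(2) show ?thesis
  proof
    assume "c = U k"
    have "ttau t (W (uu k) k # g)" using cg \<open>c = U k\<close> k by (simp add: tstep_U)
    then show ?thesis using W_U[OF k(1)] \<open>uv_list g\<close> \<open>k = j\<close> \<open>idxs g = i\<close> k
      by (intro exI[of _ "uu k"] exI[of _ g]) auto
  next
    assume "c = V k"
    have "ttau t (W (vv k) k # g)" using cg \<open>c = V k\<close> k by (simp add: tstep_V)
    then show ?thesis using W_V[OF k(1)] \<open>uv_list g\<close> \<open>k = j\<close> \<open>idxs g = i\<close> k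
      by (intro exI[of _ "vv k"] exI[of _ g]) auto
  qed
qed

lemma normalize_S: "pure_C t \<Longrightarrow> idxs t = j # i \<Longrightarrow>
   \<exists>w2 r2. ttaus t (W w2 j # r2) \<and> W w2 j \<in> Ws \<and> j \<in> Ix \<and> uv_list r2 \<and> idxs r2 = i"
proof -
  assume p: "pure_C t" and s: "idxs t = j # i"
  from p consider "uv_list t" | w j' g where "W w j' \<in> Ws" "uv_list g" "t = W w j' # g" unfolding pure_C_def by blast
  then show ?thesis
  proof cases
    case 1 then show ?thesis using normalize_S_uv s by blast
  next
    case 2
    show ?thesis
    proof (cases "j' = 0")
      case False
      then show ?thesis using 2 s W_idx[OF 2(1)] by (intro exI[of _ w] exI[of _ g]) auto
    next
      case True
      then have "idxs g = j # i" using 2 s by simp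
      from normalize_S_uv[OF 2(2) this] obtain w2 r2 where
        "ttaus g (W w2 j # r2)" "W w2 j \<in> Ws" "j \<in> Ix" "uv_list r2" "idxs r2 = i" by blast
      moreover have "ttaus t g" using W_vanish[OF 2(1)] 2(3) by simp
      ultimately show ?thesis by (intro exI[of _ w2] exI[of _ r2]) (auto intro: rtranclp_trans)
    qed
  qed
qed

lemma phases_simps[simp]: "D \<in> phases" "C \<in> phases" "I \<in> phases" "S \<in> phases" "C' \<in> phases"
  by (auto simp: phases_def)

lemma shape_D_cases:
  assumes "shape_D t"
  obtains (gu) \<alpha> where "set \<alpha> \<subseteq> Ix" "t = Gu # map U \<alpha>"
    | (gv') \<beta> \<alpha> where "set \<beta> \<subseteq> Ix" "set \<alpha> \<subseteq> Ix" "t = Gv' # vs_us \<beta> \<alpha>"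
    | (z) \<beta> \<alpha> where "set \<beta> \<subseteq> Ix" "set \<alpha> \<subseteq> Ix" "t = Z # vs_us \<beta> \<alpha>"
    | (gv) \<beta> \<alpha> where "set \<beta> \<subseteq> Ix" "set \<alpha> \<subseteq> Ix" "t = Gv # vs_us \<beta> \<alpha>"
    | (p) "pure_D t"
  using assms unfolding shape_D_def by blast

lemma shape_C_cases:
  assumes "shape_C t"
  obtains (gu) \<alpha> where "set \<alpha> \<subseteq> Ix" "t = Gu # map U \<alpha>"
    | (gv') \<beta> \<alpha> where "set \<beta> \<subseteq> Ix" "set \<alpha> \<subseteq> Ix" "t = Gv' # vs_us \<beta> \<alpha>"
    | (g) g where "uv_list g" "t = G # g" | (gv) g where "uv_list g" "t = Gv # g" | (z) g where "uv_list g" "t = Z # g"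
    | (p) "pure_C t"
  using assms unfolding shape_C_def by blast

lemma shape_C'_cases:
  assumes "shape_C' t"
  obtains (gu) \<alpha> where "set \<alpha> \<subseteq> Ix" "t = Gu # map U \<alpha>"
    | (gv') \<beta> \<alpha> where "set \<beta> \<subseteq> Ix" "set \<alpha> \<subseteq> Ix" "t = Gv' # vs_us \<beta> \<alpha>"
    | (g) g where "uv_list g" "t = G # g" | (g2) g where "basic_list g" "t = G' # g"
    | (gv) g where "basic_list g" "t = Gv # g" | (z) g where "basic_list g" "t = Z # g"
    | (p) "pure_C' t"
  using assms unfolding shape_C'_def by blast

lemma vs_us_pure: "set \<beta> \<subseteq> Ix \<Longrightarrow> set \<alpha> \<subseteq> Ix \<Longrightarrow> vs_us \<beta> \<alpha> = [] \<or> pure_C (vs_us \<beta> \<alpha>)"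
  using uv_list_vs_us uv_list_pure by blast

lemma pure_C_view_C: "pure_C t \<Longrightarrow> view_C t = None"
  by (metis pure_C_head view_C_basic)
lemma pure_D_view_D: "pure_D t \<Longrightarrow> view_D t = None"
  by (metis pure_C_head view_D_basic pure_D_pure_C)
lemma pure_C'_view_C': "pure_C' t \<Longrightarrow> view_C' t = None"
  unfolding pure_C'_def using view_C'_basic by (cases t) auto

lemma uv_list_mapV: "set is \<subseteq> Ix \<Longrightarrow> uv_list (map V is)" by auto

lemma thread_matched_inert: "l = Tau \<Longrightarrow> views (view_of c) (thread_mset t') = views (view_of c) {#t#} \<Longrightarrow> thread_matched c t l t'"
  unfolding thread_matched_def by blast
lemma thread_matched_spawn: "view_of c t = None \<Longrightarrow> cstep c Tau {#[c], [g]#} \<Longrightarrow> ttaus [g] tg \<Longrightarrow> shape_of c tg \<Longrightarrow> tg \<noteq> [] \<Longrightarrow>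
   view_of c tg = None \<Longrightarrow> tstep tg l tg' \<Longrightarrow> views (view_of c) (thread_mset tg') = views (view_of c) (thread_mset t') \<Longrightarrow> (tg' = [] \<or> shape_of c tg') \<Longrightarrow>
   thread_matched c t l t'"
  unfolding thread_matched_def by blast
lemma thread_matched_partner: "view_of c t \<noteq> None \<Longrightarrow>
  (\<And>t2. shape_of c t2 \<Longrightarrow> view_of c t2 = view_of c t \<Longrightarrow> mimics c t2 t l t') \<Longrightarrow> thread_matched c t l t'"
  unfolding thread_matched_def by blast
lemma thread_matched_loop: "cstep c l {#[c]#} \<Longrightarrow> views (view_of c) (thread_mset t') = views (view_of c) {#t#} \<Longrightarrow> thread_matched c t l t'"
  unfolding thread_matched_def by blast

lemma shape_of_close:
  assumes "c \<in> phases" "shape_of c t" "tstep t l t'"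
  shows "t' = [] \<or> shape_of c t'"
  using assms shape_D_close[of t l t'] shape_C_close[of t l t'] shape_C'_close[of t l t']
  unfolding phases_def by auto

lemma partner_by_own_step:
  assumes "c \<in> phases" "shape_of c t2" "tstep t2 l t2'" "view_of c t2 = view_of c t"
    "views (view_of c) (thread_mset t2') = views (view_of c) (thread_mset t')"
  shows "mimics c t2 t l t'"
  unfolding mimics_def using assms shape_of_close[OF assms(1-3)] by (intro exI[of _ t2] exI[of _ t2']) auto

lemma rigid_matched:
  assumes c: "c \<in> phases" and t: "shape_of c t" "view_of c t = Some (Rigid t)" and m: "tstep t l t'"
  shows "thread_matched c t l t'"
proof (rule thread_matched_partner)
  show "view_of c t \<noteq> None" using t by simp
  fix t2 assume "shape_of c t2" "view_of c t2 = view_of c t"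
  then have "t2 = t" using Rigid_view[OF c, of t2 t] t by simp
  then show "mimics c t2 t l t'" unfolding mimics_def using t m shape_of_close[OF c t(1) m]
    by (intro exI[of _ t] exI[of _ t']) auto
qed

lemma tau_invisible_D: "shape_D t \<Longrightarrow> view_D t = None \<Longrightarrow> tstep t Tau t' \<Longrightarrow> views view_D (thread_mset t') = {#}"
proof -
  assume o: "shape_D t" and n: "view_D t = None" and m: "tstep t Tau t'"
  from o show ?thesis
  proof (cases rule: shape_D_cases)
    case gu then show ?thesis using m by (auto simp: tstep_Gu view_D_def)
  next
    case gv' then show ?thesis using m by (auto simp: tstep_Gv' view_D_def)
  next
    case z then show ?thesis using m views_D_pure vs_us_pure by (auto simp: tstep_Z)
  next
    case gv then show ?thesis using n by (simp add: view_D_def)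
  next
    case p then show ?thesis using pure_D_close[OF p m] views_D_pure pure_D_pure_C by blast
  qed
qed

lemma thread_matched_D_invisible:
  assumes o: "shape_D t" and n: "view_D t = None" and m: "tstep t l t'"
  shows "thread_matched D t l t'"
proof (cases "l = Tau")
  case True
  then show ?thesis using tau_invisible_D[OF o n] m n by (intro thread_matched_inert) auto
next
  case False
  have "cstep D Tau {#[D], [Gu]#}" by (simp add: cstep_D)
  moreover have "ttaus [Gu] t" using spawn_D[OF o n] .
  ultimately show ?thesis using n o m shape_D_close[OF o m] shape_of_nonempty[of D t]
    by (intro thread_matched_spawn[of D t Gu t l t']) auto
qed

lemma view_D_Gv_partner:
  assumes "shape_D t2" "view_D t2 = view_D (Gv # g)"
  shows "\<exists>\<beta>2 \<alpha>2. set \<beta>2 \<subseteq> Ix \<and> set \<alpha>2 \<subseteq> Ix \<and> t2 = Gv # vs_us \<beta>2 \<alpha>2 \<and>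
    realized (vs_us \<beta>2 \<alpha>2) = realized g \<and>
    (\<not> realized g \<longrightarrow> str (vs_us \<beta>2 \<alpha>2) = str g \<and> idxs (vs_us \<beta>2 \<alpha>2) = idxs g)"
proof -
  have visible: "view_D t2 \<noteq> None" using assms(2) by (simp add: view_D_def)
  from assms(1) show ?thesis
  proof (cases rule: shape_D_cases)
    case p then show ?thesis using pure_D_view_D[OF p] visible by simp
  next
    case gv then show ?thesis using assms(2) by (auto simp: view_D_def split: if_splits)
  qed (use visible in \<open>auto simp: view_D_def\<close>)
qed

lemma thread_matched_D_Gv:
  assumes ba: "set \<beta> \<subseteq> Ix" "set \<alpha> \<subseteq> Ix" and m: "tstep (Gv # vs_us \<beta> \<alpha>) l t'"
  shows "thread_matched D (Gv # vs_us \<beta> \<alpha>) l t'"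
proof -
  let ?g = "vs_us \<beta> \<alpha>"
  from m consider (grow) k where "k \<in> Ix" "l = Tau" "t' = Gv # V k # ?g" | (drop) "l = Tau" "t' = ?g"
    | (lv) "l = LV" "t' = Z # ?g" by (auto simp: tstep_Gv)
  note moves = this
  show ?thesis
  proof (cases "realized ?g \<and> (\<exists>k. l = Tau \<and> t' = Gv # V k # ?g)")
    case True
    then show ?thesis by (intro thread_matched_inert) (auto simp: view_D_def realized_V)
  next
    case visible: False
    show ?thesis
    proof (rule thread_matched_partner)
      show "view_of D (Gv # ?g) \<noteq> None" by (simp add: view_D_def)
      fix t2 assume a: "shape_of D t2" "view_of D t2 = view_of D (Gv # ?g)"
      then have "shape_D t2" "view_D t2 = view_D (Gv # ?g)" by simp_all
      from view_D_Gv_partner[OF this] obtain \<beta>2 \<alpha>2 where b2: "set \<beta>2 \<subseteq> Ix" "set \<alpha>2 \<subseteq> Ix"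
        "t2 = Gv # vs_us \<beta>2 \<alpha>2" "realized (vs_us \<beta>2 \<alpha>2) = realized ?g"
        "\<not> realized ?g \<longrightarrow> str (vs_us \<beta>2 \<alpha>2) = str ?g \<and> idxs (vs_us \<beta>2 \<alpha>2) = idxs ?g"
        by blast
      let ?g2 = "vs_us \<beta>2 \<alpha>2"
      from moves obtain t2' where "tstep t2 l t2'" "views view_D (thread_mset t2') = views view_D (thread_mset t')"
      proof cases
        case grow
        then show ?thesis using that[of "Gv # V k # ?g2"] b2 visible by (auto simp: tstep_Gv view_D_def realized_V)
      next
        case drop
        then show ?thesis using that[of ?g2] b2 views_D_pure vs_us_pure[OF b2(1,2)] vs_us_pure[OF ba]
          by (auto simp: tstep_Gv)
      next
        case lv
        then show ?thesis using that[of "Z # ?g2"] b2 by (auto simp: tstep_Gv view_D_def)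
      qed
      with a show "mimics D t2 (Gv # ?g) l t'"
        by (intro partner_by_own_step[where t2' = t2']) auto
    qed
  qed
qed

lemma thread_matched_D: assumes o: "shape_D t" and m: "tstep t l t'" shows "thread_matched D t l t'"
proof (cases "view_D t = None")
  case True then show ?thesis using thread_matched_D_invisible[OF o _ m] by blast
next
  case False
  from o show ?thesis
  proof (cases rule: shape_D_cases)
    case gv then show ?thesis using thread_matched_D_Gv m by blast
  qed (use False pure_D_view_D in \<open>auto simp: view_D_def\<close>)
qed

lemma view_I_pure: "pure_C t \<Longrightarrow> view_I t = (if str t = [] then None else Some (Pure (str t) []))"
  by (metis pure_C_head view_I_basic)
lemma view_S_pure: "pure_C t \<Longrightarrow> view_S t = (if idxs t = [] then None else Some (Pure [] (idxs t)))"
  by (metis pure_C_head view_S_basic)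

lemma view_C_GvOpen: assumes "shape_C t2" "view_C t2 = Some (GvOpen s i)"
  shows "\<exists>g2. t2 = Gv # g2 \<and> uv_list g2 \<and> \<not> realized g2 \<and> str g2 = s \<and> idxs g2 = i"
  using assms(1)
proof (cases rule: shape_C_cases)
  case p then show ?thesis using assms(2) pure_C_view_C by simp
qed (use assms(2) in \<open>auto simp: view_C_def split: if_splits\<close>)

lemma view_C_ZOpen: assumes "shape_C t2" "view_C t2 = Some (ZOpen s i)"
  shows "\<exists>g2. t2 = Z # g2 \<and> uv_list g2 \<and> str g2 = s \<and> idxs g2 = i"
  using assms(1)
proof (cases rule: shape_C_cases)
  case p then show ?thesis using assms(2) pure_C_view_C by simp
qed (use assms(2) in \<open>auto simp: view_C_def split: if_splits\<close>)

lemma view_I_GvOpen: assumes "shape_C t2" "view_I t2 = Some (GvOpen s i)" shows "\<exists>g2. t2 = Gv # g2 \<and> uv_list g2 \<and> str g2 = s"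
  using assms(1)
proof (cases rule: shape_C_cases)
  case p then show ?thesis using assms(2) view_I_pure by (simp split: if_splits)
qed (use assms(2) in \<open>auto simp: view_I_def\<close>)

lemma view_I_ZOpen: assumes "shape_C t2" "view_I t2 = Some (ZOpen s i)" shows "\<exists>g2. t2 = Z # g2 \<and> uv_list g2 \<and> str g2 = s"
  using assms(1)
proof (cases rule: shape_C_cases)
  case p then show ?thesis using assms(2) view_I_pure by (simp split: if_splits)
qed (use assms(2) in \<open>auto simp: view_I_def\<close>)

lemma view_I_Pure: assumes "shape_C t2" "view_I t2 = Some (Pure s i)" shows "pure_C t2 \<and> str t2 = s"
  using assms(1)
proof (cases rule: shape_C_cases)
  case p then show ?thesis using assms(2) view_I_pure by (simp split: if_splits)
qed (use assms(2) in \<open>auto simp: view_I_def\<close>)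

lemma view_S_GvOpen: assumes "shape_C t2" "view_S t2 = Some (GvOpen s i)" shows "\<exists>g2. t2 = Gv # g2 \<and> uv_list g2 \<and> idxs g2 = i"
  using assms(1)
proof (cases rule: shape_C_cases)
  case p then show ?thesis using assms(2) view_S_pure by (simp split: if_splits)
qed (use assms(2) in \<open>auto simp: view_S_def\<close>)

lemma view_S_ZOpen: assumes "shape_C t2" "view_S t2 = Some (ZOpen s i)" shows "\<exists>g2. t2 = Z # g2 \<and> uv_list g2 \<and> idxs g2 = i"
  using assms(1)
proof (cases rule: shape_C_cases)
  case p then show ?thesis using assms(2) view_S_pure by (simp split: if_splits)
qed (use assms(2) in \<open>auto simp: view_S_def\<close>)

lemma view_S_Pure: assumes "shape_C t2" "view_S t2 = Some (Pure s i)" shows "pure_C t2 \<and> idxs t2 = i"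
  using assms(1)
proof (cases rule: shape_C_cases)
  case p then show ?thesis using assms(2) view_S_pure by (simp split: if_splits)
qed (use assms(2) in \<open>auto simp: view_S_def\<close>)

text \<open>In phase \<open>C\<close> a realized \<open>Gv\<close>-thread is invisible; its step to \<open>Z\<close> is mimicked by a fresh
  \<open>Gv\<close>-thread, forked by \<open>C\<close>, that grows the \<open>V\<close>-constants of the same indices.\<close>

lemma thread_matched_C_Gv_realized:
  assumes g: "uv_list g" "realized g" and m: "tstep (Gv # g) l t'"
  shows "thread_matched C (Gv # g) l t'"
proof -
  have n: "view_C (Gv # g) = None" using g by (simp add: view_C_def)
  from m consider (grow) k where "k \<in> Ix" "l = Tau" "t' = Gv # V k # g" | (drop) "l = Tau" "t' = g"
    | (lv) "l = LV" "t' = Z # g" by (auto simp: tstep_Gv)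
  then show ?thesis
  proof cases
    case grow then show ?thesis using n g by (intro thread_matched_inert) (auto simp: view_C_def realized_V)
  next
    case drop then show ?thesis using n views_C_pure[OF uv_list_pure[OF g(1)]] by (intro thread_matched_inert) auto
  next
    case lv
    let ?is = "idxs g"
    have isI: "set ?is \<subseteq> Ix" using uv_list_idxs[OF g(1)] .
    show ?thesis
    proof (rule thread_matched_spawn[of C _ Gv "Gv # map V ?is" l "Z # map V ?is"])
      show "ttaus [Gv] (Gv # map V ?is)" using spawn_Gv[OF isI] .
      show "shape_of C (Gv # map V ?is)" using shape_C_GvI[OF uv_list_mapV[OF isI]] by simp
      show "tstep (Gv # map V ?is) l (Z # map V ?is)" using lv by (simp add: tstep_Gv)
      show "views (view_of C) (thread_mset (Z # map V ?is)) = views (view_of C) (thread_mset t')"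
        using lv g by (simp add: view_C_def realized_def)
      show "Z # map V ?is = [] \<or> shape_of C (Z # map V ?is)" using shape_C_ZI[OF uv_list_mapV[OF isI]] by simp
    qed (use n in \<open>auto simp: cstep_C view_C_def realized_mapV\<close>)
  qed
qed

lemma thread_matched_C_Gv_open:
  assumes g: "uv_list g" "\<not> realized g" and m: "tstep (Gv # g) l t'"
  shows "thread_matched C (Gv # g) l t'"
proof (rule thread_matched_partner)
  have v: "view_C (Gv # g) = Some (GvOpen (str g) (idxs g))" using g by (simp add: view_C_def)
  then show "view_of C (Gv # g) \<noteq> None" by simp
  fix t2 assume a: "shape_of C t2" "view_of C t2 = view_of C (Gv # g)"
  then obtain g2 where g2: "t2 = Gv # g2" "uv_list g2" "\<not> realized g2" "str g2 = str g" "idxs g2 = idxs g"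
    using view_C_GvOpen[of t2] v by auto
  from m consider (grow) k where "k \<in> Ix" "l = Tau" "t' = Gv # V k # g" | (drop) "l = Tau" "t' = g"
    | (lv) "l = LV" "t' = Z # g" by (auto simp: tstep_Gv)
  then obtain t2' where "tstep t2 l t2'" "views view_C (thread_mset t2') = views view_C (thread_mset t')"
  proof cases
    case grow then show ?thesis using that[of "Gv # V k # g2"] g g2 by (auto simp: tstep_Gv view_C_def realized_V)
  next
    case drop then show ?thesis
      using that[of g2] g2 views_C_pure[OF uv_list_pure[OF g2(2)]] views_C_pure[OF uv_list_pure[OF g(1)]]
      by (auto simp: tstep_Gv)
  next
    case lv then show ?thesis using that[of "Z # g2"] g2 by (auto simp: tstep_Gv view_C_def)
  qed
  with a show "mimics C t2 (Gv # g) l t'"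
    by (intro partner_by_own_step[where t2' = t2']) auto
qed

lemma thread_matched_C_Z:
  assumes g: "uv_list g" and m: "tstep (Z # g) l t'"
  shows "thread_matched C (Z # g) l t'"
proof (rule thread_matched_partner)
  have v: "view_C (Z # g) = Some (ZOpen (str g) (idxs g))" by (simp add: view_C_def)
  then show "view_of C (Z # g) \<noteq> None" by simp
  fix t2 assume a: "shape_of C t2" "view_of C t2 = view_of C (Z # g)"
  then obtain g2 where g2: "t2 = Z # g2" "uv_list g2" using view_C_ZOpen[of t2] v by auto
  have "t' = g" "tstep t2 l g2" using m g2 by (auto simp: tstep_Z)
  moreover have "views view_C (thread_mset g2) = views view_C (thread_mset g)"
    using views_C_pure[OF uv_list_pure[OF g2(2)]] views_C_pure[OF uv_list_pure[OF g]] by simp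
  ultimately show "mimics C t2 (Z # g) l t'"
    using a by (intro partner_by_own_step[where t2' = g2]) auto
qed

lemma thread_matched_C_pure:
  assumes p: "pure_C t" and m: "tstep t l t'"
  shows "thread_matched C t l t'"
proof (cases "l = Tau")
  case True
  then show ?thesis using pure_C_view_C[OF p] views_C_pure pure_C_close[OF p m] by (intro thread_matched_inert) auto
next
  case False
  have o: "shape_C t" and "t \<noteq> []" using p shape_C_pureI unfolding pure_C_def by auto
  then show ?thesis
    using pure_C_view_C[OF p] m shape_C_close[OF o m] spawn_pure_C[OF p]
    by (intro thread_matched_spawn[of C t G t l t']) (auto simp: cstep_C)
qed

lemma thread_matched_C: assumes o: "shape_C t" and m: "tstep t l t'" shows "thread_matched C t l t'"
  using o
proof (cases rule: shape_C_cases)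
  case (gv g) then show ?thesis
    using thread_matched_C_Gv_realized thread_matched_C_Gv_open m by (cases "realized g") auto
next
  case z then show ?thesis using thread_matched_C_Z m by blast
next
  case p then show ?thesis using thread_matched_C_pure m by blast
qed (use rigid_matched[of C t l t'] m shape_C_close[OF o m] o in \<open>simp_all add: view_C_def\<close>)

lemma pure_C_cases:
  assumes "pure_C t"
  obtains (u) k g where "k \<in> Ix" "uv_list g" "t = U k # g" | (v) k g where "k \<in> Ix" "uv_list g" "t = V k # g"
    | (w) w j g where "W w j \<in> Ws" "uv_list g" "t = W w j # g"
  using assms unfolding pure_C_def uv_const_def by (cases t) auto

lemma thread_matched_I_Gv:
  assumes g: "uv_list g" and m: "tstep (Gv # g) l t'"
  shows "thread_matched I (Gv # g) l t'"
proof (rule thread_matched_partner)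
  have v: "view_I (Gv # g) = Some (GvOpen (str g) [])" by (simp add: view_I_def)
  then show "view_of I (Gv # g) \<noteq> None" by simp
  fix t2 assume a: "shape_of I t2" "view_of I t2 = view_of I (Gv # g)"
  then obtain g2 where g2: "t2 = Gv # g2" "uv_list g2" "str g2 = str g"
    using view_I_GvOpen[of t2] v by auto
  from m consider (grow) k where "k \<in> Ix" "l = Tau" "t' = Gv # V k # g" | (drop) "l = Tau" "t' = g"
    | (lv) "l = LV" "t' = Z # g" by (auto simp: tstep_Gv)
  then obtain t2' where "tstep t2 l t2'" "views view_I (thread_mset t2') = views view_I (thread_mset t')"
  proof cases
    case grow then show ?thesis using that[of "Gv # V k # g2"] g2 by (auto simp: tstep_Gv view_I_def)
  next
    case drop then show ?thesis
      using that[of g2] g2 views_I_pure[OF uv_list_pure[OF g2(2)]] views_I_pure[OF uv_list_pure[OF g]]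
      by (auto simp: tstep_Gv)
  next
    case lv then show ?thesis using that[of "Z # g2"] g2 by (auto simp: tstep_Gv view_I_def)
  qed
  with a show "mimics I t2 (Gv # g) l t'"
    by (intro partner_by_own_step[where t2' = t2']) auto
qed

lemma thread_matched_I_Z:
  assumes g: "uv_list g" and m: "tstep (Z # g) l t'"
  shows "thread_matched I (Z # g) l t'"
proof (rule thread_matched_partner)
  have v: "view_I (Z # g) = Some (ZOpen (str g) [])" by (simp add: view_I_def)
  then show "view_of I (Z # g) \<noteq> None" by simp
  fix t2 assume a: "shape_of I t2" "view_of I t2 = view_of I (Z # g)"
  then obtain g2 where g2: "t2 = Z # g2" "uv_list g2" "str g2 = str g"
    using view_I_ZOpen[of t2] v by auto
  have "t' = g" "tstep t2 l g2" using m g2 by (auto simp: tstep_Z)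
  moreover have "views view_I (thread_mset g2) = views view_I (thread_mset g)"
    using g2 views_I_pure[OF uv_list_pure[OF g2(2)]] views_I_pure[OF uv_list_pure[OF g]] by simp
  ultimately show "mimics I t2 (Z # g) l t'"
    using a by (intro partner_by_own_step[where t2' = g2]) auto
qed

text \<open>A visible letter of a pure thread in phase \<open>I\<close> is matched by any pure thread with the same
  string: it first unfolds until the letter sits at the head of a \<open>W\<close>-constant.\<close>

lemma thread_matched_I_letter:
  assumes p: "pure_C t" and t: "t = W (a # w') j # g" "uv_list g" "W (a # w') j \<in> Ws"
    and l: "l = Sym a \<or> l = Tau" and t': "t' = W w' j # g"
  shows "thread_matched I t l t'"
proof (rule thread_matched_partner)
  have abt: "view_I t = Some (Pure (str t) [])" using view_I_pure[OF p] t by simp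
  then show "view_of I t \<noteq> None" by simp
  fix t2 assume a: "shape_of I t2" "view_of I t2 = view_of I t"
  then have p2: "pure_C t2" "str t2 = str t" using view_I_Pure[of t2] abt by auto
  then have "str t2 = a # (w' @ str g)" using t by simp
  from normalize_I[OF p2(1) this] obtain w2 j2 r2 where n2: "ttaus t2 (W (a # w2) j2 # r2)"
    "W (a # w2) j2 \<in> Ws" "uv_list r2" "str (W (a # w2) j2 # r2) = a # (w' @ str g)" by blast
  let ?t2'' = "W (a # w2) j2 # r2"
  have pp: "pure_C ?t2''" using n2 pure_C_WI by blast
  have mv: "tstep ?t2'' l (W w2 j2 # r2)" using n2(2) l W_sig[OF n2(2)] W_idx[OF n2(2)]
    by (auto simp: tstep_W)
  have p3: "pure_C (W w2 j2 # r2)" using W_suf[OF n2(2)] n2(3) pure_C_WI by blast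
  have p4: "pure_C t'" using W_suf[OF t(3)] t t' pure_C_WI by auto
  show "mimics I t2 t l t'"
    using n2 pp mv p3 p4 abt view_I_pure[OF pp] views_I_pure[of "W w2 j2 # r2"] views_I_pure[of t'] t t' shape_C_pureI
    unfolding mimics_def by (intro exI[of _ ?t2''] exI[of _ "W w2 j2 # r2"]) auto
qed

lemma thread_matched_I_pure:
  assumes p: "pure_C t" and m: "tstep t l t'"
  shows "thread_matched I t l t'"
proof -
  have clp: "t' = [] \<or> pure_C t'" using pure_C_close[OF p m] .
  have same: "str t' = str t \<Longrightarrow> views view_I (thread_mset t') = views view_I {#t#}"
    using views_I_pure[OF clp] views_I_pure[of t] p by (cases t) (auto simp: pure_C_def)
  from p show ?thesis
  proof (cases rule: pure_C_cases)
    case (u k g)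
    then have "l = Tau" "str t' = str t" using m by (auto simp: tstep_U)
    then show ?thesis using same by (intro thread_matched_inert) auto
  next
    case (v k g)
    then have "l = Tau" "str t' = str t" using m by (auto simp: tstep_V)
    then show ?thesis using same by (intro thread_matched_inert) auto
  next
    case (w w j g)
    from m w consider (letter) a w' where "w = a # w'" "l = Sym a \<or> l = Tau" "t' = W w' j # g"
      | (index) "j \<in> Ix" "l = Idx j \<or> l = Tau" "t' = W w 0 # g"
      | (nil) "w = []" "j = 0" "l = Tau" "t' = g"
      by (auto simp: tstep_W)
    then show ?thesis
    proof cases
      case letter then show ?thesis using thread_matched_I_letter[OF p] w by blast
    next
      case index
      then have "views view_I (thread_mset t') = views view_I {#t#}" using same w by simp
      then show ?thesis using index by (auto intro: thread_matched_inert thread_matched_loop simp: cstep_I)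
    next
      case nil then show ?thesis using same w by (intro thread_matched_inert) auto
    qed
  qed
qed

lemma thread_matched_I: assumes o: "shape_C t" and m: "tstep t l t'" shows "thread_matched I t l t'"
  using o
proof (cases rule: shape_C_cases)
  case gv then show ?thesis using thread_matched_I_Gv m by blast
next
  case z then show ?thesis using thread_matched_I_Z m by blast
next
  case p then show ?thesis using thread_matched_I_pure m by blast
qed (use rigid_matched[of I t l t'] m shape_C_close[OF o m] o in \<open>simp_all add: view_I_def\<close>)

lemma thread_matched_S_Gv:
  assumes g: "uv_list g" and m: "tstep (Gv # g) l t'"
  shows "thread_matched S (Gv # g) l t'"
proof (rule thread_matched_partner)
  have v: "view_S (Gv # g) = Some (GvOpen [] (idxs g))" by (simp add: view_S_def)
  then show "view_of S (Gv # g) \<noteq> None" by simp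
  fix t2 assume a: "shape_of S t2" "view_of S t2 = view_of S (Gv # g)"
  then obtain g2 where g2: "t2 = Gv # g2" "uv_list g2" "idxs g2 = idxs g"
    using view_S_GvOpen[of t2] v by auto
  from m consider (grow) k where "k \<in> Ix" "l = Tau" "t' = Gv # V k # g" | (drop) "l = Tau" "t' = g"
    | (lv) "l = LV" "t' = Z # g" by (auto simp: tstep_Gv)
  then obtain t2' where "tstep t2 l t2'" "views view_S (thread_mset t2') = views view_S (thread_mset t')"
  proof cases
    case grow then show ?thesis using that[of "Gv # V k # g2"] g2 by (auto simp: tstep_Gv view_S_def)
  next
    case drop then show ?thesis
      using that[of g2] g2 views_S_pure[OF uv_list_pure[OF g2(2)]] views_S_pure[OF uv_list_pure[OF g]]
      by (auto simp: tstep_Gv)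
  next
    case lv then show ?thesis using that[of "Z # g2"] g2 by (auto simp: tstep_Gv view_S_def)
  qed
  with a show "mimics S t2 (Gv # g) l t'"
    by (intro partner_by_own_step[where t2' = t2']) auto
qed

lemma thread_matched_S_Z:
  assumes g: "uv_list g" and m: "tstep (Z # g) l t'"
  shows "thread_matched S (Z # g) l t'"
proof (rule thread_matched_partner)
  have v: "view_S (Z # g) = Some (ZOpen [] (idxs g))" by (simp add: view_S_def)
  then show "view_of S (Z # g) \<noteq> None" by simp
  fix t2 assume a: "shape_of S t2" "view_of S t2 = view_of S (Z # g)"
  then obtain g2 where g2: "t2 = Z # g2" "uv_list g2" "idxs g2 = idxs g"
    using view_S_ZOpen[of t2] v by auto
  have "t' = g" "tstep t2 l g2" using m g2 by (auto simp: tstep_Z)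
  moreover have "views view_S (thread_mset g2) = views view_S (thread_mset g)"
    using g2 views_S_pure[OF uv_list_pure[OF g2(2)]] views_S_pure[OF uv_list_pure[OF g]] by simp
  ultimately show "mimics S t2 (Z # g) l t'"
    using a by (intro partner_by_own_step[where t2' = g2]) auto
qed

text \<open>Dually, a visible index of a pure thread in phase \<open>S\<close> is matched after unfolding the
  partner until that index is carried by its head \<open>W\<close>-constant.\<close>

lemma thread_matched_S_index:
  assumes p: "pure_C t" and t: "t = W w j # g" "uv_list g" "W w j \<in> Ws" "j \<in> Ix"
    and l: "l = Idx j \<or> l = Tau" and t': "t' = W w 0 # g"
  shows "thread_matched S t l t'"
proof (rule thread_matched_partner)
  have j0: "j \<noteq> 0" using t(4) by (auto simp: idx_def)
  have abt: "view_S t = Some (Pure [] (idxs t))" using view_S_pure[OF p] t j0 by simp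
  then show "view_of S t \<noteq> None" by simp
  fix t2 assume a: "shape_of S t2" "view_of S t2 = view_of S t"
  then have p2: "pure_C t2" "idxs t2 = idxs t" using view_S_Pure[of t2] abt by auto
  then have "idxs t2 = j # idxs g" using t j0 by simp
  from normalize_S[OF p2(1) this] obtain w2 r2 where n2: "ttaus t2 (W w2 j # r2)"
    "W w2 j \<in> Ws" "j \<in> Ix" "uv_list r2" "idxs r2 = idxs g" by blast
  let ?t2'' = "W w2 j # r2"
  have pp: "pure_C ?t2''" using n2 pure_C_WI by blast
  have mv: "tstep ?t2'' l (W w2 0 # r2)" using n2(2,3) l by (auto simp: tstep_W)
  have p3: "pure_C (W w2 0 # r2)" using W_zero[OF n2(2)] n2(4) pure_C_WI by blast
  have p4: "pure_C t'" using W_zero[OF t(3)] t t' pure_C_WI by auto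
  show "mimics S t2 t l t'"
    using n2 pp mv p3 p4 abt view_S_pure[OF pp] views_S_pure[of "W w2 0 # r2"] views_S_pure[of t'] t t' j0 shape_C_pureI
    unfolding mimics_def by (intro exI[of _ ?t2''] exI[of _ "W w2 0 # r2"]) auto
qed

lemma thread_matched_S_pure:
  assumes p: "pure_C t" and m: "tstep t l t'"
  shows "thread_matched S t l t'"
proof -
  have clp: "t' = [] \<or> pure_C t'" using pure_C_close[OF p m] .
  have same: "idxs t' = idxs t \<Longrightarrow> views view_S (thread_mset t') = views view_S {#t#}"
    using views_S_pure[OF clp] views_S_pure[of t] p by (cases t) (auto simp: pure_C_def)
  from p show ?thesis
  proof (cases rule: pure_C_cases)
    case (u k g)
    then have "l = Tau" "idxs t' = idxs t" using m by (auto simp: tstep_U idx_def)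
    then show ?thesis using same by (intro thread_matched_inert) auto
  next
    case (v k g)
    then have "l = Tau" "idxs t' = idxs t" using m by (auto simp: tstep_V idx_def)
    then show ?thesis using same by (intro thread_matched_inert) auto
  next
    case (w w j g)
    from m w consider (letter) a w' where "w = a # w'" "a \<in> Sig" "l = Sym a \<or> l = Tau" "t' = W w' j # g"
      | (index) "j \<in> Ix" "l = Idx j \<or> l = Tau" "t' = W w 0 # g"
      | (nil) "w = []" "j = 0" "l = Tau" "t' = g"
      by (auto simp: tstep_W)
    then show ?thesis
    proof cases
      case letter
      then have "views view_S (thread_mset t') = views view_S {#t#}" using same w by simp
      then show ?thesis using letter by (auto intro: thread_matched_inert thread_matched_loop simp: cstep_S)
    next
      case index then show ?thesis using thread_matched_S_index[OF p] w by blast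
    next
      case nil then show ?thesis using same w by (intro thread_matched_inert) auto
    qed
  qed
qed

lemma thread_matched_S: assumes o: "shape_C t" and m: "tstep t l t'" shows "thread_matched S t l t'"
  using o
proof (cases rule: shape_C_cases)
  case gv then show ?thesis using thread_matched_S_Gv m by blast
next
  case z then show ?thesis using thread_matched_S_Z m by blast
next
  case p then show ?thesis using thread_matched_S_pure m by blast
qed (use rigid_matched[of S t l t'] m shape_C_close[OF o m] o in \<open>simp_all add: view_S_def\<close>)

lemma tau_invisible_C': "shape_C' t \<Longrightarrow> view_C' t = None \<Longrightarrow> tstep t Tau t' \<Longrightarrow> views view_C' (thread_mset t') = {#}"
proof -
  assume o: "shape_C' t" and n: "view_C' t = None" and m: "tstep t Tau t'"
  from o show ?thesis
  proof (cases rule: shape_C'_cases)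
    case g2 then show ?thesis using m by (auto simp: tstep_G' view_C'_def)
  next
    case gv then show ?thesis using m views_C'_pure by (auto simp: tstep_Gv view_C'_def pure_C'_def)
  next
    case z then show ?thesis using m views_C'_pure by (auto simp: tstep_Z pure_C'_def)
  next
    case p then show ?thesis using pure_C'_close[OF p m] views_C'_pure by blast
  qed (use n in \<open>auto simp: view_C'_def\<close>)
qed

lemma thread_matched_C': assumes o: "shape_C' t" and m: "tstep t l t'" shows "thread_matched C' t l t'"
proof -
  have cl: "t' = [] \<or> shape_C' t'" using shape_C'_close[OF o m] .
  show ?thesis
  proof (cases "view_C' t = None")
    case n: True
    show ?thesis
    proof (cases "l = Tau")
      case True
      then show ?thesis using tau_invisible_C'[OF o n] m n by (intro thread_matched_inert) auto
    next
      case False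
      show ?thesis
        by (rule thread_matched_spawn[of C' t G' t l t']) (use n o m cl spawn_C'[OF o n] shape_of_nonempty[of C' t] in \<open>auto simp: cstep_C'\<close>)
    qed
  next
    case False
    have "view_C' t = Some (Rigid t)" using o
    proof (cases rule: shape_C'_cases)
      case p then show ?thesis using pure_C'_view_C' False by simp
    qed (use False in \<open>auto simp: view_C'_def\<close>)
    then show ?thesis using rigid_matched[of C' t l t'] m cl o by simp
  qed
qed

lemma vanish_filtered: "(\<And>t. shape_of c t \<Longrightarrow> P t \<Longrightarrow> ttaus t []) \<Longrightarrow> shapes c A \<Longrightarrow>
   mtaus (add_mset x (filter_mset (\<lambda>t. \<not> P t) A + filter_mset P A)) (add_mset x (filter_mset (\<lambda>t. \<not> P t) A))"
proof -
  assume v: "\<And>t. shape_of c t \<Longrightarrow> P t \<Longrightarrow> ttaus t []" and o: "shapes c A"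
  have "\<forall>t\<in>#filter_mset P A. t \<noteq> [] \<and> ttaus t []" using v o shape_of_nonempty unfolding shapes_def by auto
  from vanish_many[OF this, of "add_mset x (filter_mset (\<lambda>t. \<not> P t) A)"] show ?thesis by simp
qed

lemma multiset_split_filter: "A = filter_mset (\<lambda>t. \<not> P t) A + filter_mset P A"
  using multiset_partition[of A P] by (simp add: add.commute)

definition view_D_to_C :: "'s tview \<Rightarrow> 's tview option" where
  "view_D_to_C v = (case v of GvOpen s i \<Rightarrow> Some (GvOpen s i) | _ \<Rightarrow> None)"

lemma switch_D_C:
  assumes "phase_equiv D T T'"
  shows "\<exists>T''. mtaus (add_mset [D] T') (add_mset [D] T'') \<and> phase_equiv D T T'' \<and> phase_equiv C T T''"
proof -
  let ?P = "\<lambda>t. view_D t = None"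
  let ?T'' = "filter_mset (\<lambda>t. \<not> ?P t) T' + filter_mset ?P T"
  have o: "shapes D T" "shapes D T'" and a: "views view_D T = views view_D T'" using assms unfolding phase_equiv_def by auto
  have 1: "mtaus (add_mset [D] T') (add_mset [D] (filter_mset (\<lambda>t. \<not> ?P t) T'))"
    using vanish_filtered[of D ?P T' "[D]", OF _ o(2)] vanish_D multiset_split_filter[of T' ?P] by simp
  have "\<forall>t\<in>#filter_mset ?P T. t \<noteq> [] \<and> (\<exists>g. cstep D Tau {#[D], [g]#} \<and> ttaus [g] t)"
    using o(1) spawn_D shape_of_nonempty[of D] unfolding shapes_def by (auto simp: cstep_D)
  from spawn_many[OF this] have 2: "mtaus (add_mset [D] (filter_mset (\<lambda>t. \<not> ?P t) T')) (add_mset [D] ?T'')" .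
  have okT'': "shapes D ?T''" using o by (auto simp: shapes_def)
  have "views view_D ?T'' = views view_D T'" using views_filter_some[of view_D T'] views_filter_none[of view_D T] by simp
  then have p1: "phase_equiv D T ?T''" using o okT'' a unfolding phase_equiv_def by simp
  have bind: "\<forall>t\<in>#filter_mset (\<lambda>t. \<not> ?P t) X. view_C t = Option.bind (view_D t) view_D_to_C" if "shapes D X" for X
  proof
    fix t assume "t \<in># filter_mset (\<lambda>t. \<not> ?P t) X"
    then have "shape_D t" "view_D t \<noteq> None" using that unfolding shapes_def by auto
    then show "view_C t = Option.bind (view_D t) view_D_to_C"
      by (cases rule: shape_D_cases) (auto simp: view_D_def view_C_def view_D_to_C_def dest: pure_D_view_D)
  qed
  have e1: "views view_C (filter_mset (\<lambda>t. \<not> ?P t) T') = views view_C (filter_mset (\<lambda>t. \<not> ?P t) T)"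
    using views_bind[OF bind[OF o(2)]] views_bind[OF bind[OF o(1)]] views_filter_some[of view_D T] views_filter_some[of view_D T'] a
    by simp
  have "views view_C T = views view_C (filter_mset (\<lambda>t. \<not> ?P t) T) + views view_C (filter_mset ?P T)"
    using multiset_split_filter[of T ?P] by (metis views_plus)
  then have "views view_C ?T'' = views view_C T" using e1 by simp
  moreover have "shapes C T" "shapes C ?T''" using o okT'' shape_D_shape_C unfolding shapes_def by auto
  ultimately have p2: "phase_equiv C T ?T''" unfolding phase_equiv_def by simp
  show ?thesis using 1 2 p1 p2 by (meson rtranclp_trans)
qed

text \<open>An invisible \<open>Gv\<close>-thread of phase \<open>C\<close> is realized, so it is regenerated, with the same
  string and indices, as the \<open>Gv\<close>-thread of the \<open>V\<close>-constants of its indices; this matters because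
  phases \<open>I\<close> and \<open>S\<close> observe string and indices separately.\<close>

definition reset_Gv :: "'s const list \<Rightarrow> 's const list" where
  "reset_Gv t = (case t of Gv # g \<Rightarrow> Gv # map V (idxs g) | _ \<Rightarrow> t)"

definition view_C_to_I :: "'s tview \<Rightarrow> 's tview option" where
  "view_C_to_I v = (case v of Rigid x \<Rightarrow> Some (Rigid x) | GvOpen s i \<Rightarrow> Some (GvOpen s []) | ZOpen s i \<Rightarrow> Some (ZOpen s []) | _ \<Rightarrow> None)"
definition view_C_to_S :: "'s tview \<Rightarrow> 's tview option" where
  "view_C_to_S v = (case v of Rigid x \<Rightarrow> Some (Rigid x) | GvOpen s i \<Rightarrow> Some (GvOpen [] i) | ZOpen s i \<Rightarrow> Some (ZOpen [] i) | _ \<Rightarrow> None)"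

lemma invisible_C_cases: "shape_C t \<Longrightarrow> view_C t = None \<Longrightarrow> (\<exists>g. t = Gv # g \<and> uv_list g \<and> realized g) \<or> pure_C t"
  by (cases rule: shape_C_cases) (auto simp: view_C_def split: if_splits)

lemma reset_Gv_props:
  assumes "shape_C t" "view_C t = None"
  shows "shape_C (reset_Gv t) \<and> view_C (reset_Gv t) = None \<and> view_I (reset_Gv t) = view_I t \<and> view_S (reset_Gv t) = view_S t \<and>
     (\<exists>g. cstep C Tau {#[C], [g]#} \<and> ttaus [g] (reset_Gv t))"
  using invisible_C_cases[OF assms]
proof
  assume "\<exists>g. t = Gv # g \<and> uv_list g \<and> realized g"
  then obtain g where g: "t = Gv # g" "uv_list g" "realized g" by blast
  then have cp: "reset_Gv t = Gv # map V (idxs g)" by (simp add: reset_Gv_def)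
  have isI: "set (idxs g) \<subseteq> Ix" using uv_list_idxs[OF g(2)] .
  have "cstep C Tau {#[C], [Gv]#}" by (simp add: cstep_C)
  then show ?thesis using cp g shape_C_GvI[OF uv_list_mapV[OF isI]] spawn_Gv[OF isI]
    by (auto simp: view_C_def view_I_def view_S_def realized_mapV realized_def)
next
  assume p: "pure_C t"
  then obtain c g where "t = c # g" "basic c" using pure_C_head by blast
  then have cp: "reset_Gv t = t" unfolding reset_Gv_def basic_def uv_const_def Wset_def by auto
  have "cstep C Tau {#[C], [G]#}" by (simp add: cstep_C)
  then show ?thesis using cp p shape_C_pureI spawn_pure_C[OF p] pure_C_view_C by auto
qed

lemma shapes_IS: "shapes I T = shapes C T" "shapes S T = shapes C T" by (auto simp: shapes_def)

lemma switch_C_IS: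
  assumes "phase_equiv C T T'" and Ph: "Ph = I \<or> Ph = S"
  shows "\<exists>T''. mtaus (add_mset [C] T') (add_mset [C] T'') \<and> phase_equiv C T T'' \<and> phase_equiv Ph T T''"
proof -
  let ?P = "\<lambda>t. view_C t = None"
  let ?T'' = "filter_mset (\<lambda>t. \<not> ?P t) T' + image_mset reset_Gv (filter_mset ?P T)"
  let ?h = "if Ph = I then view_C_to_I else view_C_to_S"
  have o: "shapes C T" "shapes C T'" and a: "views view_C T = views view_C T'" using assms unfolding phase_equiv_def by auto
  have 1: "mtaus (add_mset [C] T') (add_mset [C] (filter_mset (\<lambda>t. \<not> ?P t) T'))"
    using vanish_filtered[of C ?P T' "[C]", OF _ o(2)] vanish_C multiset_split_filter[of T' ?P] by simp
  have cpp: "t \<in># filter_mset ?P T \<Longrightarrow> shape_C (reset_Gv t) \<and> view_C (reset_Gv t) = None \<and> view_I (reset_Gv t) = view_I t \<and> view_S (reset_Gv t) = view_S t \<and>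
     (\<exists>g. cstep C Tau {#[C], [g]#} \<and> ttaus [g] (reset_Gv t))" for t
    using reset_Gv_props o(1) unfolding shapes_def by auto
  have "\<forall>t\<in>#image_mset reset_Gv (filter_mset ?P T). t \<noteq> [] \<and> (\<exists>g. cstep C Tau {#[C], [g]#} \<and> ttaus [g] t)"
    using cpp shape_of_nonempty[of C] by auto
  from spawn_many[OF this] have 2: "mtaus (add_mset [C] (filter_mset (\<lambda>t. \<not> ?P t) T')) (add_mset [C] ?T'')" .
  have okT'': "shapes C ?T''" using o cpp by (auto simp: shapes_def)
  have "views view_C (image_mset reset_Gv (filter_mset ?P T)) = {#}" using cpp by (intro views_all_none) auto
  then have "views view_C ?T'' = views view_C T'" using views_filter_some[of view_C T'] by simp
  then have p1: "phase_equiv C T ?T''" using o okT'' a unfolding phase_equiv_def by simp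
  have bind: "\<forall>t\<in>#filter_mset (\<lambda>t. \<not> ?P t) Y. view_of Ph t = Option.bind (view_C t) ?h" if "shapes C Y" for Y
  proof
    fix t assume "t \<in># filter_mset (\<lambda>t. \<not> ?P t) Y"
    then have "shape_C t" "view_C t \<noteq> None" using that unfolding shapes_def by auto
    then show "view_of Ph t = Option.bind (view_C t) ?h" using Ph
    proof (cases rule: shape_C_cases)
      case p then show ?thesis using pure_C_view_C \<open>view_C t \<noteq> None\<close> by simp
    qed (auto simp: view_C_def view_I_def view_S_def view_C_to_I_def view_C_to_S_def)
  qed
  have e1: "views (view_of Ph) (filter_mset (\<lambda>t. \<not> ?P t) T') = views (view_of Ph) (filter_mset (\<lambda>t. \<not> ?P t) T)"
    using views_bind[OF bind[OF o(2)]] views_bind[OF bind[OF o(1)]] views_filter_some[of view_C T] views_filter_some[of view_C T'] a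
    by simp
  have e2: "views (view_of Ph) (image_mset reset_Gv (filter_mset ?P T)) = views (view_of Ph) (filter_mset ?P T)"
    using cpp Ph by (intro views_image_same) auto
  have "views (view_of Ph) T = views (view_of Ph) (filter_mset (\<lambda>t. \<not> ?P t) T) + views (view_of Ph) (filter_mset ?P T)"
    using multiset_split_filter[of T ?P] by (metis views_plus)
  then have "views (view_of Ph) ?T'' = views (view_of Ph) T" using e1 e2 by simp
  moreover have "shapes Ph T" "shapes Ph ?T''" using o okT'' Ph by (auto simp: shapes_IS)
  ultimately have p2: "phase_equiv Ph T ?T''" unfolding phase_equiv_def by simp
  show ?thesis using 1 2 p1 p2 by (meson rtranclp_trans)
qed

definition view_IS_to_C' :: "'s tview \<Rightarrow> 's tview option" where
  "view_IS_to_C' v = (case v of Rigid x \<Rightarrow> Some (Rigid x) | _ \<Rightarrow> None)"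

lemma switch_IS_C':
  assumes "phase_equiv Ph T T'" and Ph: "Ph = I \<or> Ph = S"
  shows "phase_equiv C' T T'"
proof -
  have o: "shapes C T" "shapes C T'" and a: "views (view_of Ph) T = views (view_of Ph) T'" using assms unfolding phase_equiv_def by (auto simp: shapes_IS)
  have bind: "\<forall>t\<in>#Y. view_C' t = Option.bind (view_of Ph t) view_IS_to_C'" if "shapes C Y" for Y
  proof
    fix t assume "t \<in># Y"
    then have "shape_C t" using that unfolding shapes_def by auto
    then show "view_C' t = Option.bind (view_of Ph t) view_IS_to_C'" using Ph
    proof (cases rule: shape_C_cases)
      case p
      have "view_C' t = None" using p pure_C_head view_C'_basic by metis
      then show ?thesis using view_I_pure[OF p] view_S_pure[OF p] Ph by (auto simp: view_IS_to_C'_def)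
    qed (auto simp: view_C'_def view_I_def view_S_def view_IS_to_C'_def)
  qed
  have "views view_C' T = views view_C' T'" using views_bind[OF bind[OF o(1)]] views_bind[OF bind[OF o(2)]] a by simp
  moreover have "shapes C' T" "shapes C' T'" using o shape_C_shape_C' unfolding shapes_def by auto
  ultimately show ?thesis unfolding phase_equiv_def by simp
qed

lemma switch_C'_end:
  assumes "phase_equiv C' T T'"
  shows "mtaus (add_mset [C'] T') (add_mset [C'] T)"
proof -
  let ?P = "\<lambda>t. view_C' t = None"
  have o: "shapes C' T" "shapes C' T'" and a: "views view_C' T = views view_C' T'" using assms unfolding phase_equiv_def by auto
  have 1: "mtaus (add_mset [C'] T') (add_mset [C'] (filter_mset (\<lambda>t. \<not> ?P t) T'))"
    using vanish_filtered[of C' ?P T' "[C']", OF _ o(2)] vanish_C' multiset_split_filter[of T' ?P] by simp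
  have "\<forall>t\<in>#filter_mset ?P T. t \<noteq> [] \<and> (\<exists>g. cstep C' Tau {#[C'], [g]#} \<and> ttaus [g] t)"
    using o(1) spawn_C' shape_of_nonempty[of C'] unfolding shapes_def by (auto simp: cstep_C')
  from spawn_many[OF this] have 2: "mtaus (add_mset [C'] (filter_mset (\<lambda>t. \<not> ?P t) T'))
      (add_mset [C'] (filter_mset (\<lambda>t. \<not> ?P t) T' + filter_mset ?P T))" .
  have rig: "\<forall>t\<in>#Y. view_C' t \<noteq> None \<longrightarrow> view_C' t = Some (Rigid t)" for Y
    by (auto simp: view_C'_def split: list.splits const.splits)
  have im: "views view_C' Y = image_mset Rigid (filter_mset (\<lambda>t. \<not> ?P t) Y)" for Y
    unfolding views_def using rig[of Y] by (intro image_mset_cong) auto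
  have "image_mset Rigid (filter_mset (\<lambda>t. \<not> ?P t) T) = image_mset Rigid (filter_mset (\<lambda>t. \<not> ?P t) T') + {#}"
    using a im by simp
  from image_mset_eq_image_mset_plusD[OF this] have "filter_mset (\<lambda>t. \<not> ?P t) T = filter_mset (\<lambda>t. \<not> ?P t) T'"
    by (auto simp: inj_on_def)
  then have "filter_mset (\<lambda>t. \<not> ?P t) T' + filter_mset ?P T = T" using multiset_split_filter[of T ?P] by simp
  then show ?thesis using rtranclp_trans[OF 1 2] by simp
qed

lemma basic_noctrl: "basic x \<Longrightarrow> \<not> is_ctrl x"
  unfolding basic_def uv_const_def Wset_def is_ctrl_def by auto

lemma shape_C'_noctrl: assumes "shape_C' t" shows "\<forall>x\<in>set t. \<not> is_ctrl x"
  using assms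
proof -
  have basic_list_nc: "basic_list g \<Longrightarrow> \<forall>x\<in>set g. \<not> is_ctrl x" for g using basic_noctrl by blast
  have nc: "\<not> is_ctrl Gu" "\<not> is_ctrl Gv" "\<not> is_ctrl Gv'" "\<not> is_ctrl G" "\<not> is_ctrl G'" "\<not> is_ctrl Z"
    by (auto simp: is_ctrl_def)
  from assms show ?thesis
  proof (cases rule: shape_C'_cases)
    case gu then show ?thesis using nc by (auto simp: is_ctrl_def)
  next
    case gv' then show ?thesis using basic_list_nc[OF uv_list_basic_list[OF uv_list_vs_us[OF gv'(1,2)]]] nc by auto
  next
    case g then show ?thesis using basic_list_nc[OF uv_list_basic_list[OF g(1)]] nc by auto
  next
    case g2 then show ?thesis using basic_list_nc[OF g2(1)] nc by auto
  next
    case gv then show ?thesis using basic_list_nc[OF gv(1)] nc by auto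
  next
    case z then show ?thesis using basic_list_nc[OF z(1)] nc by auto
  next
    case p then show ?thesis using basic_list_nc unfolding pure_C'_def by auto
  qed
qed

lemma shape_of_noctrl: "c \<in> phases \<Longrightarrow> shape_of c t \<Longrightarrow> \<forall>x\<in>set t. \<not> is_ctrl x"
  unfolding phases_def using shape_C'_noctrl shape_C_shape_C' shape_D_shape_C by (auto simp: shape_of_def split: if_splits)

lemma phase_ctrl: "c \<in> phases \<Longrightarrow> is_ctrl c"
  unfolding phases_def is_ctrl_def by auto

lemma wf_conf_phase: "c \<in> phases \<Longrightarrow> shapes c T \<Longrightarrow> wf_conf (add_mset [c] T)"
  unfolding wf_conf_def shapes_def using shape_of_noctrl shape_of_nonempty by fastforce

definition base_rel :: "'s const list multiset \<Rightarrow> 's const list multiset \<Rightarrow> bool" where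
  "base_rel m n \<longleftrightarrow> (m = n \<and> wf_conf m) \<or> (m = {#[X]#} \<and> n = {#[Y]#}) \<or>
     (m = {#[X]#} \<and> (\<exists>T'. n = add_mset [D] T' \<and> phase_equiv D {#} T')) \<or> phase_rel m n"

definition bisim_rel :: "'s const list multiset \<Rightarrow> 's const list multiset \<Rightarrow> bool" where
  "bisim_rel m n \<longleftrightarrow> base_rel m n \<or> base_rel n m"

lemma bisim_rel_sym: "bisim_rel m n \<Longrightarrow> bisim_rel n m" unfolding bisim_rel_def by blast
lemma bisim_rel_id: "wf_conf m \<Longrightarrow> bisim_rel m m" unfolding bisim_rel_def base_rel_def by blast
lemma bisim_rel_phase_rel: "phase_rel m n \<Longrightarrow> bisim_rel m n" unfolding bisim_rel_def base_rel_def by blast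
lemma bisim_rel_phI: "c \<in> phases \<Longrightarrow> phase_equiv c T T' \<Longrightarrow> bisim_rel (add_mset [c] T) (add_mset [c] T')"
  using bisim_rel_phase_rel phase_rel_I by blast

lemma mem_ctrl_thread:
  assumes "c \<in> phases" "shapes c T" "add_mset t m0 = add_mset [c] T" "\<not> is_ctrl (hd t) \<or> t \<noteq> [hd t]"
  shows "t \<in># T \<and> m0 = add_mset [c] (T - {#t#})"
proof -
  have "t \<noteq> [c]" using assms(4) phase_ctrl[OF assms(1)] by auto
  with assms(3) obtain K where "m0 = add_mset [c] K" "T = add_mset t K"
    by (auto simp: add_eq_conv_ex)
  then show ?thesis by simp
qed

lemma tstep_matched:
  assumes "c \<in> phases" "shape_of c t" "tstep t l t'"
  shows "thread_matched c t l t'"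
  using assms thread_matched_D[of t l t'] thread_matched_C[of t l t'] thread_matched_I[of t l t']
    thread_matched_S[of t l t'] thread_matched_C'[of t l t']
  unfolding phases_def by auto

lemma phase_rel_matched_tstep:
  assumes c: "c \<in> phases" and p: "phase_equiv c T T'"
    and m: "add_mset t m0 = add_mset [c] T" "tstep t l t'"
  shows "matched bisim_rel (add_mset [c] T) (add_mset [c] T') l (m0 + thread_mset t')"
proof -
  have okT: "shapes c T" using p unfolding phase_equiv_def by auto
  have "\<not> is_ctrl (hd t) \<or> t \<noteq> [hd t]" using m(2) tstep_ctrl by (cases t) auto
  then have tT: "t \<in># T" "m0 = add_mset [c] (T - {#t#})" using mem_ctrl_thread[OF c okT] m(1) by auto
  define T0 where "T0 = T - {#t#}"
  have T: "T = add_mset t T0" using tT T0_def by simp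
  have "shape_of c t" using okT tT(1) unfolding shapes_def by auto
  from thread_step_matched[OF c p T shape_of_close[OF c this m(2)] tstep_matched[OF c this m(2)]]
  have "matched phase_rel (add_mset [c] T) (add_mset [c] T') l (add_mset [c] (T0 + thread_mset t'))" .
  then show ?thesis using tT(2) T0_def bisim_rel_phase_rel by (auto intro: matched_mono)
qed

lemma ctrl_matched_D:
  assumes p: "phase_equiv D T T'" and s: "cstep D l r"
  shows "matched bisim_rel (add_mset [D] T) (add_mset [D] T') l (T + r)"
  using s unfolding cstep_D
proof (elim disjE conjE)
  assume l: "l = Tau" "r = {#[D], [Gu]#}"
  have "phase_equiv D (add_mset [Gu] T) T'"
    using p shape_D_GuI[of "[]" "[Gu]"] unfolding phase_equiv_def by (simp add: view_D_def)
  then have "bisim_rel (add_mset [D] (add_mset [Gu] T)) (add_mset [D] T')" by (intro bisim_rel_phI) auto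
  then show ?thesis using l unfolding matched_def by (simp add: add_mset_commute)
next
  assume l: "l = LD" "r = {#[C]#}"
  from switch_D_C[OF p] obtain T'' where
    t: "mtaus (add_mset [D] T') (add_mset [D] T'')" "phase_equiv D T T''" "phase_equiv C T T''" by blast
  have "mstep (add_mset [D] T'') LD (add_mset [C] T'')" using cstep_mstep[of D LD "{#[C]#}"] by (simp add: cstep_D)
  moreover have "bisim_rel (add_mset [D] T) (add_mset [D] T'')" using bisim_rel_phI[of D T T''] t(2) by simp
  moreover have "bisim_rel (add_mset [C] T) (add_mset [C] T'')" using bisim_rel_phI[of C T T''] t(3) by simp
  ultimately show ?thesis using t(1) l unfolding matched_def by auto
qed

lemma ctrl_matched_C_switch:
  assumes p: "phase_equiv C T T'" and Ph: "Ph = I \<or> Ph = S" and s: "cstep C l {#[Ph]#}"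
  shows "matched bisim_rel (add_mset [C] T) (add_mset [C] T') l (add_mset [Ph] T)"
proof -
  from switch_C_IS[OF p Ph] obtain T'' where
    t: "mtaus (add_mset [C] T') (add_mset [C] T'')" "phase_equiv C T T''" "phase_equiv Ph T T''" by blast
  have "mstep (add_mset [C] T'') l (add_mset [Ph] T'')" using cstep_mstep[OF s] by simp
  moreover have "bisim_rel (add_mset [C] T) (add_mset [C] T'')" using bisim_rel_phI[of C T T''] t(2) by simp
  moreover have "bisim_rel (add_mset [Ph] T) (add_mset [Ph] T'')" using bisim_rel_phI[of Ph T T''] t(3) Ph by auto
  ultimately show ?thesis using t(1) unfolding matched_def by blast
qed

lemma ctrl_matched_C:
  assumes p: "phase_equiv C T T'" and s: "cstep C l r"
  shows "matched bisim_rel (add_mset [C] T) (add_mset [C] T') l (T + r)"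
  using s unfolding cstep_C
proof (elim disjE conjE)
  assume "l = LI" "r = {#[I]#}"
  then show ?thesis using ctrl_matched_C_switch[OF p, of I l] s by simp
next
  assume "l = LS" "r = {#[S]#}"
  then show ?thesis using ctrl_matched_C_switch[OF p, of S l] s by simp
next
  assume l: "l = Tau" "r = {#[C], [G]#}"
  have "phase_equiv C (add_mset [G] T) (add_mset [G] T')"
    using p shape_C_GI[of "[]" "[G]"] unfolding phase_equiv_def by (simp add: view_C_def)
  then have "bisim_rel (add_mset [C] (add_mset [G] T)) (add_mset [C] (add_mset [G] T'))"
    by (intro bisim_rel_phI) auto
  moreover have "mstep (add_mset [C] T') Tau (T' + r)" using cstep_mstep s l by blast
  moreover have "bisim_rel (add_mset [C] T) (add_mset [C] T')" using bisim_rel_phI[of C T T'] p by simp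
  ultimately show ?thesis using l unfolding matched_def by (auto simp: add_mset_commute)
next
  assume l: "l = Tau" "r = {#[C], [Gv]#}"
  have "phase_equiv C (add_mset [Gv] T) T'"
    using p shape_C_GvI[of "[]" "[Gv]"] unfolding phase_equiv_def by (simp add: view_C_def realized_def)
  then have "bisim_rel (add_mset [C] (add_mset [Gv] T)) (add_mset [C] T')" by (intro bisim_rel_phI) auto
  then show ?thesis using l unfolding matched_def by (simp add: add_mset_commute)
qed

lemma ctrl_matched_IS:
  assumes p: "phase_equiv Ph T T'" and Ph: "Ph = I \<or> Ph = S" and s: "cstep Ph l r"
  shows "matched bisim_rel (add_mset [Ph] T) (add_mset [Ph] T') l (T + r)"
proof -
  have rel: "bisim_rel (add_mset [Ph] T) (add_mset [Ph] T')" using p Ph bisim_rel_phI by auto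
  from s Ph consider "r = {#[C']#}" | "r = {#[Ph]#}" by (auto simp: cstep_I cstep_S)
  then show ?thesis
  proof cases
    case 1
    have "mstep (add_mset [Ph] T') l (add_mset [C'] T')" using cstep_mstep[of Ph l r T'] s 1 by simp
    moreover have "bisim_rel (add_mset [C'] T) (add_mset [C'] T')"
      using switch_IS_C'[OF p Ph] bisim_rel_phI[of C'] by simp
    ultimately show ?thesis using 1 rel unfolding matched_def by auto
  next
    case 2
    have "mstep (add_mset [Ph] T') l (add_mset [Ph] T')" using cstep_mstep[of Ph l r T'] s 2 by simp
    then show ?thesis using 2 rel unfolding matched_def by auto
  qed
qed

lemma ctrl_matched_C':
  assumes p: "phase_equiv C' T T'" and s: "cstep C' l r"
  shows "matched bisim_rel (add_mset [C'] T) (add_mset [C'] T') l (T + r)"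
  using s unfolding cstep_C'
proof (elim disjE conjE)
  assume l: "l = Tau" "r = {#[C'], [G']#}"
  have "phase_equiv C' (add_mset [G'] T) T'"
    using p shape_C'_G'I[of "[]" "[G']"] unfolding phase_equiv_def by (simp add: view_C'_def)
  then have "bisim_rel (add_mset [C'] (add_mset [G'] T)) (add_mset [C'] T')" by (intro bisim_rel_phI) auto
  then show ?thesis using l unfolding matched_def by (simp add: add_mset_commute)
next
  assume l: "l = Tau" "r = {#}"
  have wf: "wf_conf (add_mset [C'] T)" using wf_conf_phase p unfolding phase_equiv_def by simp
  then have "wf_conf T" unfolding wf_conf_def by simp
  moreover have "mtaus (add_mset [C'] T') (add_mset [C'] T)" using switch_C'_end[OF p] .
  moreover have "mstep (add_mset [C'] T) Tau T" using cstep_mstep[of C' Tau "{#}" T] by (simp add: cstep_C')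
  ultimately show ?thesis using l wf bisim_rel_id unfolding matched_def by auto
qed

lemma ctrl_matched:
  assumes "c \<in> phases" "phase_equiv c T T'" "cstep c l r"
  shows "matched bisim_rel (add_mset [c] T) (add_mset [c] T') l (T + r)"
  using assms ctrl_matched_D ctrl_matched_C ctrl_matched_IS ctrl_matched_C' unfolding phases_def by auto

lemma phase_rel_matched:
  assumes "phase_rel m n" "mstep m l m'"
  shows "matched bisim_rel m n l m'"
proof -
  from assms(1) obtain c T T' where c: "c \<in> phases" and mn: "m = add_mset [c] T" "n = add_mset [c] T'"
    and p: "phase_equiv c T T'" unfolding phase_rel_def by blast
  from assms(2)[unfolded mstep_def] show ?thesis
  proof (elim disjE exE conjE)
    fix t t' m0 assume a: "m = add_mset t m0" "tstep t l t'" "m' = m0 + thread_mset t'"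
    then have "add_mset t m0 = add_mset [c] T" using mn(1) by simp
    from phase_rel_matched_tstep[OF c p this a(2)] show ?thesis using a(3) mn by simp
  next
    fix x r m0 assume a: "m = add_mset [x] m0" "cstep x l r" "m' = m0 + r"
    have "is_ctrl x" using a(2) unfolding cstep_def by auto
    moreover have "shapes c T" using p unfolding phase_equiv_def by auto
    ultimately have "[x] \<notin># T" using shape_of_noctrl[OF c] unfolding shapes_def by fastforce
    then have "x = c" "m0 = T" using a(1) mn(1) by (metis insert_noteq_member list.inject add_eq_conv_ex)+
    then show ?thesis using ctrl_matched[OF c p] a mn by simp
  qed
qed

lemma wf_conf_single: "is_ctrl x \<Longrightarrow> wf_conf {#[x]#}"
  unfolding wf_conf_def by auto

lemma ctrl_XYD[simp]: "is_ctrl X" "is_ctrl Y" "is_ctrl D"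
  by (auto simp: is_ctrl_def)

lemma mstep_single: "is_ctrl x \<Longrightarrow> mstep {#[x]#} l m' \<Longrightarrow> cstep x l m'"
  unfolding mstep_def
proof (elim disjE exE conjE)
  fix t t' m0 assume "is_ctrl x" "{#[x]#} = add_mset t m0" "tstep t l t'"
  then show "cstep x l m'" using tstep_ctrl[of x "[]" l t'] by (metis add_mset_eq_single)
next
  fix y r m0 assume "{#[x]#} = add_mset [y] m0" "cstep y l r" "m' = m0 + r"
  then show "cstep x l m'" by (metis add_0 add_mset_eq_single list.inject)
qed

lemma bisim_rel_D_X: "bisim_rel n' {#[D]#} \<Longrightarrow> bisim_rel n' {#[X]#}"
proof -
  assume "bisim_rel n' {#[D]#}"
  then consider "n' = {#[D]#}" | "n' = {#[X]#}" | T'' where "n' = add_mset [D] T''" "phase_equiv D {#} T''"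
    unfolding bisim_rel_def base_rel_def phase_rel_def
    by (auto simp: phase_equiv_def add_mset_eq_single)
  then show ?thesis
  proof cases
    case 1
    have "phase_equiv D {#} {#}" by (simp add: phase_equiv_def)
    then show ?thesis using 1 unfolding bisim_rel_def base_rel_def by blast
  next
    case 2 then show ?thesis using bisim_rel_id wf_conf_single by simp
  next
    case 3 then show ?thesis unfolding bisim_rel_def base_rel_def by blast
  qed
qed

lemma D_conf_matched_by_X:
  assumes "phase_equiv D {#} T'" "mstep (add_mset [D] T') l n'"
  shows "matched bisim_rel (add_mset [D] T') {#[X]#} l n'"
proof -
  have "phase_equiv D T' {#}" using assms(1) unfolding phase_equiv_def by auto
  then have "phase_rel (add_mset [D] T') {#[D]#}" using phase_rel_I[of D T' "{#}"] by simp
  from phase_rel_matched[OF this assms(2)] consider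
      (step) p'' p' where "mtaus {#[D]#} p''" "mstep p'' l p'" "bisim_rel (add_mset [D] T') p''" "bisim_rel n' p'"
    | (tau) "l = Tau" "bisim_rel n' {#[D]#}"
    unfolding matched_def by blast
  then show ?thesis
  proof cases
    case step
    have "mstep {#[X]#} Tau {#[D]#}" using cstep_mstep[of X Tau "{#[D]#}" "{#}"] by (simp add: cstep_X)
    from converse_rtranclp_into_rtranclp[OF this step(1)] have "mtaus {#[X]#} p''" .
    then show ?thesis using step unfolding matched_def by blast
  next
    case tau then show ?thesis using bisim_rel_D_X unfolding matched_def by blast
  qed
qed

text \<open>This is where the solution is used: the \<open>Gv\<close>-thread it produces is realized.\<close>

lemma X_LU_matched:
  assumes solv: "sol \<noteq> []" "set sol \<subseteq> Ix" "concat (map uu sol) = concat (map vv sol)"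
    and T': "mtaus n (add_mset [D] T')" "phase_equiv D {#} T'"
  shows "\<exists>n'' n'. mtaus n n'' \<and> mstep n'' LU n' \<and> bisim_rel {#[X]#} n'' \<and> bisim_rel {#[D], [Gv]#} n'"
proof -
  have okT': "shapes D T'" and amT': "views view_D T' = {#}" using T'(2) unfolding phase_equiv_def by auto
  obtain i1 a' where sa: "sol = i1 # a'" using solv(1) by (cases sol) auto
  let ?gu = "Gu # map U a'" and ?gv = "Gv # map U sol"
  have "ttaus [Gu] ?gu" using Gu_grow[of a' "[]"] solv(2) sa by simp
  then have "mtaus (add_mset [D] T') (add_mset [D] (add_mset ?gu T'))"
    using spawn_thread[of D Gu ?gu T'] by (simp add: cstep_D)
  then have 1: "mtaus n (add_mset [D] (add_mset ?gu T'))" using rtranclp_trans[OF T'(1)] by blast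
  have "tstep ?gu LU ?gv" using sa solv(2) by (simp add: tstep_Gu)
  then have "mstep (add_mset ?gu (add_mset [D] T')) LU (add_mset [D] T' + thread_mset ?gv)"
    unfolding mstep_def by blast
  then have 2: "mstep (add_mset [D] (add_mset ?gu T')) LU (add_mset [D] (add_mset ?gv T'))"
    by (simp add: add_mset_commute)
  have "shape_D ?gu" using shape_D_GuI[of a' ?gu] solv(2) sa by simp
  then have "phase_equiv D {#} (add_mset ?gu T')" using okT' amT' by (simp add: phase_equiv_def view_D_def)
  then have 3: "bisim_rel {#[X]#} (add_mset [D] (add_mset ?gu T'))" unfolding bisim_rel_def base_rel_def by blast
  have "realized (map U sol)" using solv(3) by (simp add: realized_def v_str_def)
  moreover have "shape_D ?gv" using shape_D_GvI[of "[]" sol ?gv] solv(2) by simp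
  moreover have "shape_D [Gv]" using shape_D_GvI[of "[]" "[]" "[Gv]"] by simp
  ultimately have "phase_equiv D {#[Gv]#} (add_mset ?gv T')" using okT' amT'
    by (simp add: phase_equiv_def view_D_def realized_def)
  then have 4: "bisim_rel {#[D], [Gv]#} (add_mset [D] (add_mset ?gv T'))"
    using bisim_rel_phI[of D "{#[Gv]#}"] by (simp add: add_mset_commute)
  show ?thesis using 1 2 3 4 by blast
qed

lemma X_matched:
  assumes solv: "sol \<noteq> []" "set sol \<subseteq> Ix" "concat (map uu sol) = concat (map vv sol)"
    and n: "n = {#[Y]#} \<or> (\<exists>T'. n = add_mset [D] T' \<and> phase_equiv D {#} T')"
    and m: "mstep {#[X]#} l m'"
  shows "matched bisim_rel {#[X]#} n l m'"
proof -
  have Y_D: "mstep {#[Y]#} Tau {#[D]#}" using cstep_mstep[of Y Tau "{#[D]#}" "{#}"] by (simp add: cstep_Y)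
  obtain T' where T': "mtaus n (add_mset [D] T')" "phase_equiv D {#} T'"
  proof (cases "n = {#[Y]#}")
    case True
    then have "mtaus n (add_mset [D] {#})" using Y_D by (simp add: r_into_rtranclp)
    moreover have "phase_equiv D {#} {#}" by (simp add: phase_equiv_def)
    ultimately show ?thesis using that by blast
  qed (use n that in blast)
  from mstep_single[OF ctrl_XYD(1) m] have "cstep X l m'" .
  then consider (lu) "l = LU" "m' = {#[D], [Gv]#}" | (tau) "l = Tau" "m' = {#[D]#}" by (auto simp: cstep_X)
  then show ?thesis
  proof cases
    case lu
    then show ?thesis using X_LU_matched[OF solv T'] unfolding matched_def by auto
  next
    case tau
    show ?thesis
    proof (cases "n = {#[Y]#}")
      case True
      have "bisim_rel {#[X]#} n" using n unfolding bisim_rel_def base_rel_def by blast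
      moreover have "bisim_rel {#[D]#} {#[D]#}" using bisim_rel_id wf_conf_single by simp
      ultimately show ?thesis using True tau Y_D unfolding matched_def by blast
    next
      case False
      then obtain T2 where "n = add_mset [D] T2" "phase_equiv D {#} T2" using n by blast
      then have "bisim_rel {#[D]#} n" using bisim_rel_phI[of D "{#}" T2] by simp
      then show ?thesis using tau unfolding matched_def by blast
    qed
  qed
qed

lemma mbisim_bisim_rel:
  assumes solv: "sol \<noteq> []" "set sol \<subseteq> Ix" "concat (map uu sol) = concat (map vv sol)"
  shows "mbisim bisim_rel"
  unfolding mbisim_def
proof (rule conjI; intro allI impI)
  fix m n assume "bisim_rel m n"
  have "wf_conf a \<and> wf_conf b" if "base_rel a b" for a b
    using that wf_conf_single wf_conf_phase unfolding base_rel_def phase_rel_def phase_equiv_def by auto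
  then show "wf_conf m \<and> wf_conf n \<and> bisim_rel n m"
    using \<open>bisim_rel m n\<close> bisim_rel_sym unfolding bisim_rel_def by blast
next
  fix m n l m' assume a: "bisim_rel m n \<and> mstep m l m'"
  have phase_rel_sym: "phase_rel a b \<Longrightarrow> phase_rel b a" for a b
    unfolding phase_rel_def phase_equiv_def by metis
  from a have "base_rel m n \<or> base_rel n m" unfolding bisim_rel_def by blast
  then consider (id) "n = m" "wf_conf m"
    | (X) "m = {#[X]#}" "n = {#[Y]#} \<or> (\<exists>T'. n = add_mset [D] T' \<and> phase_equiv D {#} T')"
    | (YX) "m = {#[Y]#}" "n = {#[X]#}"
    | (DX) T' where "n = {#[X]#}" "m = add_mset [D] T'" "phase_equiv D {#} T'"
    | (phase) "phase_rel m n"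
    unfolding base_rel_def using phase_rel_sym by blast
  then show "matched bisim_rel m n l m'"
  proof cases
    case id
    then have "bisim_rel m' m'" using bisim_rel_id wf_conf_mstep a by blast
    then show ?thesis using id a bisim_rel_id unfolding matched_def by blast
  next
    case X then show ?thesis using X_matched[OF solv] a by blast
  next
    case YX
    from mstep_single[OF ctrl_XYD(2)] a YX have "cstep Y l m'" by simp
    then have l: "l = Tau" "m' = {#[D]#}" by (auto simp: cstep_Y)
    have "mstep {#[X]#} Tau {#[D]#}" using cstep_mstep[of X Tau "{#[D]#}" "{#}"] by (simp add: cstep_X)
    moreover have "bisim_rel {#[Y]#} {#[X]#}" unfolding bisim_rel_def base_rel_def by blast
    moreover have "bisim_rel {#[D]#} {#[D]#}" using bisim_rel_id wf_conf_single by simp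
    ultimately show ?thesis using l YX unfolding matched_def by blast
  next
    case DX then show ?thesis using D_conf_matched_by_X a by blast
  next
    case phase then show ?thesis using phase_rel_matched a by blast
  qed
qed

lemma XY_bisim:
  assumes "sol \<noteq> []" "set sol \<subseteq> Ix" "concat (map uu sol) = concat (map vv sol)"
  shows "branching_bisimilar Delta Tau (Cst X) (Cst Y)"
proof -
  have "bisim_rel {#[X]#} {#[Y]#}" unfolding bisim_rel_def base_rel_def by blast
  then show ?thesis using mbisim_bisim[OF mbisim_bisim_rel[OF assms]] by simp
qed

end

theorem lemma6:
  fixes Sig :: "'s set" and inst :: "'s pcp"
  assumes "finite Sig" and "card Sig \<ge> 2"
    and "\<forall>(u, v) \<in> set inst. u \<noteq> [] \<and> v \<noteq> [] \<and> set u \<subseteq> Sig \<and> set v \<subseteq> Sig"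
    and "pcp_solvable inst"
  shows "branching_bisimilar (rulesG Sig inst) Tau (Cst X) (Cst Y)"
proof -
  interpret pcp_algebra Sig inst using assms(3) by unfold_locales
  from assms(4) obtain sol where "sol \<noteq> []" "set sol \<subseteq> idx inst"
    "concat (map (uw inst) sol) = concat (map (vw inst) sol)" unfolding pcp_solvable_def by blast
  then show ?thesis using XY_bisim by blast
qed

end
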